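(* Let $P:\mathcal C^{op}\to\mathbf{InfSL}$ be an arithmetic doctrine with comprehensive diagonals. Then $P$ satisfies the Countable Axiom of Choice $(\mathrm{AC}_{\mathbf N})$ if and only if its elementary quotient completion $\overline P$ satisfies $(\mathrm{AC}_{\mathbf N})$.
   Context: A doctrine $P$ is arithmetic if it is a weak hyperdoctrine (elementary doctrine over a weakly cartesian closed base, with Heyting fibres, Heyting reindexing, and left and right adjoints to reindexing along product projections satisfying Beck–Chevalley) and $\mathcal C$ has a parameterized natural number object $(\mathbf N,0,s)$ satisfying induction in $P$ (for $\phi\in P(A\times\mathbf N)$, $a\vdash\phi(a,0)$ and $\phi(a,m)\vdash\phi(a,s(m))$ imply $a,n\vdash\phi(a,n)$). Comprehensive diagonals: $f,g:X\to Y$ are equal whenever $\top\vdash f(x)=_Yg(x)$. The Axiom of Choice holds on $A$ if for every $B$ and $R\in P(A\times B)$: $\forall a.\exists b.R(a,b)\vdash\exists f:W.\forall a.R(a,ev(f,a))$ for a weak evaluation $ev:W\times A\to B$; $(\mathrm{AC}_{\mathbf N})$ is the Axiom of Choice on the natural number object (in $\mathcal Q_P$ this is $(\mathbf N,\delta_{\mathbf N})$). The elementary quotient completion $\overline P:\mathcal Q_P^{op}\to\mathbf{InfSL}$ has objects $(A,\rho)$ with $\rho$ a $P$-equivalence relation, arrows equivalence classes of relation-preserving arrows of $\mathcal C$, and $\overline P(A,\rho)=\{\alpha\in P(A)\mid\alpha(a)\wedge\rho(a,a')\vdash\alpha(a')\}$. *)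

theory Defs
  imports Main
begin

section \<open>Doctrines over categories with chosen finite products\<close>

text \<open>A (primary) doctrine P over a base category C with chosen finite products.
  Objects of C have type 'o, arrows type 'm, elements of the fibres type 'p.
  d_cmp g f is the composite g after f; d_pr f g is the pairing of f and g;
  d_rx f is reindexing P(f) along f; d_le A is the order of the fibre P(A);
  d_tp A and d_mt A are top and binary meet of P(A).\<close>

record ('o, 'm, 'p) doctrine =
  d_ob  :: "'o set"
  d_hom :: "'o \<Rightarrow> 'o \<Rightarrow> 'm set"
  d_cmp :: "'m \<Rightarrow> 'm \<Rightarrow> 'm"
  d_idt :: "'o \<Rightarrow> 'm"
  d_trm :: "'o"
  d_prd :: "'o \<Rightarrow> 'o \<Rightarrow> 'o"
  d_pi1 :: "'o \<Rightarrow> 'o \<Rightarrow> 'm"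
  d_pi2 :: "'o \<Rightarrow> 'o \<Rightarrow> 'm"
  d_pr  :: "'m \<Rightarrow> 'm \<Rightarrow> 'm"
  d_fib :: "'o \<Rightarrow> 'p set"
  d_le  :: "'o \<Rightarrow> 'p \<Rightarrow> 'p \<Rightarrow> bool"
  d_tp  :: "'o \<Rightarrow> 'p"
  d_mt  :: "'o \<Rightarrow> 'p \<Rightarrow> 'p \<Rightarrow> 'p"
  d_rx  :: "'m \<Rightarrow> 'p \<Rightarrow> 'p"

definition bang :: "('o,'m,'p) doctrine \<Rightarrow> 'o \<Rightarrow> 'm" where
  "bang D A = (SOME t. t \<in> d_hom D A (d_trm D))"

definition times :: "('o,'m,'p) doctrine \<Rightarrow> 'o \<Rightarrow> 'o \<Rightarrow> 'm \<Rightarrow> 'm \<Rightarrow> 'm" where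
  "times D X Y h k = d_pr D (d_cmp D h (d_pi1 D X Y)) (d_cmp D k (d_pi2 D X Y))"

definition diag :: "('o,'m,'p) doctrine \<Rightarrow> 'o \<Rightarrow> 'm" where
  "diag D A = d_pr D (d_idt D A) (d_idt D A)"

definition category :: "('o,'m,'p) doctrine \<Rightarrow> bool" where
  "category D \<longleftrightarrow>
     (\<forall>A\<in>d_ob D. d_idt D A \<in> d_hom D A A) \<and>
     (\<forall>A\<in>d_ob D. \<forall>B\<in>d_ob D. \<forall>C\<in>d_ob D. \<forall>f\<in>d_hom D A B. \<forall>g\<in>d_hom D B C.
        d_cmp D g f \<in> d_hom D A C) \<and>
     (\<forall>A\<in>d_ob D. \<forall>B\<in>d_ob D. \<forall>f\<in>d_hom D A B.
        d_cmp D f (d_idt D A) = f \<and> d_cmp D (d_idt D B) f = f) \<and>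
     (\<forall>A\<in>d_ob D. \<forall>B\<in>d_ob D. \<forall>C\<in>d_ob D. \<forall>E\<in>d_ob D.
        \<forall>f\<in>d_hom D A B. \<forall>g\<in>d_hom D B C. \<forall>h\<in>d_hom D C E.
        d_cmp D h (d_cmp D g f) = d_cmp D (d_cmp D h g) f)"

definition cartesian :: "('o,'m,'p) doctrine \<Rightarrow> bool" where
  "cartesian D \<longleftrightarrow>
     d_trm D \<in> d_ob D \<and>
     (\<forall>A\<in>d_ob D. \<exists>!t. t \<in> d_hom D A (d_trm D)) \<and>
     (\<forall>A\<in>d_ob D. \<forall>B\<in>d_ob D.
        d_prd D A B \<in> d_ob D \<and>
        d_pi1 D A B \<in> d_hom D (d_prd D A B) A \<and>
        d_pi2 D A B \<in> d_hom D (d_prd D A B) B \<and>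
        (\<forall>X\<in>d_ob D. \<forall>f\<in>d_hom D X A. \<forall>g\<in>d_hom D X B.
           d_pr D f g \<in> d_hom D X (d_prd D A B) \<and>
           d_cmp D (d_pi1 D A B) (d_pr D f g) = f \<and>
           d_cmp D (d_pi2 D A B) (d_pr D f g) = g \<and>
           (\<forall>h\<in>d_hom D X (d_prd D A B).
              d_cmp D (d_pi1 D A B) h = f \<and> d_cmp D (d_pi2 D A B) h = g \<longrightarrow> h = d_pr D f g)))"

definition weak_eval :: "('o,'m,'p) doctrine \<Rightarrow> 'o \<Rightarrow> 'o \<Rightarrow> 'o \<Rightarrow> 'm \<Rightarrow> bool" where
  "weak_eval D W A B ev \<longleftrightarrow>
     W \<in> d_ob D \<and> ev \<in> d_hom D (d_prd D W A) B \<and>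
     (\<forall>X\<in>d_ob D. \<forall>g\<in>d_hom D (d_prd D X A) B.
        \<exists>h\<in>d_hom D X W. d_cmp D ev (times D X A h (d_idt D A)) = g)"

definition weakly_cc :: "('o,'m,'p) doctrine \<Rightarrow> bool" where
  "weakly_cc D \<longleftrightarrow> (\<forall>A\<in>d_ob D. \<forall>B\<in>d_ob D. \<exists>W ev. weak_eval D W A B ev)"

definition is_meet :: "('o,'m,'p) doctrine \<Rightarrow> 'o \<Rightarrow> 'p \<Rightarrow> 'p \<Rightarrow> 'p \<Rightarrow> bool" where
  "is_meet D A x y m \<longleftrightarrow> m \<in> d_fib D A \<and> d_le D A m x \<and> d_le D A m y \<and>
     (\<forall>z\<in>d_fib D A. d_le D A z x \<and> d_le D A z y \<longrightarrow> d_le D A z m)"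

definition is_join :: "('o,'m,'p) doctrine \<Rightarrow> 'o \<Rightarrow> 'p \<Rightarrow> 'p \<Rightarrow> 'p \<Rightarrow> bool" where
  "is_join D A x y j \<longleftrightarrow> j \<in> d_fib D A \<and> d_le D A x j \<and> d_le D A y j \<and>
     (\<forall>z\<in>d_fib D A. d_le D A x z \<and> d_le D A y z \<longrightarrow> d_le D A j z)"

definition is_bot :: "('o,'m,'p) doctrine \<Rightarrow> 'o \<Rightarrow> 'p \<Rightarrow> bool" where
  "is_bot D A b \<longleftrightarrow> b \<in> d_fib D A \<and> (\<forall>z\<in>d_fib D A. d_le D A b z)"

definition is_imp :: "('o,'m,'p) doctrine \<Rightarrow> 'o \<Rightarrow> 'p \<Rightarrow> 'p \<Rightarrow> 'p \<Rightarrow> bool" where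
  "is_imp D A x y i \<longleftrightarrow> i \<in> d_fib D A \<and>
     (\<forall>z\<in>d_fib D A. d_le D A z i \<longleftrightarrow> d_le D A (d_mt D A z x) y)"

definition primary_doctrine :: "('o,'m,'p) doctrine \<Rightarrow> bool" where
  "primary_doctrine D \<longleftrightarrow>
     (\<forall>A\<in>d_ob D.
        (\<forall>x\<in>d_fib D A. d_le D A x x) \<and>
        (\<forall>x\<in>d_fib D A. \<forall>y\<in>d_fib D A. \<forall>z\<in>d_fib D A.
            d_le D A x y \<and> d_le D A y z \<longrightarrow> d_le D A x z) \<and>
        (\<forall>x\<in>d_fib D A. \<forall>y\<in>d_fib D A. d_le D A x y \<and> d_le D A y x \<longrightarrow> x = y) \<and>
        d_tp D A \<in> d_fib D A \<and> (\<forall>x\<in>d_fib D A. d_le D A x (d_tp D A)) \<and>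
        (\<forall>x\<in>d_fib D A. \<forall>y\<in>d_fib D A. is_meet D A x y (d_mt D A x y))) \<and>
     (\<forall>A\<in>d_ob D. \<forall>B\<in>d_ob D. \<forall>f\<in>d_hom D A B.
        (\<forall>\<phi>\<in>d_fib D B. d_rx D f \<phi> \<in> d_fib D A) \<and>
        (\<forall>\<phi>\<in>d_fib D B. \<forall>\<psi>\<in>d_fib D B. d_le D B \<phi> \<psi> \<longrightarrow> d_le D A (d_rx D f \<phi>) (d_rx D f \<psi>)) \<and>
        d_rx D f (d_tp D B) = d_tp D A \<and>
        (\<forall>\<phi>\<in>d_fib D B. \<forall>\<psi>\<in>d_fib D B. d_rx D f (d_mt D B \<phi> \<psi>) = d_mt D A (d_rx D f \<phi>) (d_rx D f \<psi>))) \<and>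
     (\<forall>A\<in>d_ob D. \<forall>\<phi>\<in>d_fib D A. d_rx D (d_idt D A) \<phi> = \<phi>) \<and>
     (\<forall>A\<in>d_ob D. \<forall>B\<in>d_ob D. \<forall>C\<in>d_ob D. \<forall>f\<in>d_hom D A B. \<forall>g\<in>d_hom D B C. \<forall>\<phi>\<in>d_fib D C.
        d_rx D (d_cmp D g f) \<phi> = d_rx D f (d_rx D g \<phi>))"

definition heyting :: "('o,'m,'p) doctrine \<Rightarrow> bool" where
  "heyting D \<longleftrightarrow>
     (\<forall>A\<in>d_ob D. (\<exists>b. is_bot D A b) \<and>
        (\<forall>x\<in>d_fib D A. \<forall>y\<in>d_fib D A. (\<exists>j. is_join D A x y j) \<and> (\<exists>i. is_imp D A x y i))) \<and>
     (\<forall>A\<in>d_ob D. \<forall>B\<in>d_ob D. \<forall>f\<in>d_hom D A B.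
        (\<forall>b. is_bot D B b \<longrightarrow> is_bot D A (d_rx D f b)) \<and>
        (\<forall>x\<in>d_fib D B. \<forall>y\<in>d_fib D B. \<forall>j. is_join D B x y j \<longrightarrow>
            is_join D A (d_rx D f x) (d_rx D f y) (d_rx D f j)) \<and>
        (\<forall>x\<in>d_fib D B. \<forall>y\<in>d_fib D B. \<forall>i. is_imp D B x y i \<longrightarrow>
            is_imp D A (d_rx D f x) (d_rx D f y) (d_rx D f i)))"

definition is_ex :: "('o,'m,'p) doctrine \<Rightarrow> 'o \<Rightarrow> 'o \<Rightarrow> 'm \<Rightarrow> 'p \<Rightarrow> 'p \<Rightarrow> bool" where
  "is_ex D X Y f \<phi> e \<longleftrightarrow> e \<in> d_fib D Y \<and> d_le D X \<phi> (d_rx D f e) \<and>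
     (\<forall>\<psi>\<in>d_fib D Y. d_le D X \<phi> (d_rx D f \<psi>) \<longrightarrow> d_le D Y e \<psi>)"

definition is_all :: "('o,'m,'p) doctrine \<Rightarrow> 'o \<Rightarrow> 'o \<Rightarrow> 'm \<Rightarrow> 'p \<Rightarrow> 'p \<Rightarrow> bool" where
  "is_all D X Y f \<phi> e \<longleftrightarrow> e \<in> d_fib D Y \<and> d_le D X (d_rx D f e) \<phi> \<and>
     (\<forall>\<psi>\<in>d_fib D Y. d_le D X (d_rx D f \<psi>) \<phi> \<longrightarrow> d_le D Y \<psi> e)"

definition quantifiers :: "('o,'m,'p) doctrine \<Rightarrow> bool" where
  "quantifiers D \<longleftrightarrow>
     (\<forall>A\<in>d_ob D. \<forall>B\<in>d_ob D. \<forall>\<phi>\<in>d_fib D (d_prd D A B).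
        (\<exists>e. is_ex D (d_prd D A B) A (d_pi1 D A B) \<phi> e) \<and>
        (\<exists>e. is_all D (d_prd D A B) A (d_pi1 D A B) \<phi> e) \<and>
        (\<exists>e. is_ex D (d_prd D A B) B (d_pi2 D A B) \<phi> e) \<and>
        (\<exists>e. is_all D (d_prd D A B) B (d_pi2 D A B) \<phi> e))"

definition beck_chevalley :: "('o,'m,'p) doctrine \<Rightarrow> bool" where
  "beck_chevalley D \<longleftrightarrow>
     (\<forall>A\<in>d_ob D. \<forall>B\<in>d_ob D. \<forall>X\<in>d_ob D. \<forall>\<phi>\<in>d_fib D (d_prd D A B). \<forall>e.
        (\<forall>f\<in>d_hom D X A.
          (is_ex D (d_prd D A B) A (d_pi1 D A B) \<phi> e \<longrightarrow>
             is_ex D (d_prd D X B) X (d_pi1 D X B) (d_rx D (times D X B f (d_idt D B)) \<phi>) (d_rx D f e)) \<and>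
          (is_all D (d_prd D A B) A (d_pi1 D A B) \<phi> e \<longrightarrow>
             is_all D (d_prd D X B) X (d_pi1 D X B) (d_rx D (times D X B f (d_idt D B)) \<phi>) (d_rx D f e))) \<and>
        (\<forall>g\<in>d_hom D X B.
          (is_ex D (d_prd D A B) B (d_pi2 D A B) \<phi> e \<longrightarrow>
             is_ex D (d_prd D A X) X (d_pi2 D A X) (d_rx D (times D A X (d_idt D A) g) \<phi>) (d_rx D g e)) \<and>
          (is_all D (d_prd D A B) B (d_pi2 D A B) \<phi> e \<longrightarrow>
             is_all D (d_prd D A X) X (d_pi2 D A X) (d_rx D (times D A X (d_idt D A) g) \<phi>) (d_rx D g e))))"

text \<open>For every A, \<delta>_A \<in> P(A\<times>A) such that for every X the reindexing
  P(id_X \<times> \<Delta>_A) : P(X\<times>(A\<times>A)) \<rightarrow> P(X\<times>A) has as left adjoint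
  \<beta> \<mapsto> P(\<langle>p1,p2\<rangle>)(\<beta>) \<and> P(\<langle>p2,p3\<rangle>)(\<delta>_A).\<close>
definition elementary :: "('o,'m,'p) doctrine \<Rightarrow> ('o \<Rightarrow> 'p) \<Rightarrow> bool" where
  "elementary D eq \<longleftrightarrow>
     (\<forall>A\<in>d_ob D. eq A \<in> d_fib D (d_prd D A A) \<and>
       (\<forall>X\<in>d_ob D. \<forall>\<beta>\<in>d_fib D (d_prd D X A). \<forall>\<gamma>\<in>d_fib D (d_prd D X (d_prd D A A)).
          d_le D (d_prd D X (d_prd D A A))
             (d_mt D (d_prd D X (d_prd D A A))
                (d_rx D (d_pr D (d_pi1 D X (d_prd D A A))
                                (d_cmp D (d_pi1 D A A) (d_pi2 D X (d_prd D A A)))) \<beta>)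
                (d_rx D (d_pi2 D X (d_prd D A A)) (eq A)))
             \<gamma>
          \<longleftrightarrow> d_le D (d_prd D X A) \<beta> (d_rx D (times D X A (d_idt D X) (diag D A)) \<gamma>)))"

definition weak_hyperdoctrine :: "('o,'m,'p) doctrine \<Rightarrow> ('o \<Rightarrow> 'p) \<Rightarrow> bool" where
  "weak_hyperdoctrine D eq \<longleftrightarrow> category D \<and> cartesian D \<and> weakly_cc D \<and>
     primary_doctrine D \<and> elementary D eq \<and> heyting D \<and> quantifiers D \<and> beck_chevalley D"

definition pnno :: "('o,'m,'p) doctrine \<Rightarrow> 'o \<Rightarrow> 'm \<Rightarrow> 'm \<Rightarrow> bool" where
  "pnno D N z s \<longleftrightarrow> N \<in> d_ob D \<and> z \<in> d_hom D (d_trm D) N \<and> s \<in> d_hom D N N \<and>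
     (\<forall>A\<in>d_ob D. \<forall>Y\<in>d_ob D. \<forall>f\<in>d_hom D A Y. \<forall>g\<in>d_hom D Y Y.
        \<exists>!h. h \<in> d_hom D (d_prd D A N) Y \<and>
             d_cmp D h (d_pr D (d_idt D A) (d_cmp D z (bang D A))) = f \<and>
             d_cmp D h (times D A N (d_idt D A) s) = d_cmp D g h)"

definition induction :: "('o,'m,'p) doctrine \<Rightarrow> 'o \<Rightarrow> 'm \<Rightarrow> 'm \<Rightarrow> bool" where
  "induction D N z s \<longleftrightarrow>
     (\<forall>A\<in>d_ob D. \<forall>\<phi>\<in>d_fib D (d_prd D A N).
        d_le D A (d_tp D A) (d_rx D (d_pr D (d_idt D A) (d_cmp D z (bang D A))) \<phi>) \<and>
        d_le D (d_prd D A N) \<phi> (d_rx D (times D A N (d_idt D A) s) \<phi>) \<longrightarrow>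
        d_le D (d_prd D A N) (d_tp D (d_prd D A N)) \<phi>)"

definition arithmetic :: "('o,'m,'p) doctrine \<Rightarrow> ('o \<Rightarrow> 'p) \<Rightarrow> 'o \<Rightarrow> 'm \<Rightarrow> 'm \<Rightarrow> bool" where
  "arithmetic D eq N z s \<longleftrightarrow> weak_hyperdoctrine D eq \<and> pnno D N z s \<and> induction D N z s"

definition comprehensive_diagonals :: "('o,'m,'p) doctrine \<Rightarrow> ('o \<Rightarrow> 'p) \<Rightarrow> bool" where
  "comprehensive_diagonals D eq \<longleftrightarrow>
     (\<forall>X\<in>d_ob D. \<forall>Y\<in>d_ob D. \<forall>f\<in>d_hom D X Y. \<forall>g\<in>d_hom D X Y.
        d_le D X (d_tp D X) (d_rx D (d_pr D f g) (eq Y)) \<longrightarrow> f = g)"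

text \<open>For every B, every weak evaluation ev : W\<times>A \<rightarrow> B and every R \<in> P(A\<times>B):
  \<forall>a.\<exists>b.R(a,b) \<turnstile> \<exists>f:W.\<forall>a.R(a,ev(f,a)) in P(1); the quantifiers are the
  adjoints to reindexing along the relevant projections / terminal arrows.\<close>
definition AC_on :: "('o,'m,'p) doctrine \<Rightarrow> 'o \<Rightarrow> bool" where
  "AC_on D A \<longleftrightarrow>
     (\<forall>B\<in>d_ob D. \<forall>W ev. weak_eval D W A B ev \<longrightarrow>
        (\<forall>R\<in>d_fib D (d_prd D A B). \<forall>e1 e2 e3 e4.
           is_ex D (d_prd D A B) A (d_pi1 D A B) R e1 \<longrightarrow>
           is_all D A (d_trm D) (bang D A) e1 e2 \<longrightarrow>
           is_all D (d_prd D W A) W (d_pi1 D W A) (d_rx D (d_pr D (d_pi2 D W A) ev) R) e3 \<longrightarrow>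
           is_ex D W (d_trm D) (bang D W) e3 e4 \<longrightarrow>
           d_le D (d_trm D) e2 e4))"

section \<open>The elementary quotient completion\<close>

definition p_equiv :: "('o,'m,'p) doctrine \<Rightarrow> 'o \<Rightarrow> 'p \<Rightarrow> bool" where
  "p_equiv D A \<rho> \<longleftrightarrow> A \<in> d_ob D \<and> \<rho> \<in> d_fib D (d_prd D A A) \<and>
     d_le D A (d_tp D A) (d_rx D (diag D A) \<rho>) \<and>
     d_le D (d_prd D A A) \<rho> (d_rx D (d_pr D (d_pi2 D A A) (d_pi1 D A A)) \<rho>) \<and>
     (let T = d_prd D A (d_prd D A A);
          a = d_pi1 D A (d_prd D A A);
          a' = d_cmp D (d_pi1 D A A) (d_pi2 D A (d_prd D A A));
          a'' = d_cmp D (d_pi2 D A A) (d_pi2 D A (d_prd D A A))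
      in d_le D T (d_mt D T (d_rx D (d_pr D a a') \<rho>) (d_rx D (d_pr D a' a'') \<rho>))
                  (d_rx D (d_pr D a a'') \<rho>))"

definition q_pres :: "('o,'m,'p) doctrine \<Rightarrow> 'o \<times> 'p \<Rightarrow> 'o \<times> 'p \<Rightarrow> 'm \<Rightarrow> bool" where
  "q_pres D X Y f \<longleftrightarrow> f \<in> d_hom D (fst X) (fst Y) \<and>
     d_le D (d_prd D (fst X) (fst X)) (snd X)
       (d_rx D (times D (fst X) (fst X) f f) (snd Y))"

definition q_cls :: "('o,'m,'p) doctrine \<Rightarrow> 'o \<times> 'p \<Rightarrow> 'o \<times> 'p \<Rightarrow> 'm \<Rightarrow> 'm set" where
  "q_cls D X Y f = {g. q_pres D X Y g \<and>
     d_le D (d_prd D (fst X) (fst X)) (snd X) (d_rx D (times D (fst X) (fst X) f g) (snd Y))}"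

type_synonym ('o,'m,'p) qarr = "('o \<times> 'p) \<times> ('o \<times> 'p) \<times> 'm set"

definition q_rep :: "('o,'m,'p) qarr \<Rightarrow> 'm" where
  "q_rep F = (SOME f. f \<in> snd (snd F))"

definition q_prd :: "('o,'m,'p) doctrine \<Rightarrow> 'o \<times> 'p \<Rightarrow> 'o \<times> 'p \<Rightarrow> 'o \<times> 'p" where
  "q_prd D X Y = (let A = fst X; B = fst Y; AB = d_prd D A B in
     (AB, d_mt D (d_prd D AB AB)
            (d_rx D (times D AB AB (d_pi1 D A B) (d_pi1 D A B)) (snd X))
            (d_rx D (times D AB AB (d_pi2 D A B) (d_pi2 D A B)) (snd Y))))"

definition quotient_completion ::
  "('o,'m,'p) doctrine \<Rightarrow> ('o \<times> 'p, ('o,'m,'p) qarr, 'p) doctrine" where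
  "quotient_completion D = \<lparr>
     d_ob = {X. p_equiv D (fst X) (snd X)},
     d_hom = (\<lambda>X Y. if p_equiv D (fst X) (snd X) \<and> p_equiv D (fst Y) (snd Y)
                     then {(X, Y, q_cls D X Y f) | f. q_pres D X Y f} else {}),
     d_cmp = (\<lambda>G F. (fst F, fst (snd G),
                     q_cls D (fst F) (fst (snd G)) (d_cmp D (q_rep G) (q_rep F)))),
     d_idt = (\<lambda>X. (X, X, q_cls D X X (d_idt D (fst X)))),
     d_trm = (d_trm D, d_tp D (d_prd D (d_trm D) (d_trm D))),
     d_prd = q_prd D,
     d_pi1 = (\<lambda>X Y. (q_prd D X Y, X, q_cls D (q_prd D X Y) X (d_pi1 D (fst X) (fst Y)))),
     d_pi2 = (\<lambda>X Y. (q_prd D X Y, Y, q_cls D (q_prd D X Y) Y (d_pi2 D (fst X) (fst Y)))),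
     d_pr = (\<lambda>F G. (fst F, q_prd D (fst (snd F)) (fst (snd G)),
                    q_cls D (fst F) (q_prd D (fst (snd F)) (fst (snd G)))
                      (d_pr D (q_rep F) (q_rep G)))),
     d_fib = (\<lambda>X. {\<alpha> \<in> d_fib D (fst X).
                    d_le D (d_prd D (fst X) (fst X))
                      (d_mt D (d_prd D (fst X) (fst X)) (d_rx D (d_pi1 D (fst X) (fst X)) \<alpha>) (snd X))
                      (d_rx D (d_pi2 D (fst X) (fst X)) \<alpha>)}),
     d_le = (\<lambda>X. d_le D (fst X)),
     d_tp = (\<lambda>X. d_tp D (fst X)),
     d_mt = (\<lambda>X. d_mt D (fst X)),
     d_rx = (\<lambda>F. d_rx D (q_rep F)) \<rparr>"

end

theory Submission
  imports Defs
begin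

text \<open>Over an object \<open>(A, eq A)\<close> the quotient completion has the same predicates as \<open>P\<close>, and its
  quantifiers along the projections out of \<open>(A, eq A) \<times> Y\<close> and along terminal arrows are computed
  as in \<open>P\<close>. A weak evaluation \<open>ev : W \<times> A \<rightarrow> B\<close> of \<open>P\<close> and an equivalence \<open>\<sigma>\<close> on \<open>B\<close> give a weak
  evaluation of the completion on \<open>(W, \<omega>)\<close>, where \<open>\<omega>(f, f') = \<forall>a. \<sigma>(ev(f, a), ev(f', a))\<close>.
  Taking \<open>\<sigma> = eq B\<close>, choice in the completion specialises to choice in \<open>P\<close>. Conversely, an
  instance of choice in the completion with weak evaluation \<open>ev' : W' \<times> (A, eq A) \<rightarrow> (B, \<sigma>)\<close> is
  compared with the instance in \<open>P\<close> for a weak evaluation \<open>ev : W \<times> A \<rightarrow> B\<close>: the weak evaluation on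
  \<open>(W, \<omega>)\<close> factors through \<open>ev'\<close> along some \<open>h : (W, \<omega>) \<rightarrow> W'\<close>, and reindexing along \<open>h\<close> carries the
  choice witness of \<open>P\<close> to one for the completion. Neither the natural numbers object nor
  comprehensive diagonals play a role: the equivalence holds for every object of a weak hyperdoctrine.\<close>

lemma is_all_le: "is_all T X Y f \<phi> e \<Longrightarrow> is_all T X Y f \<phi> e' \<Longrightarrow> d_le T Y e e'"
  unfolding is_all_def by blast

locale hyperdoctrine =
  fixes D :: "('o,'m,'p) doctrine" and eq :: "'o \<Rightarrow> 'p"
  assumes wh: "weak_hyperdoctrine D eq"
begin

abbreviation "ob \<equiv> d_ob D"
abbreviation "hom \<equiv> d_hom D"
abbreviation "cmp \<equiv> d_cmp D"
abbreviation "idt \<equiv> d_idt D"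
abbreviation "trm \<equiv> d_trm D"
abbreviation "prd \<equiv> d_prd D"
abbreviation "p1 \<equiv> d_pi1 D"
abbreviation "p2 \<equiv> d_pi2 D"
abbreviation "pr \<equiv> d_pr D"
abbreviation "fib \<equiv> d_fib D"
abbreviation "le \<equiv> d_le D"
abbreviation "tp \<equiv> d_tp D"
abbreviation "mt \<equiv> d_mt D"
abbreviation "rx \<equiv> d_rx D"

lemma cat: "category D" and cart: "cartesian D" and prim: "primary_doctrine D"
  and elem: "elementary D eq" and quant: "quantifiers D" and bc: "beck_chevalley D"
  and wcc: "weakly_cc D"
  using wh unfolding weak_hyperdoctrine_def by auto

lemma idt_hom[simp]: "A \<in> ob \<Longrightarrow> idt A \<in> hom A A"
  using cat unfolding category_def by auto
lemma cmp_hom: "f \<in> hom A B \<Longrightarrow> g \<in> hom B C \<Longrightarrow> A \<in> ob \<Longrightarrow> B \<in> ob \<Longrightarrow> C \<in> ob \<Longrightarrow> cmp g f \<in> hom A C"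
  using cat unfolding category_def by blast
lemma cmp_idr[simp]: "f \<in> hom A B \<Longrightarrow> A \<in> ob \<Longrightarrow> B \<in> ob \<Longrightarrow> cmp f (idt A) = f"
  using cat unfolding category_def by blast
lemma cmp_idl[simp]: "f \<in> hom A B \<Longrightarrow> A \<in> ob \<Longrightarrow> B \<in> ob \<Longrightarrow> cmp (idt B) f = f"
  using cat unfolding category_def by blast
lemma cmp_assoc: "f \<in> hom A B \<Longrightarrow> g \<in> hom B C \<Longrightarrow> h \<in> hom C E \<Longrightarrow> A \<in> ob \<Longrightarrow> B \<in> ob \<Longrightarrow> C \<in> ob \<Longrightarrow> E \<in> ob
   \<Longrightarrow> cmp h (cmp g f) = cmp (cmp h g) f"
  using cat unfolding category_def by blast

lemma trm_ob[simp]: "trm \<in> ob" using cart unfolding cartesian_def by blast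
lemma prd_ob[simp]: "A \<in> ob \<Longrightarrow> B \<in> ob \<Longrightarrow> prd A B \<in> ob" using cart unfolding cartesian_def by blast
lemma p1_hom[simp]: "A \<in> ob \<Longrightarrow> B \<in> ob \<Longrightarrow> p1 A B \<in> hom (prd A B) A" using cart unfolding cartesian_def by blast
lemma p2_hom[simp]: "A \<in> ob \<Longrightarrow> B \<in> ob \<Longrightarrow> p2 A B \<in> hom (prd A B) B" using cart unfolding cartesian_def by blast
lemma pr_hom: "f \<in> hom X A \<Longrightarrow> g \<in> hom X B \<Longrightarrow> X \<in> ob \<Longrightarrow> A \<in> ob \<Longrightarrow> B \<in> ob \<Longrightarrow> pr f g \<in> hom X (prd A B)"
  using cart unfolding cartesian_def by blast
lemma p1_pr[simp]: "f \<in> hom X A \<Longrightarrow> g \<in> hom X B \<Longrightarrow> X \<in> ob \<Longrightarrow> A \<in> ob \<Longrightarrow> B \<in> ob \<Longrightarrow> cmp (p1 A B) (pr f g) = f"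
  using cart unfolding cartesian_def by blast
lemma p2_pr[simp]: "f \<in> hom X A \<Longrightarrow> g \<in> hom X B \<Longrightarrow> X \<in> ob \<Longrightarrow> A \<in> ob \<Longrightarrow> B \<in> ob \<Longrightarrow> cmp (p2 A B) (pr f g) = g"
  using cart unfolding cartesian_def by blast
lemmas hom_rules = idt_hom p1_hom p2_hom prd_ob trm_ob cmp_hom pr_hom

lemma cmp_idt_p1[simp]: "A \<in> ob \<Longrightarrow> B \<in> ob \<Longrightarrow> cmp (idt A) (p1 A B) = p1 A B"
  by (rule cmp_idl[of _ "prd A B"]) auto
lemma cmp_idt_p2[simp]: "A \<in> ob \<Longrightarrow> B \<in> ob \<Longrightarrow> cmp (idt B) (p2 A B) = p2 A B"
  by (rule cmp_idl[of _ "prd A B"]) auto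

lemma pr_uniq: "h \<in> hom X (prd A B) \<Longrightarrow> X \<in> ob \<Longrightarrow> A \<in> ob \<Longrightarrow> B \<in> ob \<Longrightarrow> h = pr (cmp (p1 A B) h) (cmp (p2 A B) h)"
proof -
  assume h: "h \<in> hom X (prd A B)" "X \<in> ob" "A \<in> ob" "B \<in> ob"
  have "cmp (p1 A B) h \<in> hom X A" "cmp (p2 A B) h \<in> hom X B" using h by (blast intro: hom_rules)+
  thus ?thesis using cart h unfolding cartesian_def by metis
qed

lemma pr_cmp: "f \<in> hom X A \<Longrightarrow> g \<in> hom X B \<Longrightarrow> k \<in> hom Y X \<Longrightarrow> Y \<in> ob \<Longrightarrow> X \<in> ob \<Longrightarrow> A \<in> ob \<Longrightarrow> B \<in> ob
  \<Longrightarrow> cmp (pr f g) k = pr (cmp f k) (cmp g k)"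
proof -
  assume a: "f \<in> hom X A" "g \<in> hom X B" "k \<in> hom Y X" "Y \<in> ob" "X \<in> ob" "A \<in> ob" "B \<in> ob"
  have pk: "cmp (pr f g) k \<in> hom Y (prd A B)" using a by (blast intro: hom_rules)
  have "cmp (p1 A B) (cmp (pr f g) k) = cmp f k" using a by (subst cmp_assoc[of k Y X _ "prd A B" _ A]) (auto intro: hom_rules)
  moreover have "cmp (p2 A B) (cmp (pr f g) k) = cmp g k" using a by (subst cmp_assoc[of k Y X _ "prd A B" _ B]) (auto intro: hom_rules)
  ultimately show ?thesis using pr_uniq[OF pk] a by simp
qed

lemma pr_p1_p2[simp]: "A \<in> ob \<Longrightarrow> B \<in> ob \<Longrightarrow> pr (p1 A B) (p2 A B) = idt (prd A B)"
  using pr_uniq[of "idt (prd A B)" "prd A B" A B] cmp_idr[of "p1 A B" "prd A B" A] cmp_idr[of "p2 A B" "prd A B" B] by simp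

lemma bang_hom[intro,simp]: "A \<in> ob \<Longrightarrow> bang D A \<in> hom A trm"
  using cart unfolding cartesian_def bang_def by (metis (no_types, lifting) someI_ex)
lemma bang_uniq: "A \<in> ob \<Longrightarrow> t \<in> hom A trm \<Longrightarrow> t = bang D A"
  using cart bang_hom unfolding cartesian_def by metis

lemma times_hom[intro]: "h \<in> hom X X' \<Longrightarrow> k \<in> hom Y Y' \<Longrightarrow> X \<in> ob \<Longrightarrow> Y \<in> ob \<Longrightarrow> X' \<in> ob \<Longrightarrow> Y' \<in> ob
  \<Longrightarrow> times D X Y h k \<in> hom (prd X Y) (prd X' Y')"
  unfolding times_def by (blast intro: hom_rules)

lemma diag_hom[intro,simp]: "A \<in> ob \<Longrightarrow> diag D A \<in> hom A (prd A A)"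
  unfolding diag_def by (blast intro: hom_rules)

lemma times_pr: "h \<in> hom X X' \<Longrightarrow> k \<in> hom Y Y' \<Longrightarrow> f \<in> hom Z X \<Longrightarrow> g \<in> hom Z Y \<Longrightarrow> X \<in> ob \<Longrightarrow> Y \<in> ob \<Longrightarrow> X' \<in> ob \<Longrightarrow> Y' \<in> ob \<Longrightarrow> Z \<in> ob
  \<Longrightarrow> cmp (times D X Y h k) (pr f g) = pr (cmp h f) (cmp k g)"
proof -
  assume a: "h \<in> hom X X'" "k \<in> hom Y Y'" "f \<in> hom Z X" "g \<in> hom Z Y"
    "X \<in> ob" "Y \<in> ob" "X' \<in> ob" "Y' \<in> ob" "Z \<in> ob"
  have fg: "pr f g \<in> hom Z (prd X Y)" using a by (blast intro: hom_rules)
  have hk: "cmp h (p1 X Y) \<in> hom (prd X Y) X'" "cmp k (p2 X Y) \<in> hom (prd X Y) Y'"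
    using a by (blast intro: hom_rules)+
  have "cmp (cmp h (p1 X Y)) (pr f g) = cmp h f" "cmp (cmp k (p2 X Y)) (pr f g) = cmp k g"
    using cmp_assoc[OF fg p1_hom a(1)] cmp_assoc[OF fg p2_hom a(2)] a by simp_all
  then show ?thesis
    unfolding times_def
    using pr_cmp[OF hk fg] a by simp
qed

lemma fib_facts: "A \<in> ob \<Longrightarrow>
        (\<forall>x\<in>fib A. le A x x) \<and>
        (\<forall>x\<in>fib A. \<forall>y\<in>fib A. \<forall>z\<in>fib A. le A x y \<and> le A y z \<longrightarrow> le A x z) \<and>
        (\<forall>x\<in>fib A. \<forall>y\<in>fib A. le A x y \<and> le A y x \<longrightarrow> x = y) \<and>
        tp A \<in> fib A \<and> (\<forall>x\<in>fib A. le A x (tp A)) \<and>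
        (\<forall>x\<in>fib A. \<forall>y\<in>fib A. is_meet D A x y (mt A x y))"
  by (rule bspec[OF conjunct1[OF prim[unfolded primary_doctrine_def]]])

lemma le_refl[intro,simp]: "A \<in> ob \<Longrightarrow> x \<in> fib A \<Longrightarrow> le A x x" using fib_facts by blast
lemma le_trans: "le A x y \<Longrightarrow> le A y z \<Longrightarrow> A \<in> ob \<Longrightarrow> x \<in> fib A \<Longrightarrow> y \<in> fib A \<Longrightarrow> z \<in> fib A \<Longrightarrow> le A x z" using fib_facts by blast
lemma le_antisym: "le A x y \<Longrightarrow> le A y x \<Longrightarrow> A \<in> ob \<Longrightarrow> x \<in> fib A \<Longrightarrow> y \<in> fib A \<Longrightarrow> x = y" using fib_facts by blast
lemma tp_fib[intro,simp]: "A \<in> ob \<Longrightarrow> tp A \<in> fib A" using fib_facts by blast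
lemma le_tp[intro,simp]: "A \<in> ob \<Longrightarrow> x \<in> fib A \<Longrightarrow> le A x (tp A)" using fib_facts by blast
lemma mt_fib[intro,simp]: "A \<in> ob \<Longrightarrow> x \<in> fib A \<Longrightarrow> y \<in> fib A \<Longrightarrow> mt A x y \<in> fib A" using fib_facts unfolding is_meet_def by blast
lemma mt_le1[intro,simp]: "A \<in> ob \<Longrightarrow> x \<in> fib A \<Longrightarrow> y \<in> fib A \<Longrightarrow> le A (mt A x y) x" using fib_facts unfolding is_meet_def by blast
lemma mt_le2[intro,simp]: "A \<in> ob \<Longrightarrow> x \<in> fib A \<Longrightarrow> y \<in> fib A \<Longrightarrow> le A (mt A x y) y" using fib_facts unfolding is_meet_def by blast
lemma le_mt: "le A z x \<Longrightarrow> le A z y \<Longrightarrow> A \<in> ob \<Longrightarrow> x \<in> fib A \<Longrightarrow> y \<in> fib A \<Longrightarrow> z \<in> fib A \<Longrightarrow> le A z (mt A x y)" using fib_facts unfolding is_meet_def by blast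
lemma mt_tp[simp]: "A \<in> ob \<Longrightarrow> x \<in> fib A \<Longrightarrow> mt A x (tp A) = x"
  using le_antisym le_mt by (meson le_refl le_tp mt_fib mt_le1 tp_fib)

lemma mt_mono: "le A x x' \<Longrightarrow> le A y y' \<Longrightarrow> A \<in> ob \<Longrightarrow> x \<in> fib A \<Longrightarrow> x' \<in> fib A \<Longrightarrow> y \<in> fib A \<Longrightarrow> y' \<in> fib A
  \<Longrightarrow> le A (mt A x y) (mt A x' y')"
  by (meson le_mt le_trans mt_fib mt_le1 mt_le2)

lemma mt_mt_swap_le: "A \<in> ob \<Longrightarrow> a \<in> fib A \<Longrightarrow> b \<in> fib A \<Longrightarrow> c \<in> fib A \<Longrightarrow> d \<in> fib A \<Longrightarrow>
   le A (mt A (mt A a b) (mt A c d)) (mt A (mt A a c) (mt A b d))"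
  by (meson le_mt le_trans mt_fib mt_le1 mt_le2)

lemma rx_facts: "A \<in> ob \<Longrightarrow> B \<in> ob \<Longrightarrow> f \<in> hom A B \<Longrightarrow>
        (\<forall>\<phi>\<in>fib B. rx f \<phi> \<in> fib A) \<and>
        (\<forall>\<phi>\<in>fib B. \<forall>\<psi>\<in>fib B. le B \<phi> \<psi> \<longrightarrow> le A (rx f \<phi>) (rx f \<psi>)) \<and>
        rx f (tp B) = tp A \<and>
        (\<forall>\<phi>\<in>fib B. \<forall>\<psi>\<in>fib B. rx f (mt B \<phi> \<psi>) = mt A (rx f \<phi>) (rx f \<psi>))"
proof -
  assume a: "A \<in> ob" "B \<in> ob" "f \<in> hom A B"
  have "\<forall>A\<in>ob. \<forall>B\<in>ob. \<forall>f\<in>hom A B.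
        (\<forall>\<phi>\<in>fib B. rx f \<phi> \<in> fib A) \<and>
        (\<forall>\<phi>\<in>fib B. \<forall>\<psi>\<in>fib B. le B \<phi> \<psi> \<longrightarrow> le A (rx f \<phi>) (rx f \<psi>)) \<and>
        rx f (tp B) = tp A \<and>
        (\<forall>\<phi>\<in>fib B. \<forall>\<psi>\<in>fib B. rx f (mt B \<phi> \<psi>) = mt A (rx f \<phi>) (rx f \<psi>))"
    by (rule conjunct1[OF conjunct2[OF prim[unfolded primary_doctrine_def]]])
  thus ?thesis using a by blast
qed

lemma rx_fib[intro]: "f \<in> hom A B \<Longrightarrow> \<phi> \<in> fib B \<Longrightarrow> A \<in> ob \<Longrightarrow> B \<in> ob \<Longrightarrow> rx f \<phi> \<in> fib A" using rx_facts by blast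
lemma rx_mono: "le B \<phi> \<psi> \<Longrightarrow> f \<in> hom A B \<Longrightarrow> \<phi> \<in> fib B \<Longrightarrow> \<psi> \<in> fib B \<Longrightarrow> A \<in> ob \<Longrightarrow> B \<in> ob \<Longrightarrow> le A (rx f \<phi>) (rx f \<psi>)" using rx_facts by blast
lemma rx_tp[simp]: "f \<in> hom A B \<Longrightarrow> A \<in> ob \<Longrightarrow> B \<in> ob \<Longrightarrow> rx f (tp B) = tp A" using rx_facts by blast
lemma rx_mt[simp]: "f \<in> hom A B \<Longrightarrow> \<phi> \<in> fib B \<Longrightarrow> \<psi> \<in> fib B \<Longrightarrow> A \<in> ob \<Longrightarrow> B \<in> ob \<Longrightarrow> rx f (mt B \<phi> \<psi>) = mt A (rx f \<phi>) (rx f \<psi>)" using rx_facts by blast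
lemma rx_id[simp]: "A \<in> ob \<Longrightarrow> \<phi> \<in> fib A \<Longrightarrow> rx (idt A) \<phi> = \<phi>" using prim unfolding primary_doctrine_def by blast
lemma rx_cmp: "f \<in> hom A B \<Longrightarrow> g \<in> hom B C \<Longrightarrow> \<phi> \<in> fib C \<Longrightarrow> A \<in> ob \<Longrightarrow> B \<in> ob \<Longrightarrow> C \<in> ob \<Longrightarrow> rx (cmp g f) \<phi> = rx f (rx g \<phi>)"
  using prim unfolding primary_doctrine_def by blast

lemma tp_le_mt: "le A (tp A) (mt A x y) \<longleftrightarrow> le A (tp A) x \<and> le A (tp A) y" if "A \<in> ob" "x \<in> fib A" "y \<in> fib A"
  using that by (meson le_mt le_trans mt_fib mt_le1 mt_le2 tp_fib)

lemma eq_adjunction: "A \<in> ob \<Longrightarrow> eq A \<in> fib (prd A A) \<and>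
       (\<forall>X\<in>ob. \<forall>\<beta>\<in>fib (prd X A). \<forall>\<gamma>\<in>fib (prd X (prd A A)).
          le (prd X (prd A A))
             (mt (prd X (prd A A))
                (rx (pr (p1 X (prd A A))
                                (cmp (p1 A A) (p2 X (prd A A)))) \<beta>)
                (rx (p2 X (prd A A)) (eq A)))
             \<gamma>
          \<longleftrightarrow> le (prd X A) \<beta> (rx (times D X A (idt X) (diag D A)) \<gamma>))"
  by (rule bspec[OF elem[unfolded elementary_def]])

lemma eq_fib[simp,intro]: "A \<in> ob \<Longrightarrow> eq A \<in> fib (prd A A)" using eq_adjunction by blast

text \<open>The generic instance of substitution, at the stage \<open>G \<times> (A \<times> A)\<close>: it is the transpose,
  under the adjunction defining \<open>eq A\<close>, of the trivial inequality \<open>\<phi> \<le> \<phi>\<close>.\<close>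

lemma eq_subst_generic:
  assumes G: "G \<in> ob" and A: "A \<in> ob" and ph: "\<phi> \<in> fib (prd G A)"
  defines "q1 \<equiv> p1 G (prd A A)" and "q2 \<equiv> p2 G (prd A A)"
  shows "le (prd G (prd A A)) (mt (prd G (prd A A)) (rx (pr q1 (cmp (p1 A A) q2)) \<phi>) (rx q2 (eq A)))
           (rx (pr q1 (cmp (p2 A A) q2)) \<phi>)"
proof -
  define AA where "AA = prd A A"
  define T where "T = prd G AA"
  define a1 where "a1 = cmp (p1 A A) q2"
  define a2 where "a2 = cmp (p2 A A) q2"
  define tm where "tm = times D G A (idt G) (diag D A)"
  have ob: "AA \<in> ob" "T \<in> ob" "prd G A \<in> ob" unfolding AA_def T_def using G A by auto
  have h: "q1 \<in> hom T G" "q2 \<in> hom T AA" "a1 \<in> hom T A" "a2 \<in> hom T A" "tm \<in> hom (prd G A) T"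
    "pr q1 a1 \<in> hom T (prd G A)" "pr q1 a2 \<in> hom T (prd G A)"
    unfolding q1_def q2_def a1_def a2_def T_def AA_def tm_def using G A by (blast intro: hom_rules times_hom diag_hom)+
  have c1: "cmp q1 tm = p1 G A" unfolding tm_def times_def q1_def T_def AA_def using G A
    by (subst p1_pr[of _ "prd G A"]) (simp | blast intro: hom_rules diag_hom)+
  have c2': "cmp q2 tm = cmp (diag D A) (p2 G A)" unfolding tm_def times_def q2_def T_def AA_def using G A
    by (subst p2_pr[of _ "prd G A"]) (blast intro: hom_rules diag_hom)+
  have dg: "diag D A \<in> hom A AA" "cmp (p2 A A) (diag D A) = idt A" unfolding AA_def diag_def using A
    by (blast intro: hom_rules, simp add: p2_pr[of _ A])
  have "cmp a2 tm = cmp (p2 A A) (cmp q2 tm)" unfolding a2_def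
    using cmp_assoc[of tm "prd G A" T q2 AA "p2 A A" A] ob h G A unfolding AA_def by simp
  also have "\<dots> = cmp (cmp (p2 A A) (diag D A)) (p2 G A)" unfolding c2'
    using cmp_assoc[of "p2 G A" "prd G A" A "diag D A" AA "p2 A A" A] ob dg G A unfolding AA_def by simp
  also have "\<dots> = p2 G A" using dg G A by simp
  finally have c2: "cmp a2 tm = p2 G A" .
  have "cmp (pr q1 a2) tm = idt (prd G A)"
    using pr_cmp[of q1 T G a2 A tm "prd G A"] c1 c2 h ob G A by simp
  then have "rx tm (rx (pr q1 a2) \<phi>) = \<phi>"
    using rx_cmp[of tm "prd G A" T "pr q1 a2" "prd G A" \<phi>] h ob ph by simp
  then have "le (prd G A) \<phi> (rx tm (rx (pr q1 a2) \<phi>))" using ob ph by simp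
  then show ?thesis
    using eq_adjunction[OF A] G ph h ob unfolding tm_def q1_def q2_def a1_def a2_def T_def AA_def
    by (meson rx_fib)
qed

lemma eq_subst:
  assumes G: "G \<in> ob" and A: "A \<in> ob" and ph: "\<phi> \<in> fib (prd G A)" and s: "s \<in> hom G A" and t: "t \<in> hom G A"
  shows "le G (mt G (rx (pr (idt G) s) \<phi>) (rx (pr s t) (eq A))) (rx (pr (idt G) t) \<phi>)"
proof -
  define AA where "AA = prd A A"
  define T where "T = prd G AA"
  define q1 where "q1 = p1 G AA"
  define q2 where "q2 = p2 G AA"
  define a1 where "a1 = cmp (p1 A A) q2"
  define a2 where "a2 = cmp (p2 A A) q2"
  have ob: "AA \<in> ob" "T \<in> ob" "prd G A \<in> ob" unfolding AA_def T_def using G A by auto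
  have h: "q1 \<in> hom T G" "q2 \<in> hom T AA" "a1 \<in> hom T A" "a2 \<in> hom T A"
    "pr q1 a1 \<in> hom T (prd G A)" "pr q1 a2 \<in> hom T (prd G A)"
    unfolding q1_def q2_def a1_def a2_def T_def AA_def using G A by (blast intro: hom_rules)+
  have L: "le T (mt T (rx (pr q1 a1) \<phi>) (rx q2 (eq A))) (rx (pr q1 a2) \<phi>)"
    using eq_subst_generic[OF G A ph] unfolding q1_def q2_def a1_def a2_def T_def AA_def .
  define u where "u = pr (idt G) (pr s t)"
  have hu: "u \<in> hom G T" "pr s t \<in> hom G AA" unfolding u_def T_def AA_def using G A s t by (blast intro: hom_rules)+
  have u1: "cmp q1 u = idt G" "cmp q2 u = pr s t" unfolding u_def q1_def q2_def T_def
    using G A s t hu(2) by (simp_all add: p1_pr[of _ G] p2_pr[of _ G] AA_def)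
  have u2: "cmp a1 u = s" "cmp a2 u = t" unfolding a1_def a2_def using hu h ob u1 G A s t
    cmp_assoc[of u G T q2 AA "p1 A A" A] cmp_assoc[of u G T q2 AA "p2 A A" A] unfolding AA_def
    by (simp_all add: p1_pr[of _ G] p2_pr[of _ G])
  have u3: "cmp (pr q1 a1) u = pr (idt G) s" "cmp (pr q1 a2) u = pr (idt G) t"
    using pr_cmp[of q1 T G a1 A u G] pr_cmp[of q1 T G a2 A u G] h hu ob G A u1 u2 by simp_all
  have F: "rx (pr q1 a1) \<phi> \<in> fib T" "rx q2 (eq A) \<in> fib T" "rx (pr q1 a2) \<phi> \<in> fib T"
    using h ob ph A by (auto intro!: rx_fib simp: AA_def)
  have "le G (rx u (mt T (rx (pr q1 a1) \<phi>) (rx q2 (eq A)))) (rx u (rx (pr q1 a2) \<phi>))"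
    using rx_mono[OF L hu(1)] F ob G by auto
  moreover have "rx u (mt T (rx (pr q1 a1) \<phi>) (rx q2 (eq A))) = mt G (rx (pr (idt G) s) \<phi>) (rx (pr s t) (eq A))"
    using h hu ob G A ph u1 u3 rx_cmp[of u G T "pr q1 a1" "prd G A" \<phi>] rx_cmp[of u G T q2 AA "eq A"]
    by (subst rx_mt) (auto simp: AA_def intro!: rx_fib)
  moreover have "rx u (rx (pr q1 a2) \<phi>) = rx (pr (idt G) t) \<phi>"
    using h hu ob G A ph u3 rx_cmp[of u G T "pr q1 a2" "prd G A" \<phi>] by simp
  ultimately show ?thesis by simp
qed

lemma rx_rx: "k \<in> hom Y X \<Longrightarrow> f \<in> hom X A \<Longrightarrow> \<phi> \<in> fib A \<Longrightarrow> Y \<in> ob \<Longrightarrow> X \<in> ob \<Longrightarrow> A \<in> ob \<Longrightarrow> rx k (rx f \<phi>) = rx (cmp f k) \<phi>"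
  using rx_cmp by metis

lemma rx_rx_pr: "f \<in> hom X A \<Longrightarrow> g \<in> hom X B \<Longrightarrow> k \<in> hom Y X \<Longrightarrow> \<phi> \<in> fib (prd A B) \<Longrightarrow> Y \<in> ob \<Longrightarrow> X \<in> ob \<Longrightarrow> A \<in> ob \<Longrightarrow> B \<in> ob
  \<Longrightarrow> rx k (rx (pr f g) \<phi>) = rx (pr (cmp f k) (cmp g k)) \<phi>"
  by (subst rx_rx[of k Y X _ "prd A B"]) (auto intro: pr_hom simp: pr_cmp)

lemma cmp_p1_pr_cmp: "u \<in> hom X A \<Longrightarrow> v \<in> hom X B \<Longrightarrow> w \<in> hom A C \<Longrightarrow> X \<in> ob \<Longrightarrow> A \<in> ob \<Longrightarrow> B \<in> ob \<Longrightarrow> C \<in> ob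
  \<Longrightarrow> cmp (cmp w (p1 A B)) (pr u v) = cmp w u"
  by (subst cmp_assoc[of _ X "prd A B" _ A _ C, symmetric]) (auto intro: pr_hom)
lemma cmp_p2_pr_cmp: "u \<in> hom X A \<Longrightarrow> v \<in> hom X B \<Longrightarrow> w \<in> hom B C \<Longrightarrow> X \<in> ob \<Longrightarrow> A \<in> ob \<Longrightarrow> B \<in> ob \<Longrightarrow> C \<in> ob
  \<Longrightarrow> cmp (cmp w (p2 A B)) (pr u v) = cmp w v"
  by (subst cmp_assoc[of _ X "prd A B" _ B _ C, symmetric]) (auto intro: pr_hom)

lemma le_mt_tp: "A \<in> ob \<Longrightarrow> x \<in> fib A \<Longrightarrow> le A x (mt A (tp A) x)"
  by (rule le_mt) auto

lemma le_tp_iff: "A \<in> ob \<Longrightarrow> x \<in> fib A \<Longrightarrow> le A (tp A) x \<longleftrightarrow> x = tp A"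
  using le_antisym by auto

lemma eq_refl:
  assumes G: "G \<in> ob" and A: "A \<in> ob" and a: "a \<in> hom G A"
  shows "rx (pr a a) (eq A) = tp G"
proof -
  define AA where "AA = prd A A"
  define T where "T = prd G AA"
  define q2 where "q2 = p2 G AA"
  define tm where "tm = times D G A (idt G) (diag D A)"
  have ob: "AA \<in> ob" "T \<in> ob" "prd G A \<in> ob" unfolding AA_def T_def using G A by auto
  have h: "q2 \<in> hom T AA" "tm \<in> hom (prd G A) T" "rx q2 (eq A) \<in> fib T"
    unfolding q2_def T_def AA_def tm_def using G A by (blast intro: hom_rules times_hom diag_hom rx_fib eq_fib)+
  have "le T (mt T (rx (pr (p1 G AA) (cmp (p1 A A) (p2 G AA))) (tp (prd G A))) (rx q2 (eq A))) (rx q2 (eq A))"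
    using h ob G A unfolding AA_def T_def q2_def by (intro mt_le2) (blast intro: hom_rules rx_fib tp_fib)+
  hence L: "le (prd G A) (tp (prd G A)) (rx tm (rx q2 (eq A)))"
    using eq_adjunction[OF A] G h ob unfolding tm_def q2_def T_def AA_def by (meson tp_fib)
  have c2': "cmp q2 tm = cmp (diag D A) (p2 G A)" unfolding tm_def times_def q2_def T_def AA_def using G A
    by (subst p2_pr[of _ "prd G A"]) (blast intro: hom_rules diag_hom)+
  have j: "pr (idt G) a \<in> hom G (prd G A)" using G A a by (blast intro: hom_rules)
  have dA: "diag D A \<in> hom A AA" using A unfolding AA_def by simp
  have "rx tm (rx q2 (eq A)) = rx (cmp (diag D A) (p2 G A)) (eq A)"
    using rx_rx[OF h(2) h(1)] c2' ob G A by (simp add: AA_def)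
  hence "rx (pr (idt G) a) (rx tm (rx q2 (eq A))) = rx (cmp (cmp (diag D A) (p2 G A)) (pr (idt G) a)) (eq A)"
    using rx_rx[of "pr (idt G) a" G "prd G A" "cmp (diag D A) (p2 G A)" AA] j ob G A dA
    by (simp add: AA_def cmp_hom[of _ _ A])
  also have "cmp (cmp (diag D A) (p2 G A)) (pr (idt G) a) = cmp (diag D A) a"
    using cmp_p2_pr_cmp[of "idt G" G G a A "diag D A" AA] G A a dA ob by simp
  also have "\<dots> = pr a a" unfolding diag_def using pr_cmp[of "idt A" A A "idt A" A a G] G A a by simp
  finally have "le G (tp G) (rx (pr a a) (eq A))"
    using rx_mono[OF L j] G A ob h j rx_fib[OF h(2) h(3)] by auto
  moreover have "rx (pr a a) (eq A) \<in> fib G" using rx_fib[OF pr_hom[OF a a G A A] eq_fib] G A by simp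
  ultimately show ?thesis using le_tp_iff G by blast
qed

lemma rx_pr_idt_rx_pr: "x \<in> hom G A \<Longrightarrow> u \<in> hom (prd G A) C \<Longrightarrow> v \<in> hom (prd G A) E \<Longrightarrow> \<psi> \<in> fib (prd C E)
  \<Longrightarrow> G \<in> ob \<Longrightarrow> A \<in> ob \<Longrightarrow> C \<in> ob \<Longrightarrow> E \<in> ob
  \<Longrightarrow> rx (pr (idt G) x) (rx (pr u v) \<psi>) = rx (pr (cmp u (pr (idt G) x)) (cmp v (pr (idt G) x))) \<psi>"
  by (rule rx_rx_pr[of u "prd G A" C v E "pr (idt G) x" G \<psi>]) (blast intro: hom_rules)+

lemma cmp_p1_pr_idt_cmp: "x \<in> hom G A \<Longrightarrow> w \<in> hom G C \<Longrightarrow> G \<in> ob \<Longrightarrow> A \<in> ob \<Longrightarrow> C \<in> ob \<Longrightarrow> cmp (cmp w (p1 G A)) (pr (idt G) x) = w"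
  using cmp_p1_pr_cmp[of "idt G" G G x A w C] by simp
lemma p2_pr_idt: "x \<in> hom G A \<Longrightarrow> G \<in> ob \<Longrightarrow> A \<in> ob \<Longrightarrow> cmp (p2 G A) (pr (idt G) x) = x"
  by (rule p2_pr[of _ G]) auto

lemma eq_sym:
  assumes G: "G \<in> ob" and A: "A \<in> ob" and s: "s \<in> hom G A" and t: "t \<in> hom G A"
  shows "le G (rx (pr s t) (eq A)) (rx (pr t s) (eq A))"
proof -
  have u: "p2 G A \<in> hom (prd G A) A" "cmp s (p1 G A) \<in> hom (prd G A) A" using G A s by (blast intro: hom_rules)+
  define \<phi> where "\<phi> = rx (pr (p2 G A) (cmp s (p1 G A))) (eq A)"
  have ph: "\<phi> \<in> fib (prd G A)" unfolding \<phi>_def using u G A by (blast intro: hom_rules rx_fib eq_fib)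
  have 1: "rx (pr (idt G) s) \<phi> = tp G" unfolding \<phi>_def
    using rx_pr_idt_rx_pr[OF s u] G A s cmp_p1_pr_idt_cmp[OF s s] p2_pr_idt[OF s] eq_refl[OF G A s] by simp
  have 2: "rx (pr (idt G) t) \<phi> = rx (pr t s) (eq A)" unfolding \<phi>_def
    using rx_pr_idt_rx_pr[OF t u] G A s t cmp_p1_pr_idt_cmp[OF t s] p2_pr_idt[OF t] by simp
  have e: "rx (pr s t) (eq A) \<in> fib G" "rx (pr t s) (eq A) \<in> fib G" using G A s t by (blast intro: hom_rules rx_fib eq_fib)+
  show ?thesis using eq_subst[OF G A ph s t] 1 2 le_mt_tp[OF G e(1)] le_trans G e
    by (metis mt_fib tp_fib)
qed

lemma eq_trans:
  assumes G: "G \<in> ob" and A: "A \<in> ob" and r: "r \<in> hom G A" and s: "s \<in> hom G A" and t: "t \<in> hom G A"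
  shows "le G (mt G (rx (pr r s) (eq A)) (rx (pr s t) (eq A))) (rx (pr r t) (eq A))"
proof -
  have u: "cmp r (p1 G A) \<in> hom (prd G A) A" "p2 G A \<in> hom (prd G A) A" using G A r by (blast intro: hom_rules)+
  define \<phi> where "\<phi> = rx (pr (cmp r (p1 G A)) (p2 G A)) (eq A)"
  have ph: "\<phi> \<in> fib (prd G A)" unfolding \<phi>_def using u G A by (blast intro: hom_rules rx_fib eq_fib)
  have 1: "rx (pr (idt G) s) \<phi> = rx (pr r s) (eq A)" unfolding \<phi>_def
    using rx_pr_idt_rx_pr[OF s u] G A s cmp_p1_pr_idt_cmp[OF s r] p2_pr_idt[OF s] by simp
  have 2: "rx (pr (idt G) t) \<phi> = rx (pr r t) (eq A)" unfolding \<phi>_def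
    using rx_pr_idt_rx_pr[OF t u] G A t cmp_p1_pr_idt_cmp[OF t r] p2_pr_idt[OF t] by simp
  show ?thesis using eq_subst[OF G A ph s t] 1 2 by simp
qed

lemma eq_closed:
  assumes G: "G \<in> ob" and A: "A \<in> ob" and a: "a \<in> hom G A" and b: "b \<in> hom G A" and al: "\<alpha> \<in> fib A"
  shows "le G (mt G (rx a \<alpha>) (rx (pr a b) (eq A))) (rx b \<alpha>)"
proof -
  have ph: "rx (p2 G A) \<alpha> \<in> fib (prd G A)" using G A al by (blast intro: hom_rules rx_fib)
  have 1: "rx (pr (idt G) a) (rx (p2 G A) \<alpha>) = rx a \<alpha>" "rx (pr (idt G) b) (rx (p2 G A) \<alpha>) = rx b \<alpha>"
    using rx_rx[of "pr (idt G) a" G "prd G A" "p2 G A" A] rx_rx[of "pr (idt G) b" G "prd G A" "p2 G A" A] G A a b al p2_pr_idt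
      pr_hom[of "idt G" G G a A] pr_hom[of "idt G" G G b A] by auto
  show ?thesis using eq_subst[OF G A ph a b] 1 by simp
qed

lemma eq_prd_subst:
  assumes G: "G \<in> ob" and A: "A \<in> ob" and B: "B \<in> ob" and al: "\<alpha> \<in> fib (prd A B)"
    and x: "x \<in> hom G (prd A B)" and y: "y \<in> hom G (prd A B)"
  shows "le G (mt G (rx x \<alpha>) (mt G (rx (pr (cmp (p1 A B) x) (cmp (p1 A B) y)) (eq A)) (rx (pr (cmp (p2 A B) x) (cmp (p2 A B) y)) (eq B)))) (rx y \<alpha>)"
proof -
  define a1 where "a1 = cmp (p1 A B) x"
  define a2 where "a2 = cmp (p1 A B) y"
  define b1 where "b1 = cmp (p2 A B) x"
  define b2 where "b2 = cmp (p2 A B) y"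
  have h: "a1 \<in> hom G A" "a2 \<in> hom G A" "b1 \<in> hom G B" "b2 \<in> hom G B"
    unfolding a1_def a2_def b1_def b2_def using x y G A B by (blast intro: hom_rules)+
  have xe: "x = pr a1 b1" "y = pr a2 b2" unfolding a1_def a2_def b1_def b2_def using pr_uniq x y G A B by auto
  have GA: "prd G A \<in> ob" "prd G B \<in> ob" using G A B by auto
  have u1: "pr (p2 G A) (cmp b1 (p1 G A)) \<in> hom (prd G A) (prd A B)" using h G A B by (blast intro: hom_rules)
  have u2: "pr (cmp a2 (p1 G B)) (p2 G B) \<in> hom (prd G B) (prd A B)" using h G A B by (blast intro: hom_rules)
  define \<phi>1 where "\<phi>1 = rx (pr (p2 G A) (cmp b1 (p1 G A))) \<alpha>"
  define \<phi>2 where "\<phi>2 = rx (pr (cmp a2 (p1 G B)) (p2 G B)) \<alpha>"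
  have ph: "\<phi>1 \<in> fib (prd G A)" "\<phi>2 \<in> fib (prd G B)" unfolding \<phi>1_def \<phi>2_def using rx_fib[OF u1 al] rx_fib[OF u2 al] GA A B by auto
  have r1: "rx (pr (idt G) a1) \<phi>1 = rx (pr a1 b1) \<alpha>" "rx (pr (idt G) a2) \<phi>1 = rx (pr a2 b1) \<alpha>"
    unfolding \<phi>1_def using rx_pr_idt_rx_pr[OF h(1) p2_hom _ al] rx_pr_idt_rx_pr[OF h(2) p2_hom _ al] cmp_p1_pr_idt_cmp[OF h(1) h(3)] cmp_p1_pr_idt_cmp[OF h(2) h(3)] p2_pr_idt[OF h(1)] p2_pr_idt[OF h(2)] G A B h
      cmp_hom[OF p1_hom h(3)] by auto
  have r2: "rx (pr (idt G) b1) \<phi>2 = rx (pr a2 b1) \<alpha>" "rx (pr (idt G) b2) \<phi>2 = rx (pr a2 b2) \<alpha>"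
    unfolding \<phi>2_def using rx_pr_idt_rx_pr[OF h(3) _ p2_hom al] rx_pr_idt_rx_pr[OF h(4) _ p2_hom al] cmp_p1_pr_idt_cmp[OF h(3) h(2)] cmp_p1_pr_idt_cmp[OF h(4) h(2)] p2_pr_idt[OF h(3)] p2_pr_idt[OF h(4)] G A B h
      cmp_hom[OF p1_hom h(2)] by auto
  have s1: "le G (mt G (rx (pr a1 b1) \<alpha>) (rx (pr a1 a2) (eq A))) (rx (pr a2 b1) \<alpha>)"
    using eq_subst[OF G A ph(1) h(1) h(2)] r1 by simp
  have s2: "le G (mt G (rx (pr a2 b1) \<alpha>) (rx (pr b1 b2) (eq B))) (rx (pr a2 b2) \<alpha>)"
    using eq_subst[OF G B ph(2) h(3) h(4)] r2 by simp
  have F: "rx (pr a1 b1) \<alpha> \<in> fib G" "rx (pr a2 b1) \<alpha> \<in> fib G" "rx (pr a2 b2) \<alpha> \<in> fib G"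
    "rx (pr a1 a2) (eq A) \<in> fib G" "rx (pr b1 b2) (eq B) \<in> fib G"
    using h G A B al by (blast intro: hom_rules rx_fib eq_fib)+
  have "le G (mt G (rx (pr a1 b1) \<alpha>) (mt G (rx (pr a1 a2) (eq A)) (rx (pr b1 b2) (eq B))))
            (mt G (mt G (rx (pr a1 b1) \<alpha>) (rx (pr a1 a2) (eq A))) (rx (pr b1 b2) (eq B)))"
    using F G by (meson le_mt le_trans mt_fib mt_le1 mt_le2)
  moreover have "le G (mt G (mt G (rx (pr a1 b1) \<alpha>) (rx (pr a1 a2) (eq A))) (rx (pr b1 b2) (eq B)))
                      (mt G (rx (pr a2 b1) \<alpha>) (rx (pr b1 b2) (eq B)))"
    using mt_mono[OF s1 le_refl[OF G F(5)]] F G by auto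
  ultimately have fin: "le G (mt G (rx (pr a1 b1) \<alpha>) (mt G (rx (pr a1 a2) (eq A)) (rx (pr b1 b2) (eq B)))) (rx (pr a2 b2) \<alpha>)"
    using s2 F G by (meson le_trans mt_fib)
  show ?thesis using fin by (simp only: xe[symmetric] a1_def[symmetric] a2_def[symmetric] b1_def[symmetric] b2_def[symmetric])
qed

lemma is_all_le_iff:
  assumes e: "is_all D X Y f \<phi> e" and f: "f \<in> hom X Y" and X: "X \<in> ob" and Y: "Y \<in> ob" and ph: "\<phi> \<in> fib X" and ps: "\<psi> \<in> fib Y"
  shows "le Y \<psi> e \<longleftrightarrow> le X (rx f \<psi>) \<phi>"
proof
  have ef: "e \<in> fib Y" and c: "le X (rx f e) \<phi>" using e unfolding is_all_def by auto
  assume "le Y \<psi> e"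
  hence "le X (rx f \<psi>) (rx f e)" using rx_mono f ps ef X Y by blast
  thus "le X (rx f \<psi>) \<phi>" using c le_trans X ph rx_fib[OF f ps X Y] rx_fib[OF f ef X Y] by blast
next
  assume "le X (rx f \<psi>) \<phi>" thus "le Y \<psi> e" using e ps unfolding is_all_def by auto
qed

lemma is_ex_le_iff:
  assumes e: "is_ex D X Y f \<phi> e" and f: "f \<in> hom X Y" and X: "X \<in> ob" and Y: "Y \<in> ob" and ph: "\<phi> \<in> fib X" and ps: "\<psi> \<in> fib Y"
  shows "le Y e \<psi> \<longleftrightarrow> le X \<phi> (rx f \<psi>)"
proof
  have ef: "e \<in> fib Y" and c: "le X \<phi> (rx f e)" using e unfolding is_ex_def by auto
  assume "le Y e \<psi>"
  hence "le X (rx f e) (rx f \<psi>)" using rx_mono f ps ef X Y by blast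
  thus "le X \<phi> (rx f \<psi>)" using c le_trans X ph rx_fib[OF f ps X Y] rx_fib[OF f ef X Y] by blast
next
  assume "le X \<phi> (rx f \<psi>)" thus "le Y e \<psi>" using e ps unfolding is_ex_def by auto
qed

lemma is_all_fib: "is_all D X Y f \<phi> e \<Longrightarrow> e \<in> fib Y" unfolding is_all_def by auto
lemma is_ex_fib: "is_ex D X Y f \<phi> e \<Longrightarrow> e \<in> fib Y" unfolding is_ex_def by auto

lemma ex_is_all_p1: "A \<in> ob \<Longrightarrow> B \<in> ob \<Longrightarrow> \<phi> \<in> fib (prd A B) \<Longrightarrow> \<exists>e. is_all D (prd A B) A (p1 A B) \<phi> e"
  using quant unfolding quantifiers_def by blast
lemma ex_is_ex_p1: "A \<in> ob \<Longrightarrow> B \<in> ob \<Longrightarrow> \<phi> \<in> fib (prd A B) \<Longrightarrow> \<exists>e. is_ex D (prd A B) A (p1 A B) \<phi> e"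
  using quant unfolding quantifiers_def by blast

lemma is_all_reindex: "is_all D (prd A B) A (p1 A B) \<phi> e \<Longrightarrow> f \<in> hom X A \<Longrightarrow> A \<in> ob \<Longrightarrow> B \<in> ob \<Longrightarrow> X \<in> ob \<Longrightarrow> \<phi> \<in> fib (prd A B) \<Longrightarrow>
   is_all D (prd X B) X (p1 X B) (rx (times D X B f (idt B)) \<phi>) (rx f e)"
  using bc unfolding beck_chevalley_def by blast

lemma ex_is_ex_bang:
  assumes A: "A \<in> ob" and ph: "\<phi> \<in> fib A"
  shows "\<exists>e. is_ex D A trm (bang D A) \<phi> e"
proof -
  have p: "p1 trm A \<in> hom (prd trm A) trm" "p2 trm A \<in> hom (prd trm A) A" using A by auto
  have ph2: "rx (p2 trm A) \<phi> \<in> fib (prd trm A)" using rx_fib[OF p(2) ph] A by auto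
  obtain e where e: "is_ex D (prd trm A) trm (p1 trm A) (rx (p2 trm A) \<phi>) e" using ex_is_ex_p1[OF trm_ob A ph2] by blast
  have ef: "e \<in> fib trm" using e is_ex_fib by blast
  have j: "pr (bang D A) (idt A) \<in> hom A (prd trm A)" using A by (blast intro: hom_rules bang_hom)
  have bp: "cmp (bang D A) (p2 trm A) = p1 trm A" using bang_uniq[of "prd trm A" "cmp (bang D A) (p2 trm A)"] bang_uniq[of "prd trm A" "p1 trm A"] A p
    by (metis bang_hom cmp_hom prd_ob trm_ob)
  have ch: "le Y' e \<psi> \<longleftrightarrow> le A \<phi> (rx (bang D A) \<psi>)" if ps: "\<psi> \<in> fib trm" and "Y' = trm" for \<psi> Y'
  proof -
    have "le trm e \<psi> \<longleftrightarrow> le (prd trm A) (rx (p2 trm A) \<phi>) (rx (p1 trm A) \<psi>)"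
      using is_ex_le_iff[OF e p(1) _ trm_ob ph2 ps] A by simp
    also have "\<dots> \<longleftrightarrow> le A \<phi> (rx (bang D A) \<psi>)"
    proof
      assume L: "le (prd trm A) (rx (p2 trm A) \<phi>) (rx (p1 trm A) \<psi>)"
      have "le A (rx (pr (bang D A) (idt A)) (rx (p2 trm A) \<phi>)) (rx (pr (bang D A) (idt A)) (rx (p1 trm A) \<psi>))"
        using rx_mono[OF L j] ph2 rx_fib[OF p(1) ps] A by simp
      thus "le A \<phi> (rx (bang D A) \<psi>)" using rx_rx[OF j p(2) ph] rx_rx[OF j p(1) ps] A ph
        by (simp add: p1_pr[of _ A] p2_pr[of _ A])
    next
      assume L: "le A \<phi> (rx (bang D A) \<psi>)"
      have "le (prd trm A) (rx (p2 trm A) \<phi>) (rx (p2 trm A) (rx (bang D A) \<psi>))"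
        using rx_mono[OF L p(2)] ph rx_fib[OF bang_hom[OF A] ps] A by simp
      thus "le (prd trm A) (rx (p2 trm A) \<phi>) (rx (p1 trm A) \<psi>)" using rx_rx[OF p(2) bang_hom[OF A] ps] bp A by simp
    qed
    finally show ?thesis using that by simp
  qed
  have "is_ex D A trm (bang D A) \<phi> e" unfolding is_ex_def using ef ch[OF ef] le_refl[OF trm_ob ef] ch by auto
  thus ?thesis by blast
qed

lemma is_ex_bang_le:
  assumes h: "h \<in> hom V W" and V: "V \<in> ob" and W: "W \<in> ob"
    and \<phi>: "\<phi> \<in> fib V" and \<psi>: "\<psi> \<in> fib W" and le: "le V \<phi> (rx h \<psi>)"
    and e: "is_ex D V trm (bang D V) \<phi> e" and e': "is_ex D W trm (bang D W) \<psi> e'"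
  shows "le trm e e'"
proof -
  have ef: "e' \<in> fib trm" using is_ex_fib[OF e'] .
  have "le W \<psi> (rx (bang D W) e')" using e' unfolding is_ex_def by auto
  then have "le V (rx h \<psi>) (rx h (rx (bang D W) e'))"
    using rx_mono h \<psi> rx_fib[OF bang_hom[OF W] ef] V W by auto
  moreover have "rx h (rx (bang D W) e') = rx (bang D V) e'"
    using rx_rx[OF h bang_hom[OF W] ef] bang_uniq[OF V cmp_hom[OF h bang_hom[OF W]]] V W by simp
  ultimately have "le V \<phi> (rx (bang D V) e')"
    using le_trans[OF le _ V \<phi> rx_fib[OF h \<psi> V W] rx_fib[OF bang_hom[OF V] ef V trm_ob]] by simp
  then show ?thesis using is_ex_le_iff[OF e bang_hom[OF V] V trm_ob \<phi> ef] by simp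
qed

section \<open>Equivalence relations and the quotient completion\<close>

text \<open>Equivalent to \<open>p_equiv\<close> (lemma \<open>p_equiv_iff_equiv_rel\<close>), but phrased with generalized
  elements \<open>a, b, c : G \<rightarrow> A\<close>.\<close>

definition equiv_rel :: "'o \<Rightarrow> 'p \<Rightarrow> bool" where
  "equiv_rel A \<rho> \<longleftrightarrow> A \<in> ob \<and> \<rho> \<in> fib (prd A A) \<and> (\<forall>G\<in>ob. \<forall>a\<in>hom G A. \<forall>b\<in>hom G A. \<forall>c \<in> hom G A.
     le G (tp G) (rx (pr a a) \<rho>) \<and> le G (rx (pr a b) \<rho>) (rx (pr b a) \<rho>) \<and>
     le G (mt G (rx (pr a b) \<rho>) (rx (pr b c) \<rho>)) (rx (pr a c) \<rho>))"

lemma p_equiv_imp_equiv_rel: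
  assumes pe: "p_equiv D A \<rho>"
  shows "equiv_rel A \<rho>"
proof -
  have A: "A \<in> ob" and r: "\<rho> \<in> fib (prd A A)" using pe unfolding p_equiv_def by auto
  define AA where "AA = prd A A"
  define T where "T = prd A AA"
  define x where "x = p1 A AA"
  define y where "y = cmp (p1 A A) (p2 A AA)"
  define z where "z = cmp (p2 A A) (p2 A AA)"
  have ob: "AA \<in> ob" "T \<in> ob" unfolding AA_def T_def using A by auto
  have xyz: "x \<in> hom T A" "y \<in> hom T A" "z \<in> hom T A" unfolding x_def y_def z_def T_def AA_def using A by (blast intro: hom_rules)+
  have refl: "le A (tp A) (rx (diag D A) \<rho>)" and sym: "le AA \<rho> (rx (pr (p2 A A) (p1 A A)) \<rho>)"
    and tr: "le T (mt T (rx (pr x y) \<rho>) (rx (pr y z) \<rho>)) (rx (pr x z) \<rho>)"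
    using pe unfolding p_equiv_def Let_def AA_def T_def x_def y_def z_def by auto
  have "le G (tp G) (rx (pr a a) \<rho>) \<and> le G (rx (pr a b) \<rho>) (rx (pr b a) \<rho>) \<and>
     le G (mt G (rx (pr a b) \<rho>) (rx (pr b c) \<rho>)) (rx (pr a c) \<rho>)"
    if G: "G \<in> ob" and a: "a \<in> hom G A" and b: "b \<in> hom G A" and c: "c \<in> hom G A" for G a b c
  proof (intro conjI)
    have "rx a (rx (diag D A) \<rho>) = rx (pr a a) \<rho>" unfolding diag_def
      using rx_rx_pr[of "idt A" A A "idt A" A a G \<rho>] G A a r by simp
    thus "le G (tp G) (rx (pr a a) \<rho>)" using rx_mono[OF refl a] G A a r rx_fib[OF diag_hom[OF A] r] by auto
  next
    have ab: "pr a b \<in> hom G AA" unfolding AA_def using G A a b by (blast intro: hom_rules)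
    have "rx (pr a b) (rx (pr (p2 A A) (p1 A A)) \<rho>) = rx (pr b a) \<rho>"
      using rx_rx_pr[of "p2 A A" AA A "p1 A A" A "pr a b" G \<rho>] G A a b r ab unfolding AA_def by simp
    moreover have "rx (pr (p2 A A) (p1 A A)) \<rho> \<in> fib (prd A A)" using A r by (blast intro: hom_rules rx_fib)
    ultimately show "le G (rx (pr a b) \<rho>) (rx (pr b a) \<rho>)" using rx_mono[OF sym ab] G A ob a b r ab unfolding AA_def
      by auto
  next
    have bc: "pr b c \<in> hom G AA" unfolding AA_def using G A b c by (blast intro: hom_rules)
    define k where "k = pr a (pr b c)"
    have k: "k \<in> hom G T" unfolding T_def k_def using bc a G A ob unfolding AA_def by (blast intro: hom_rules)
    have ck: "cmp x k = a" "cmp y k = b" "cmp z k = c" unfolding x_def y_def z_def k_def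
      using G A a b c bc cmp_p2_pr_cmp[of a G A "pr b c" AA "p1 A A" A] cmp_p2_pr_cmp[of a G A "pr b c" AA "p2 A A" A] unfolding AA_def
      by (simp_all add: p1_pr[of _ G] p2_pr[of _ G])
    have f: "rx (pr x y) \<rho> \<in> fib T" "rx (pr y z) \<rho> \<in> fib T" "rx (pr x z) \<rho> \<in> fib T"
      using xyz ob A r by (blast intro: hom_rules rx_fib)+
    have "rx k (mt T (rx (pr x y) \<rho>) (rx (pr y z) \<rho>)) = mt G (rx (pr a b) \<rho>) (rx (pr b c) \<rho>)"
      using f k G ob A r xyz rx_rx_pr[of x T A y A k G \<rho>] rx_rx_pr[of y T A z A k G \<rho>] ck by simp
    moreover have "rx k (rx (pr x z) \<rho>) = rx (pr a c) \<rho>"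
      using f k G ob A r xyz rx_rx_pr[of x T A z A k G \<rho>] ck by simp
    ultimately show "le G (mt G (rx (pr a b) \<rho>) (rx (pr b c) \<rho>)) (rx (pr a c) \<rho>)"
      using rx_mono[OF tr k] f G ob by (auto intro: mt_fib)
  qed
  thus ?thesis unfolding equiv_rel_def using A r by blast
qed

lemma equiv_rel_imp_p_equiv:
  assumes t: "equiv_rel A \<rho>"
  shows "p_equiv D A \<rho>"
proof -
  have A: "A \<in> ob" and r: "\<rho> \<in> fib (prd A A)" using t unfolding equiv_rel_def by auto
  have T: "\<And>G a b c. G \<in> ob \<Longrightarrow> a \<in> hom G A \<Longrightarrow> b \<in> hom G A \<Longrightarrow> c \<in> hom G A \<Longrightarrow>
     le G (tp G) (rx (pr a a) \<rho>) \<and> le G (rx (pr a b) \<rho>) (rx (pr b a) \<rho>) \<and>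
     le G (mt G (rx (pr a b) \<rho>) (rx (pr b c) \<rho>)) (rx (pr a c) \<rho>)"
    using t unfolding equiv_rel_def by blast
  have 1: "le A (tp A) (rx (diag D A) \<rho>)" unfolding diag_def using T[of A "idt A" "idt A" "idt A"] A by simp
  have 2: "le (prd A A) \<rho> (rx (pr (p2 A A) (p1 A A)) \<rho>)"
    using T[of "prd A A" "p1 A A" "p2 A A" "p2 A A"] A r by simp
  define AA where "AA = prd A A"
  have 3: "le (prd A AA) (mt (prd A AA) (rx (pr (p1 A AA) (cmp (p1 A A) (p2 A AA))) \<rho>) (rx (pr (cmp (p1 A A) (p2 A AA)) (cmp (p2 A A) (p2 A AA))) \<rho>))
                  (rx (pr (p1 A AA) (cmp (p2 A A) (p2 A AA))) \<rho>)"
    using T[of "prd A AA" "p1 A AA" "cmp (p1 A A) (p2 A AA)" "cmp (p2 A A) (p2 A AA)"] A unfolding AA_def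
    by (meson cmp_hom p1_hom p2_hom prd_ob)
  show ?thesis unfolding p_equiv_def Let_def using A r 1 2 3 unfolding AA_def by auto
qed

lemma p_equiv_iff_equiv_rel: "p_equiv D A \<rho> \<longleftrightarrow> equiv_rel A \<rho>" using p_equiv_imp_equiv_rel equiv_rel_imp_p_equiv by blast

lemma equiv_rel_refl: "equiv_rel A \<rho> \<Longrightarrow> G \<in> ob \<Longrightarrow> a \<in> hom G A \<Longrightarrow> le G (tp G) (rx (pr a a) \<rho>)"
  unfolding equiv_rel_def by blast
lemma equiv_rel_sym: "equiv_rel A \<rho> \<Longrightarrow> G \<in> ob \<Longrightarrow> a \<in> hom G A \<Longrightarrow> b \<in> hom G A \<Longrightarrow> le G (rx (pr a b) \<rho>) (rx (pr b a) \<rho>)"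
  unfolding equiv_rel_def by blast
lemma equiv_rel_trans: "equiv_rel A \<rho> \<Longrightarrow> G \<in> ob \<Longrightarrow> a \<in> hom G A \<Longrightarrow> b \<in> hom G A \<Longrightarrow> c \<in> hom G A \<Longrightarrow>
   le G (mt G (rx (pr a b) \<rho>) (rx (pr b c) \<rho>)) (rx (pr a c) \<rho>)"
  unfolding equiv_rel_def by blast
lemma equiv_rel_ob: "equiv_rel A \<rho> \<Longrightarrow> A \<in> ob" and equiv_rel_fib: "equiv_rel A \<rho> \<Longrightarrow> \<rho> \<in> fib (prd A A)"
  unfolding equiv_rel_def by auto

lemma equiv_rel_eq: "A \<in> ob \<Longrightarrow> equiv_rel A (eq A)"
  unfolding equiv_rel_def using eq_refl eq_sym eq_trans by (auto intro: pr_hom)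

definition related :: "'o \<Rightarrow> 'o \<Rightarrow> 'p \<Rightarrow> 'm \<Rightarrow> 'm \<Rightarrow> bool" where
  "related G A \<rho> f g \<longleftrightarrow> f \<in> hom G A \<and> g \<in> hom G A \<and> le G (tp G) (rx (pr f g) \<rho>)"

lemma related_refl: "equiv_rel A \<rho> \<Longrightarrow> G \<in> ob \<Longrightarrow> f \<in> hom G A \<Longrightarrow> related G A \<rho> f f"
  unfolding related_def using equiv_rel_refl by blast

lemma related_sym: "equiv_rel A \<rho> \<Longrightarrow> G \<in> ob \<Longrightarrow> related G A \<rho> f g \<Longrightarrow> related G A \<rho> g f"
proof -
  assume t: "equiv_rel A \<rho>" and G: "G \<in> ob" and fg: "related G A \<rho> f g"
  have A: "A \<in> ob" and r: "\<rho> \<in> fib (prd A A)" using t equiv_rel_ob equiv_rel_fib by auto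
  have h: "f \<in> hom G A" "g \<in> hom G A" using fg unfolding related_def by auto
  have fs: "rx (pr f g) \<rho> \<in> fib G" "rx (pr g f) \<rho> \<in> fib G"
    using rx_fib[OF pr_hom[OF h(1) h(2) G A A] r] rx_fib[OF pr_hom[OF h(2) h(1) G A A] r] G A by auto
  show ?thesis using le_trans[OF _ equiv_rel_sym[OF t G h] G _ fs] fg fs G h unfolding related_def by auto
qed

lemma related_trans: "equiv_rel A \<rho> \<Longrightarrow> G \<in> ob \<Longrightarrow> related G A \<rho> f g \<Longrightarrow> related G A \<rho> g h \<Longrightarrow> related G A \<rho> f h"
proof -
  assume t: "equiv_rel A \<rho>" and G: "G \<in> ob" and fg: "related G A \<rho> f g" and gh: "related G A \<rho> g h"
  have A: "A \<in> ob" and r: "\<rho> \<in> fib (prd A A)" using t equiv_rel_ob equiv_rel_fib by auto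
  have h: "f \<in> hom G A" "g \<in> hom G A" "h \<in> hom G A" using fg gh unfolding related_def by auto
  have fs: "rx (pr f g) \<rho> \<in> fib G" "rx (pr g h) \<rho> \<in> fib G" "rx (pr f h) \<rho> \<in> fib G"
    using h G A r by (blast intro: hom_rules rx_fib)+
  have "le G (tp G) (mt G (rx (pr f g) \<rho>) (rx (pr g h) \<rho>))"
    using fg gh fs G unfolding related_def by (intro le_mt) auto
  thus ?thesis using equiv_rel_trans[OF t G h] fs G le_trans h unfolding related_def by (meson mt_fib tp_fib)
qed

lemma related_cmp: "equiv_rel A \<rho> \<Longrightarrow> G \<in> ob \<Longrightarrow> G' \<in> ob \<Longrightarrow> related G A \<rho> f g \<Longrightarrow> k \<in> hom G' G \<Longrightarrow> related G' A \<rho> (cmp f k) (cmp g k)"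
proof -
  assume t: "equiv_rel A \<rho>" and G: "G \<in> ob" "G' \<in> ob" and fg: "related G A \<rho> f g" and k: "k \<in> hom G' G"
  have A: "A \<in> ob" and r: "\<rho> \<in> fib (prd A A)" using t equiv_rel_ob equiv_rel_fib by auto
  have h: "f \<in> hom G A" "g \<in> hom G A" using fg unfolding related_def by auto
  have "le G' (rx k (tp G)) (rx k (rx (pr f g) \<rho>))" using fg k G h A r unfolding related_def
    by (intro rx_mono) (blast intro: hom_rules rx_fib tp_fib)+
  thus ?thesis unfolding related_def using rx_rx_pr[of f G A g A k G' \<rho>] h k G A r by (auto intro: cmp_hom)
qed

lemma q_pres_hom: "q_pres D X Y m \<Longrightarrow> m \<in> hom (fst X) (fst Y)" unfolding q_pres_def by auto

lemma q_pres_le: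
  assumes m: "q_pres D X Y m" and X: "fst X \<in> ob" and Y: "fst Y \<in> ob" and sY: "snd Y \<in> fib (prd (fst Y) (fst Y))"
    and sX: "snd X \<in> fib (prd (fst X) (fst X))" and G: "G \<in> ob" and a: "a \<in> hom G (fst X)" and b: "b \<in> hom G (fst X)"
  shows "le G (rx (pr a b) (snd X)) (rx (pr (cmp m a) (cmp m b)) (snd Y))"
proof -
  have mh: "m \<in> hom (fst X) (fst Y)" using m unfolding q_pres_def by auto
  have le: "le (prd (fst X) (fst X)) (snd X) (rx (times D (fst X) (fst X) m m) (snd Y))" using m unfolding q_pres_def by auto
  have ab: "pr a b \<in> hom G (prd (fst X) (fst X))" using a b G X by (blast intro: hom_rules)
  have tm: "times D (fst X) (fst X) m m \<in> hom (prd (fst X) (fst X)) (prd (fst Y) (fst Y))" using mh X Y by (blast intro: times_hom)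
  have "rx (pr a b) (rx (times D (fst X) (fst X) m m) (snd Y)) = rx (pr (cmp m a) (cmp m b)) (snd Y)"
    using rx_rx[OF ab tm sY] times_pr[OF mh mh a b] G X Y by simp
  thus ?thesis using rx_mono[OF le ab] sX sY G X Y tm rx_fib[OF tm sY] by simp
qed

lemma q_presI:
  assumes mh: "m \<in> hom (fst X) (fst Y)" and X: "fst X \<in> ob" and Y: "fst Y \<in> ob" and sY: "snd Y \<in> fib (prd (fst Y) (fst Y))"
    and sX: "snd X \<in> fib (prd (fst X) (fst X))"
    and H: "le (prd (fst X) (fst X)) (rx (pr (p1 (fst X) (fst X)) (p2 (fst X) (fst X))) (snd X))
              (rx (pr (cmp m (p1 (fst X) (fst X))) (cmp m (p2 (fst X) (fst X)))) (snd Y))"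
  shows "q_pres D X Y m"
  using H mh X sX unfolding q_pres_def times_def by simp

lemma q_pres_related: "q_pres D X Y m \<Longrightarrow> equiv_rel (fst X) (snd X) \<Longrightarrow> equiv_rel (fst Y) (snd Y) \<Longrightarrow> G \<in> ob \<Longrightarrow>
   related G (fst X) (snd X) f g \<Longrightarrow> related G (fst Y) (snd Y) (cmp m f) (cmp m g)"
proof -
  assume m: "q_pres D X Y m" and tx: "equiv_rel (fst X) (snd X)" and ty: "equiv_rel (fst Y) (snd Y)" and G: "G \<in> ob"
    and fg: "related G (fst X) (snd X) f g"
  have h: "f \<in> hom G (fst X)" "g \<in> hom G (fst X)" "m \<in> hom (fst X) (fst Y)"
    using fg m unfolding related_def q_pres_def by auto
  have ob: "fst X \<in> ob" "fst Y \<in> ob" using tx ty equiv_rel_ob by auto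
  have f: "snd X \<in> fib (prd (fst X) (fst X))" "snd Y \<in> fib (prd (fst Y) (fst Y))" using tx ty equiv_rel_fib by auto
  have "le G (rx (pr f g) (snd X)) (rx (pr (cmp m f) (cmp m g)) (snd Y))"
    using q_pres_le[OF m ob(1) ob(2) f(2) f(1) G h(1) h(2)] .
  moreover have "cmp m f \<in> hom G (fst Y)" "cmp m g \<in> hom G (fst Y)" using h G ob by (blast intro: hom_rules)+
  ultimately show ?thesis using fg G le_trans ob f h unfolding related_def
    by (metis pr_hom prd_ob rx_fib tp_fib)
qed

lemma fst_q_prd[simp]: "fst (q_prd D X Y) = prd (fst X) (fst Y)" unfolding q_prd_def Let_def by simp

lemma snd_q_prd: "snd (q_prd D X Y) = mt (prd (prd (fst X) (fst Y)) (prd (fst X) (fst Y)))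
   (rx (times D (prd (fst X) (fst Y)) (prd (fst X) (fst Y)) (p1 (fst X) (fst Y)) (p1 (fst X) (fst Y))) (snd X))
   (rx (times D (prd (fst X) (fst Y)) (prd (fst X) (fst Y)) (p2 (fst X) (fst Y)) (p2 (fst X) (fst Y))) (snd Y))"
  unfolding q_prd_def Let_def by simp

lemma snd_q_prd_fib: "fst X \<in> ob \<Longrightarrow> fst Y \<in> ob \<Longrightarrow> snd X \<in> fib (prd (fst X) (fst X)) \<Longrightarrow> snd Y \<in> fib (prd (fst Y) (fst Y)) \<Longrightarrow>
   snd (q_prd D X Y) \<in> fib (prd (prd (fst X) (fst Y)) (prd (fst X) (fst Y)))"
proof -
  assume a: "fst X \<in> ob" "fst Y \<in> ob" "snd X \<in> fib (prd (fst X) (fst X))" "snd Y \<in> fib (prd (fst Y) (fst Y))"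
  let ?AB = "prd (fst X) (fst Y)"
  have t: "times D ?AB ?AB (p1 (fst X) (fst Y)) (p1 (fst X) (fst Y)) \<in> hom (prd ?AB ?AB) (prd (fst X) (fst X))"
    "times D ?AB ?AB (p2 (fst X) (fst Y)) (p2 (fst X) (fst Y)) \<in> hom (prd ?AB ?AB) (prd (fst Y) (fst Y))"
    using a by (blast intro: times_hom hom_rules)+
  show ?thesis unfolding snd_q_prd using rx_fib[OF t(1) a(3)] rx_fib[OF t(2) a(4)] a by simp
qed

lemma rx_pr_snd_q_prd:
  assumes X: "fst X \<in> ob" and Y: "fst Y \<in> ob" and sX: "snd X \<in> fib (prd (fst X) (fst X))" and sY: "snd Y \<in> fib (prd (fst Y) (fst Y))"
    and G: "G \<in> ob" and f: "f \<in> hom G (prd (fst X) (fst Y))" and g: "g \<in> hom G (prd (fst X) (fst Y))"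
  shows "rx (pr f g) (snd (q_prd D X Y)) = mt G (rx (pr (cmp (p1 (fst X) (fst Y)) f) (cmp (p1 (fst X) (fst Y)) g)) (snd X))
                                             (rx (pr (cmp (p2 (fst X) (fst Y)) f) (cmp (p2 (fst X) (fst Y)) g)) (snd Y))"
proof -
  let ?AB = "prd (fst X) (fst Y)"
  let ?t1 = "times D ?AB ?AB (p1 (fst X) (fst Y)) (p1 (fst X) (fst Y))"
  let ?t2 = "times D ?AB ?AB (p2 (fst X) (fst Y)) (p2 (fst X) (fst Y))"
  have t: "?t1 \<in> hom (prd ?AB ?AB) (prd (fst X) (fst X))" "?t2 \<in> hom (prd ?AB ?AB) (prd (fst Y) (fst Y))"
    using X Y by (blast intro: times_hom hom_rules)+
  have fg: "pr f g \<in> hom G (prd ?AB ?AB)" using f g G X Y by (blast intro: hom_rules)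
  have "rx (pr f g) (snd (q_prd D X Y)) = mt G (rx (cmp ?t1 (pr f g)) (snd X)) (rx (cmp ?t2 (pr f g)) (snd Y))"
    unfolding snd_q_prd using rx_mt[OF fg rx_fib[OF t(1) sX] rx_fib[OF t(2) sY]] rx_rx[OF fg t(1) sX] rx_rx[OF fg t(2) sY]
      G X Y by simp
  then show ?thesis using times_pr[OF p1_hom p1_hom f g] times_pr[OF p2_hom p2_hom f g] G X Y by simp
qed

lemma equiv_rel_q_prd:
  assumes tx: "equiv_rel (fst X) (snd X)" and ty: "equiv_rel (fst Y) (snd Y)"
  shows "equiv_rel (prd (fst X) (fst Y)) (snd (q_prd D X Y))"
proof -
  define A where "A = fst X"
  define B where "B = fst Y"
  have ob: "A \<in> ob" "B \<in> ob" using tx ty equiv_rel_ob unfolding A_def B_def by auto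
  have fs: "snd X \<in> fib (prd A A)" "snd Y \<in> fib (prd B B)" using tx ty equiv_rel_fib unfolding A_def B_def by auto
  have tx': "equiv_rel A (snd X)" and ty': "equiv_rel B (snd Y)" using tx ty unfolding A_def B_def by auto
  have "le G (tp G) (rx (pr a a) (snd (q_prd D X Y))) \<and> le G (rx (pr a b) (snd (q_prd D X Y))) (rx (pr b a) (snd (q_prd D X Y))) \<and>
     le G (mt G (rx (pr a b) (snd (q_prd D X Y))) (rx (pr b c) (snd (q_prd D X Y)))) (rx (pr a c) (snd (q_prd D X Y)))"
    if G: "G \<in> ob" and a: "a \<in> hom G (prd A B)" and b: "b \<in> hom G (prd A B)" and c: "c \<in> hom G (prd A B)" for G a b c
  proof -
    have h1: "cmp (p1 A B) a \<in> hom G A" "cmp (p1 A B) b \<in> hom G A" "cmp (p1 A B) c \<in> hom G A"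
      "cmp (p2 A B) a \<in> hom G B" "cmp (p2 A B) b \<in> hom G B" "cmp (p2 A B) c \<in> hom G B"
      using a b c G ob by (blast intro: hom_rules)+
    let ?a1 = "cmp (p1 A B) a" and ?b1 = "cmp (p1 A B) b" and ?c1 = "cmp (p1 A B) c"
    let ?a2 = "cmp (p2 A B) a" and ?b2 = "cmp (p2 A B) b" and ?c2 = "cmp (p2 A B) c"
    have R: "rx (pr u v) (snd (q_prd D X Y)) = mt G (rx (pr (cmp (p1 A B) u) (cmp (p1 A B) v)) (snd X)) (rx (pr (cmp (p2 A B) u) (cmp (p2 A B) v)) (snd Y))"
      if "u \<in> hom G (prd A B)" "v \<in> hom G (prd A B)" for u v
      using rx_pr_snd_q_prd[of X Y G u v] that ob fs G unfolding A_def B_def by simp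
    have F1: "rx (pr x y) (snd X) \<in> fib G" if "x \<in> hom G A" "y \<in> hom G A" for x y
      using rx_fib[OF pr_hom[OF that G ob(1) ob(1)] fs(1)] G ob by simp
    have F2: "rx (pr x y) (snd Y) \<in> fib G" if "x \<in> hom G B" "y \<in> hom G B" for x y
      using rx_fib[OF pr_hom[OF that G ob(2) ob(2)] fs(2)] G ob by simp
    show ?thesis
    proof (intro conjI)
      show "le G (tp G) (rx (pr a a) (snd (q_prd D X Y)))" unfolding R[OF a a]
        using equiv_rel_refl[OF tx' G h1(1)] equiv_rel_refl[OF ty' G h1(4)] F1 F2 h1 G by (intro le_mt) auto
      show "le G (rx (pr a b) (snd (q_prd D X Y))) (rx (pr b a) (snd (q_prd D X Y)))" unfolding R[OF a b] R[OF b a]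
        using equiv_rel_sym[OF tx' G h1(1) h1(2)] equiv_rel_sym[OF ty' G h1(4) h1(5)] F1 F2 h1 G by (intro mt_mono) auto
      have "le G (mt G (mt G (rx (pr ?a1 ?b1) (snd X)) (rx (pr ?a2 ?b2) (snd Y))) (mt G (rx (pr ?b1 ?c1) (snd X)) (rx (pr ?b2 ?c2) (snd Y))))
             (mt G (mt G (rx (pr ?a1 ?b1) (snd X)) (rx (pr ?b1 ?c1) (snd X))) (mt G (rx (pr ?a2 ?b2) (snd Y)) (rx (pr ?b2 ?c2) (snd Y))))"
        using F1 F2 h1 G by (intro mt_mt_swap_le) auto
      moreover have "le G (mt G (mt G (rx (pr ?a1 ?b1) (snd X)) (rx (pr ?b1 ?c1) (snd X))) (mt G (rx (pr ?a2 ?b2) (snd Y)) (rx (pr ?b2 ?c2) (snd Y))))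
             (mt G (rx (pr ?a1 ?c1) (snd X)) (rx (pr ?a2 ?c2) (snd Y)))"
        using equiv_rel_trans[OF tx' G h1(1-3)] equiv_rel_trans[OF ty' G h1(4-6)] F1 F2 h1 G by (intro mt_mono) auto
      ultimately show "le G (mt G (rx (pr a b) (snd (q_prd D X Y))) (rx (pr b c) (snd (q_prd D X Y)))) (rx (pr a c) (snd (q_prd D X Y)))"
        unfolding R[OF a b] R[OF b c] R[OF a c] using F1 F2 h1 G by (meson le_trans mt_fib)
    qed
  qed
  moreover have "snd (q_prd D X Y) \<in> fib (prd (prd A B) (prd A B))" using snd_q_prd_fib[of X Y] ob fs unfolding A_def B_def by simp
  ultimately show ?thesis unfolding equiv_rel_def A_def B_def using ob unfolding A_def B_def by auto
qed

lemma related_q_prd_iff: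
  assumes tx: "equiv_rel (fst X) (snd X)" and ty: "equiv_rel (fst Y) (snd Y)" and G: "G \<in> ob"
    and f: "f \<in> hom G (prd (fst X) (fst Y))" and g: "g \<in> hom G (prd (fst X) (fst Y))"
  shows "related G (prd (fst X) (fst Y)) (snd (q_prd D X Y)) f g \<longleftrightarrow>
     related G (fst X) (snd X) (cmp (p1 (fst X) (fst Y)) f) (cmp (p1 (fst X) (fst Y)) g) \<and>
     related G (fst Y) (snd Y) (cmp (p2 (fst X) (fst Y)) f) (cmp (p2 (fst X) (fst Y)) g)"
proof -
  have ob: "fst X \<in> ob" "fst Y \<in> ob" using tx ty equiv_rel_ob by auto
  have fs: "snd X \<in> fib (prd (fst X) (fst X))" "snd Y \<in> fib (prd (fst Y) (fst Y))" using tx ty equiv_rel_fib by auto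
  have h: "cmp (p1 (fst X) (fst Y)) f \<in> hom G (fst X)" "cmp (p1 (fst X) (fst Y)) g \<in> hom G (fst X)"
    "cmp (p2 (fst X) (fst Y)) f \<in> hom G (fst Y)" "cmp (p2 (fst X) (fst Y)) g \<in> hom G (fst Y)"
    using f g G ob by (blast intro: hom_rules)+
  have F: "rx (pr (cmp (p1 (fst X) (fst Y)) f) (cmp (p1 (fst X) (fst Y)) g)) (snd X) \<in> fib G"
     "rx (pr (cmp (p2 (fst X) (fst Y)) f) (cmp (p2 (fst X) (fst Y)) g)) (snd Y) \<in> fib G"
    using rx_fib[OF pr_hom[OF h(1) h(2) G ob(1) ob(1)] fs(1)] rx_fib[OF pr_hom[OF h(3) h(4) G ob(2) ob(2)] fs(2)] G ob by auto
  show ?thesis unfolding related_def rx_pr_snd_q_prd[OF ob fs G f g] using tp_le_mt[OF G F] f g h by auto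
qed

text \<open>The fibre of the quotient completion over \<open>X\<close>, see \<open>Q_simps\<close>.\<close>

definition qfib :: "'o \<times> 'p \<Rightarrow> 'p \<Rightarrow> bool" where
  "qfib X \<alpha> \<longleftrightarrow> \<alpha> \<in> fib (fst X) \<and> le (prd (fst X) (fst X))
      (mt (prd (fst X) (fst X)) (rx (p1 (fst X) (fst X)) \<alpha>) (snd X)) (rx (p2 (fst X) (fst X)) \<alpha>)"

lemma qfib_fib: "qfib X \<alpha> \<Longrightarrow> \<alpha> \<in> fib (fst X)" unfolding qfib_def by auto

lemma qfib_le:
  assumes q: "qfib X \<alpha>" and t: "equiv_rel (fst X) (snd X)" and G: "G \<in> ob" and a: "a \<in> hom G (fst X)" and b: "b \<in> hom G (fst X)"
  shows "le G (mt G (rx a \<alpha>) (rx (pr a b) (snd X))) (rx b \<alpha>)"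
proof -
  define A where "A = fst X"
  have A: "A \<in> ob" and r: "snd X \<in> fib (prd A A)" using t equiv_rel_ob equiv_rel_fib unfolding A_def by auto
  have al: "\<alpha> \<in> fib A" using q unfolding qfib_def A_def by auto
  have L: "le (prd A A) (mt (prd A A) (rx (p1 A A) \<alpha>) (snd X)) (rx (p2 A A) \<alpha>)" using q unfolding qfib_def A_def by auto
  have ab: "pr a b \<in> hom G (prd A A)" using a b G A unfolding A_def by (blast intro: hom_rules)
  have f: "rx (p1 A A) \<alpha> \<in> fib (prd A A)" "rx (p2 A A) \<alpha> \<in> fib (prd A A)" using al A by (blast intro: hom_rules rx_fib)+
  have e: "rx (pr a b) (rx (p1 A A) \<alpha>) = rx a \<alpha>" "rx (pr a b) (rx (p2 A A) \<alpha>) = rx b \<alpha>"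
    using rx_rx[OF ab _ al] G A a b unfolding A_def by (simp_all add: p1_pr[of _ G] p2_pr[of _ G])
  show ?thesis using rx_mono[OF L ab] f r e A G ab by simp
qed

lemma qfibI:
  assumes al: "\<alpha> \<in> fib (fst X)" and A: "fst X \<in> ob" and r: "snd X \<in> fib (prd (fst X) (fst X))"
    and H: "le (prd (fst X) (fst X)) (mt (prd (fst X) (fst X)) (rx (p1 (fst X) (fst X)) \<alpha>) (rx (pr (p1 (fst X) (fst X)) (p2 (fst X) (fst X))) (snd X))) (rx (p2 (fst X) (fst X)) \<alpha>)"
  shows "qfib X \<alpha>"
  using al H A r unfolding qfib_def by simp

lemma related_rx_eq:
  assumes q: "qfib X \<alpha>" and t: "equiv_rel (fst X) (snd X)" and G: "G \<in> ob" and fg: "related G (fst X) (snd X) f g"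
  shows "rx f \<alpha> = rx g \<alpha>"
proof -
  have gf: "related G (fst X) (snd X) g f" using related_sym[OF t G fg] .
  have A: "fst X \<in> ob" and r: "snd X \<in> fib (prd (fst X) (fst X))" using t equiv_rel_ob equiv_rel_fib by auto
  have h: "f \<in> hom G (fst X)" "g \<in> hom G (fst X)" using fg unfolding related_def by auto
  have al: "\<alpha> \<in> fib (fst X)" using q qfib_fib by auto
  have F: "rx f \<alpha> \<in> fib G" "rx g \<alpha> \<in> fib G" "rx (pr f g) (snd X) \<in> fib G" "rx (pr g f) (snd X) \<in> fib G"
    using h al G A r by (blast intro: hom_rules rx_fib)+
  have "le G (rx f \<alpha>) (mt G (rx f \<alpha>) (rx (pr f g) (snd X)))" using fg F G unfolding related_def
    by (intro le_mt) (auto intro: le_trans)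
  hence 1: "le G (rx f \<alpha>) (rx g \<alpha>)" using qfib_le[OF q t G h(1) h(2)] F G le_trans by (meson mt_fib)
  have "le G (rx g \<alpha>) (mt G (rx g \<alpha>) (rx (pr g f) (snd X)))" using gf F G unfolding related_def
    by (intro le_mt) (auto intro: le_trans)
  hence 2: "le G (rx g \<alpha>) (rx f \<alpha>)" using qfib_le[OF q t G h(2) h(1)] F G le_trans by (meson mt_fib)
  show ?thesis using le_antisym[OF 1 2 G F(1,2)] .
qed

lemma qfib_rx:
  assumes m: "q_pres D X Y m" and tx: "equiv_rel (fst X) (snd X)" and ty: "equiv_rel (fst Y) (snd Y)" and q: "qfib Y \<alpha>"
  shows "qfib X (rx m \<alpha>)"
proof -
  define A where "A = fst X"
  have A: "A \<in> ob" "fst Y \<in> ob" and r: "snd X \<in> fib (prd A A)" "snd Y \<in> fib (prd (fst Y) (fst Y))"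
    using tx ty equiv_rel_ob equiv_rel_fib unfolding A_def by auto
  have mh: "m \<in> hom A (fst Y)" using m unfolding q_pres_def A_def by auto
  have al: "\<alpha> \<in> fib (fst Y)" using q qfib_fib by auto
  have p: "p1 A A \<in> hom (prd A A) A" "p2 A A \<in> hom (prd A A) A" using A by auto
  have mp: "cmp m (p1 A A) \<in> hom (prd A A) (fst Y)" "cmp m (p2 A A) \<in> hom (prd A A) (fst Y)" using mh A p by (blast intro: hom_rules)+
  have e: "rx (p1 A A) (rx m \<alpha>) = rx (cmp m (p1 A A)) \<alpha>" "rx (p2 A A) (rx m \<alpha>) = rx (cmp m (p2 A A)) \<alpha>"
    using rx_rx[OF p(1) mh al] rx_rx[OF p(2) mh al] A by auto
  have F: "rx (cmp m (p1 A A)) \<alpha> \<in> fib (prd A A)" "rx (cmp m (p2 A A)) \<alpha> \<in> fib (prd A A)"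
    "rx (pr (p1 A A) (p2 A A)) (snd X) \<in> fib (prd A A)" "rx (pr (cmp m (p1 A A)) (cmp m (p2 A A))) (snd Y) \<in> fib (prd A A)"
    using mp al A r p by (blast intro: hom_rules rx_fib)+
  have "le (prd A A) (rx (pr (p1 A A) (p2 A A)) (snd X)) (rx (pr (cmp m (p1 A A)) (cmp m (p2 A A))) (snd Y))"
    using q_pres_le[OF m _ A(2) r(2) _ _ p[unfolded A_def]] A r unfolding A_def by auto
  hence "le (prd A A) (mt (prd A A) (rx (p1 A A) (rx m \<alpha>)) (rx (pr (p1 A A) (p2 A A)) (snd X)))
                       (mt (prd A A) (rx (cmp m (p1 A A)) \<alpha>) (rx (pr (cmp m (p1 A A)) (cmp m (p2 A A))) (snd Y)))"
    unfolding e using F A by (intro mt_mono) auto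
  moreover have "le (prd A A) (mt (prd A A) (rx (cmp m (p1 A A)) \<alpha>) (rx (pr (cmp m (p1 A A)) (cmp m (p2 A A))) (snd Y)))
     (rx (cmp m (p2 A A)) \<alpha>)" using qfib_le[OF q ty _ mp] A by simp
  ultimately show ?thesis unfolding A_def[symmetric]
    using F A e rx_fib[OF mh al] r by (intro qfibI) (auto simp: A_def[symmetric] intro: le_trans)
qed

lemma qfib_eq: "A \<in> ob \<Longrightarrow> \<alpha> \<in> fib A \<Longrightarrow> qfib (A, eq A) \<alpha>"
  using eq_closed[of "prd A A" A "p1 A A" "p2 A A" \<alpha>] by (intro qfibI) auto

abbreviation "qobj X \<equiv> equiv_rel (fst X) (snd X)"

lemma qobj_ob: "qobj X \<Longrightarrow> fst X \<in> ob" using equiv_rel_ob by blast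
lemma qobj_fib: "qobj X \<Longrightarrow> snd X \<in> fib (prd (fst X) (fst X))" using equiv_rel_fib by blast

lemma q_cls_self: "q_pres D X Y f \<Longrightarrow> f \<in> q_cls D X Y f"
  unfolding q_cls_def q_pres_def by auto

lemma q_cls_q_pres: "g \<in> q_cls D X Y f \<Longrightarrow> q_pres D X Y g" unfolding q_cls_def by auto

lemma q_cls_related:
  assumes X: "qobj X" and Y: "qobj Y" and g: "g \<in> q_cls D X Y f" and f: "f \<in> hom (fst X) (fst Y)"
  shows "related (fst X) (fst Y) (snd Y) f g"
proof -
  define A where "A = fst X"
  define B where "B = fst Y"
  have ob: "A \<in> ob" "B \<in> ob" using X Y qobj_ob unfolding A_def B_def by auto
  have fs: "snd X \<in> fib (prd A A)" "snd Y \<in> fib (prd B B)" using X Y qobj_fib unfolding A_def B_def by auto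
  have gh: "g \<in> hom A B" and L: "le (prd A A) (snd X) (rx (times D A A f g) (snd Y))"
    using g unfolding q_cls_def q_pres_def A_def B_def by auto
  have fh: "f \<in> hom A B" using f unfolding A_def B_def .
  have tm: "times D A A f g \<in> hom (prd A A) (prd B B)" using fh gh ob by (blast intro: times_hom)
  have d: "diag D A \<in> hom A (prd A A)" using ob by simp
  have "le A (rx (diag D A) (snd X)) (rx (diag D A) (rx (times D A A f g) (snd Y)))"
    using rx_mono[OF L d] fs ob rx_fib[OF tm fs(2)] by simp
  moreover have "rx (diag D A) (rx (times D A A f g) (snd Y)) = rx (pr f g) (snd Y)"
    using rx_rx[OF d tm fs(2)] times_pr[OF fh gh idt_hom[OF ob(1)] idt_hom[OF ob(1)]] ob fh gh unfolding diag_def by simp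
  moreover have "le A (tp A) (rx (diag D A) (snd X))" unfolding diag_def
    using equiv_rel_refl[OF X, of A "idt A"] ob unfolding A_def by simp
  moreover have "rx (diag D A) (snd X) \<in> fib A" "rx (pr f g) (snd Y) \<in> fib A"
    using rx_fib[OF d fs(1)] rx_fib[OF pr_hom[OF fh gh] fs(2)] ob by auto
  ultimately show ?thesis unfolding related_def A_def[symmetric] B_def[symmetric] using fh gh ob
    le_trans[of A "tp A" "rx (diag D A) (snd X)" "rx (pr f g) (snd Y)"] by auto
qed

lemma q_cls_subset:
  assumes X: "qobj X" and Y: "qobj Y" and ff: "related (fst X) (fst Y) (snd Y) f f'"
  shows "q_cls D X Y f \<subseteq> q_cls D X Y f'"
proof
  fix g assume g: "g \<in> q_cls D X Y f"
  define A where "A = fst X"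
  define B where "B = fst Y"
  have ob: "A \<in> ob" "B \<in> ob" "prd A A \<in> ob" using X Y qobj_ob unfolding A_def B_def by auto
  have fs: "snd X \<in> fib (prd A A)" "snd Y \<in> fib (prd B B)" using X Y qobj_fib unfolding A_def B_def by auto
  have gh: "g \<in> hom A B" and L: "le (prd A A) (snd X) (rx (times D A A f g) (snd Y))" and gp: "q_pres D X Y g"
    using g unfolding q_cls_def q_pres_def A_def B_def by auto
  have fh: "f \<in> hom A B" "f' \<in> hom A B" using ff unfolding related_def A_def B_def by auto
  have Y': "equiv_rel B (snd Y)" using Y unfolding B_def .
  let ?x = "p1 A A" and ?y = "p2 A A"
  have xy: "?x \<in> hom (prd A A) A" "?y \<in> hom (prd A A) A" using ob by auto
  have h: "cmp f ?x \<in> hom (prd A A) B" "cmp f' ?x \<in> hom (prd A A) B" "cmp g ?y \<in> hom (prd A A) B"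
    using fh gh xy ob by (blast intro: hom_rules)+
  have r: "related (prd A A) B (snd Y) (cmp f' ?x) (cmp f ?x)"
    using related_sym[OF Y' ob(3) related_cmp[OF Y' _ ob(3) ff[unfolded A_def[symmetric] B_def[symmetric]] xy(1)]] ob by simp
  have F: "rx (pr (cmp f' ?x) (cmp f ?x)) (snd Y) \<in> fib (prd A A)" "rx (pr (cmp f ?x) (cmp g ?y)) (snd Y) \<in> fib (prd A A)"
    "rx (pr (cmp f' ?x) (cmp g ?y)) (snd Y) \<in> fib (prd A A)"
    using h fs ob by (blast intro: hom_rules rx_fib)+
  have "le (prd A A) (snd X) (mt (prd A A) (rx (pr (cmp f' ?x) (cmp f ?x)) (snd Y)) (rx (pr (cmp f ?x) (cmp g ?y)) (snd Y)))"
    using L le_trans[OF le_tp[OF ob(3) fs(1)] _ ob(3) fs(1) tp_fib[OF ob(3)] F(1)] r F fs ob unfolding times_def related_def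
    by (intro le_mt) auto
  hence "le (prd A A) (snd X) (rx (pr (cmp f' ?x) (cmp g ?y)) (snd Y))"
    using equiv_rel_trans[OF Y' ob(3) h(2) h(1) h(3)] F fs ob by (meson le_trans mt_fib)
  thus "g \<in> q_cls D X Y f'" using gp unfolding q_cls_def times_def A_def B_def by simp
qed

lemma q_cls_eq: "qobj X \<Longrightarrow> qobj Y \<Longrightarrow> related (fst X) (fst Y) (snd Y) f f' \<Longrightarrow> q_cls D X Y f = q_cls D X Y f'"
  using q_cls_subset related_sym qobj_ob by (metis subset_antisym)

lemma q_rep_mem: "q_pres D X Y f \<Longrightarrow> q_rep (X, Y, q_cls D X Y f) \<in> q_cls D X Y f"
  unfolding q_rep_def using q_cls_self by (metis someI_ex snd_conv)

lemma q_rep_related: "qobj X \<Longrightarrow> qobj Y \<Longrightarrow> q_pres D X Y f \<Longrightarrow> related (fst X) (fst Y) (snd Y) f (q_rep (X, Y, q_cls D X Y f))"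
  using q_cls_related q_rep_mem q_pres_hom by blast

lemma q_pres_idt: "qobj X \<Longrightarrow> q_pres D X X (idt (fst X))"
  using qobj_ob qobj_fib by (intro q_presI) (auto intro: rx_fib pr_hom)

lemma q_pres_cmp:
  assumes X: "qobj X" and Y: "qobj Y" and Z: "qobj Z" and f: "q_pres D X Y f" and g: "q_pres D Y Z g"
  shows "q_pres D X Z (cmp g f)"
proof -
  define A where "A = fst X"
  have ob: "A \<in> ob" "fst Y \<in> ob" "fst Z \<in> ob" "prd A A \<in> ob" using X Y Z qobj_ob unfolding A_def by auto
  have fs: "snd X \<in> fib (prd A A)" "snd Y \<in> fib (prd (fst Y) (fst Y))" "snd Z \<in> fib (prd (fst Z) (fst Z))"
    using X Y Z qobj_fib unfolding A_def by auto
  have fh: "f \<in> hom A (fst Y)" "g \<in> hom (fst Y) (fst Z)" using f g q_pres_hom unfolding A_def by auto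
  have p: "p1 A A \<in> hom (prd A A) A" "p2 A A \<in> hom (prd A A) A" using ob by auto
  have fp: "cmp f (p1 A A) \<in> hom (prd A A) (fst Y)" "cmp f (p2 A A) \<in> hom (prd A A) (fst Y)" using fh p ob by (blast intro: hom_rules)+
  have 1: "le (prd A A) (rx (pr (p1 A A) (p2 A A)) (snd X)) (rx (pr (cmp f (p1 A A)) (cmp f (p2 A A))) (snd Y))"
    unfolding A_def by (rule q_pres_le[OF f _ ob(2) fs(2) _ _ p[unfolded A_def]]) (use ob fs A_def in auto)
  have 2: "le (prd A A) (rx (pr (cmp f (p1 A A)) (cmp f (p2 A A))) (snd Y)) (rx (pr (cmp g (cmp f (p1 A A))) (cmp g (cmp f (p2 A A)))) (snd Z))"
    using q_pres_le[OF g ob(2) ob(3) fs(3) fs(2) ob(4) fp] .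
  have e: "cmp (cmp g f) (p1 A A) = cmp g (cmp f (p1 A A))" "cmp (cmp g f) (p2 A A) = cmp g (cmp f (p2 A A))"
    using cmp_assoc[OF p(1) fh, symmetric] cmp_assoc[OF p(2) fh, symmetric] ob by auto
  have F: "rx (pr (p1 A A) (p2 A A)) (snd X) \<in> fib (prd A A)" "rx (pr (cmp f (p1 A A)) (cmp f (p2 A A))) (snd Y) \<in> fib (prd A A)"
    "rx (pr (cmp g (cmp f (p1 A A))) (cmp g (cmp f (p2 A A)))) (snd Z) \<in> fib (prd A A)"
    using p fp fh fs ob by (blast intro: hom_rules rx_fib)+
  have "le (prd A A) (rx (pr (p1 A A) (p2 A A)) (snd X)) (rx (pr (cmp (cmp g f) (p1 A A)) (cmp (cmp g f) (p2 A A))) (snd Z))"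
    unfolding e using le_trans[OF 1 2 ob(4) F] .
  moreover have "cmp g f \<in> hom A (fst Z)" using fh ob by (blast intro: hom_rules)
  ultimately show ?thesis using ob fs unfolding A_def by (intro q_presI) auto
qed

lemma q_pres_p1:
  assumes X: "qobj X" and Y: "qobj Y"
  shows "q_pres D (q_prd D X Y) X (p1 (fst X) (fst Y))"
proof -
  define AB where "AB = prd (fst X) (fst Y)"
  have ob: "fst X \<in> ob" "fst Y \<in> ob" "AB \<in> ob" "prd AB AB \<in> ob" using X Y qobj_ob unfolding AB_def by auto
  have fs: "snd X \<in> fib (prd (fst X) (fst X))" "snd Y \<in> fib (prd (fst Y) (fst Y))" using X Y qobj_fib by auto
  have p: "p1 AB AB \<in> hom (prd AB AB) (prd (fst X) (fst Y))" "p2 AB AB \<in> hom (prd AB AB) (prd (fst X) (fst Y))"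
    using ob unfolding AB_def by auto
  have h: "cmp (p1 (fst X) (fst Y)) (p1 AB AB) \<in> hom (prd AB AB) (fst X)" "cmp (p1 (fst X) (fst Y)) (p2 AB AB) \<in> hom (prd AB AB) (fst X)"
    "cmp (p2 (fst X) (fst Y)) (p1 AB AB) \<in> hom (prd AB AB) (fst Y)" "cmp (p2 (fst X) (fst Y)) (p2 AB AB) \<in> hom (prd AB AB) (fst Y)"
    using p ob by (blast intro: hom_rules)+
  have F: "rx (pr (cmp (p1 (fst X) (fst Y)) (p1 AB AB)) (cmp (p1 (fst X) (fst Y)) (p2 AB AB))) (snd X) \<in> fib (prd AB AB)"
    "rx (pr (cmp (p2 (fst X) (fst Y)) (p1 AB AB)) (cmp (p2 (fst X) (fst Y)) (p2 AB AB))) (snd Y) \<in> fib (prd AB AB)"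
    using h fs ob by (blast intro: hom_rules rx_fib)+
  have pp: "p1 (fst X) (fst Y) \<in> hom AB (fst X)" "p2 (fst X) (fst Y) \<in> hom AB (fst Y)" using ob unfolding AB_def by auto
  show ?thesis using rx_pr_snd_q_prd[OF ob(1,2) fs ob(4) p] F ob fs snd_q_prd_fib[OF ob(1,2) fs] pp
    by (intro q_presI) (auto simp: AB_def[symmetric])
qed

lemma q_pres_p2:
  assumes X: "qobj X" and Y: "qobj Y"
  shows "q_pres D (q_prd D X Y) Y (p2 (fst X) (fst Y))"
proof -
  define AB where "AB = prd (fst X) (fst Y)"
  have ob: "fst X \<in> ob" "fst Y \<in> ob" "AB \<in> ob" "prd AB AB \<in> ob" using X Y qobj_ob unfolding AB_def by auto
  have fs: "snd X \<in> fib (prd (fst X) (fst X))" "snd Y \<in> fib (prd (fst Y) (fst Y))" using X Y qobj_fib by auto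
  have p: "p1 AB AB \<in> hom (prd AB AB) (prd (fst X) (fst Y))" "p2 AB AB \<in> hom (prd AB AB) (prd (fst X) (fst Y))"
    using ob unfolding AB_def by auto
  have h: "cmp (p1 (fst X) (fst Y)) (p1 AB AB) \<in> hom (prd AB AB) (fst X)" "cmp (p1 (fst X) (fst Y)) (p2 AB AB) \<in> hom (prd AB AB) (fst X)"
    "cmp (p2 (fst X) (fst Y)) (p1 AB AB) \<in> hom (prd AB AB) (fst Y)" "cmp (p2 (fst X) (fst Y)) (p2 AB AB) \<in> hom (prd AB AB) (fst Y)"
    using p ob by (blast intro: hom_rules)+
  have F: "rx (pr (cmp (p1 (fst X) (fst Y)) (p1 AB AB)) (cmp (p1 (fst X) (fst Y)) (p2 AB AB))) (snd X) \<in> fib (prd AB AB)"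
    "rx (pr (cmp (p2 (fst X) (fst Y)) (p1 AB AB)) (cmp (p2 (fst X) (fst Y)) (p2 AB AB))) (snd Y) \<in> fib (prd AB AB)"
    using h fs ob by (blast intro: hom_rules rx_fib)+
  have pp: "p1 (fst X) (fst Y) \<in> hom AB (fst X)" "p2 (fst X) (fst Y) \<in> hom AB (fst Y)" using ob unfolding AB_def by auto
  show ?thesis using rx_pr_snd_q_prd[OF ob(1,2) fs ob(4) p] F ob fs snd_q_prd_fib[OF ob(1,2) fs] pp
    by (intro q_presI) (auto simp: AB_def[symmetric])
qed

lemma q_pres_pr:
  assumes X: "qobj X" and Y1: "qobj Y1" and Y2: "qobj Y2" and f: "q_pres D X Y1 f" and g: "q_pres D X Y2 g"
  shows "q_pres D X (q_prd D Y1 Y2) (pr f g)"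
proof -
  define A where "A = fst X"
  have ob: "A \<in> ob" "fst Y1 \<in> ob" "fst Y2 \<in> ob" "prd A A \<in> ob" using X Y1 Y2 qobj_ob unfolding A_def by auto
  have fs: "snd X \<in> fib (prd A A)" "snd Y1 \<in> fib (prd (fst Y1) (fst Y1))" "snd Y2 \<in> fib (prd (fst Y2) (fst Y2))"
    using X Y1 Y2 qobj_fib unfolding A_def by auto
  have fh: "f \<in> hom A (fst Y1)" "g \<in> hom A (fst Y2)" using f g q_pres_hom unfolding A_def by auto
  have p: "p1 A A \<in> hom (prd A A) A" "p2 A A \<in> hom (prd A A) A" using ob by auto
  have fgh: "pr f g \<in> hom A (prd (fst Y1) (fst Y2))" using fh ob by (blast intro: hom_rules)
  have q: "cmp (pr f g) (p1 A A) \<in> hom (prd A A) (prd (fst Y1) (fst Y2))" "cmp (pr f g) (p2 A A) \<in> hom (prd A A) (prd (fst Y1) (fst Y2))"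
    using fgh p ob by (blast intro: hom_rules)+
  have e: "cmp (p1 (fst Y1) (fst Y2)) (cmp (pr f g) (p1 A A)) = cmp f (p1 A A)" "cmp (p1 (fst Y1) (fst Y2)) (cmp (pr f g) (p2 A A)) = cmp f (p2 A A)"
    "cmp (p2 (fst Y1) (fst Y2)) (cmp (pr f g) (p1 A A)) = cmp g (p1 A A)" "cmp (p2 (fst Y1) (fst Y2)) (cmp (pr f g) (p2 A A)) = cmp g (p2 A A)"
    using cmp_assoc[OF p(1) fgh p1_hom] cmp_assoc[OF p(2) fgh p1_hom] cmp_assoc[OF p(1) fgh p2_hom] cmp_assoc[OF p(2) fgh p2_hom] ob fh
    by (auto simp: p1_pr[of _ A] p2_pr[of _ A])
  have 1: "le (prd A A) (rx (pr (p1 A A) (p2 A A)) (snd X)) (rx (pr (cmp f (p1 A A)) (cmp f (p2 A A))) (snd Y1))"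
    unfolding A_def by (rule q_pres_le[OF f _ ob(2) fs(2) _ _ p[unfolded A_def]]) (use ob fs A_def in auto)
  have 2: "le (prd A A) (rx (pr (p1 A A) (p2 A A)) (snd X)) (rx (pr (cmp g (p1 A A)) (cmp g (p2 A A))) (snd Y2))"
    unfolding A_def by (rule q_pres_le[OF g _ ob(3) fs(3) _ _ p[unfolded A_def]]) (use ob fs A_def in auto)
  have F: "rx (pr (cmp f (p1 A A)) (cmp f (p2 A A))) (snd Y1) \<in> fib (prd A A)" "rx (pr (cmp g (p1 A A)) (cmp g (p2 A A))) (snd Y2) \<in> fib (prd A A)"
    "rx (pr (p1 A A) (p2 A A)) (snd X) \<in> fib (prd A A)"
    using fh p fs ob by (blast intro: hom_rules rx_fib)+
  have H: "le (prd A A) (rx (pr (p1 A A) (p2 A A)) (snd X)) (rx (pr (cmp (pr f g) (p1 A A)) (cmp (pr f g) (p2 A A))) (snd (q_prd D Y1 Y2)))"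
    unfolding rx_pr_snd_q_prd[OF ob(2,3) fs(2,3) ob(4) q] e using 1 2 F ob by (intro le_mt) auto
  show ?thesis using fgh ob fs snd_q_prd_fib[OF ob(2,3) fs(2,3)] H unfolding A_def by (intro q_presI) auto
qed

abbreviation "Q \<equiv> quotient_completion D"

lemma Q_simps:
  "d_ob Q = {X. p_equiv D (fst X) (snd X)}"
  "d_hom Q X Y = (if p_equiv D (fst X) (snd X) \<and> p_equiv D (fst Y) (snd Y) then {(X, Y, q_cls D X Y f) | f. q_pres D X Y f} else {})"
  "d_cmp Q G F = (fst F, fst (snd G), q_cls D (fst F) (fst (snd G)) (cmp (q_rep G) (q_rep F)))"
  "d_idt Q X = (X, X, q_cls D X X (idt (fst X)))"
  "d_trm Q = (trm, tp (prd trm trm))"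
  "d_prd Q = q_prd D"
  "d_pi1 Q X Y = (q_prd D X Y, X, q_cls D (q_prd D X Y) X (p1 (fst X) (fst Y)))"
  "d_pi2 Q X Y = (q_prd D X Y, Y, q_cls D (q_prd D X Y) Y (p2 (fst X) (fst Y)))"
  "d_pr Q F G = (fst F, q_prd D (fst (snd F)) (fst (snd G)), q_cls D (fst F) (q_prd D (fst (snd F)) (fst (snd G))) (pr (q_rep F) (q_rep G)))"
  "d_fib Q X = {\<alpha>. qfib X \<alpha>}"
  "d_le Q X = le (fst X)"
  "d_tp Q X = tp (fst X)"
  "d_mt Q X = mt (fst X)"
  "d_rx Q F = rx (q_rep F)"
  unfolding quotient_completion_def qfib_def by auto

lemma Q_ob_iff: "X \<in> d_ob Q \<longleftrightarrow> qobj X" unfolding Q_simps p_equiv_iff_equiv_rel by simp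

lemma Q_hom_iff: "F \<in> d_hom Q X Y \<longleftrightarrow> qobj X \<and> qobj Y \<and> (\<exists>f. q_pres D X Y f \<and> F = (X, Y, q_cls D X Y f))"
  unfolding Q_simps p_equiv_iff_equiv_rel by auto

lemma Q_hom_rep:
  assumes F: "F \<in> d_hom Q X Y"
  shows "qobj X" "qobj Y" "q_pres D X Y (q_rep F)" "F = (X, Y, q_cls D X Y (q_rep F))"
proof -
  obtain f where X: "qobj X" and Y: "qobj Y" and f: "q_pres D X Y f" and Fe: "F = (X, Y, q_cls D X Y f)"
    using F unfolding Q_hom_iff by blast
  have r: "q_rep F \<in> q_cls D X Y f" using q_rep_mem[OF f] Fe by simp
  show "qobj X" "qobj Y" using X Y by auto
  show "q_pres D X Y (q_rep F)" using r q_cls_q_pres by blast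
  show "F = (X, Y, q_cls D X Y (q_rep F))" using Fe q_cls_eq[OF X Y q_cls_related[OF X Y r q_pres_hom[OF f]]] by simp
qed

lemma Q_hom_of_q_pres:
  assumes X: "qobj X" and Y: "qobj Y" and f: "q_pres D X Y f"
  shows "(X, Y, q_cls D X Y f) \<in> d_hom Q X Y" "related (fst X) (fst Y) (snd Y) f (q_rep (X, Y, q_cls D X Y f))"
  using X Y f q_rep_related[OF X Y f] unfolding Q_hom_iff by auto

lemma Q_rep_hom: "F \<in> d_hom Q X Y \<Longrightarrow> q_rep F \<in> hom (fst X) (fst Y)"
  using Q_hom_rep(3) q_pres_hom by blast

lemma Q_cmp:
  assumes F: "F \<in> d_hom Q X Y" and G: "G \<in> d_hom Q Y Z"
  shows "d_cmp Q G F = (X, Z, q_cls D X Z (cmp (q_rep G) (q_rep F)))"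
    "d_cmp Q G F \<in> d_hom Q X Z"
    "related (fst X) (fst Z) (snd Z) (cmp (q_rep G) (q_rep F)) (q_rep (d_cmp Q G F))"
proof -
  have X: "qobj X" and Y: "qobj Y" and Z: "qobj Z" using Q_hom_rep[OF F] Q_hom_rep[OF G] by auto
  have e: "d_cmp Q G F = (X, Z, q_cls D X Z (cmp (q_rep G) (q_rep F)))"
    using Q_hom_rep(4)[OF F] Q_hom_rep(4)[OF G] unfolding Q_simps by (metis fst_conv snd_conv)
  have p: "q_pres D X Z (cmp (q_rep G) (q_rep F))" using q_pres_cmp[OF X Y Z Q_hom_rep(3)[OF F] Q_hom_rep(3)[OF G]] .
  show "d_cmp Q G F = (X, Z, q_cls D X Z (cmp (q_rep G) (q_rep F)))" by (rule e)
  show "d_cmp Q G F \<in> d_hom Q X Z" "related (fst X) (fst Z) (snd Z) (cmp (q_rep G) (q_rep F)) (q_rep (d_cmp Q G F))"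
    unfolding e using Q_hom_of_q_pres[OF X Z p] by auto
qed

lemma Q_idt:
  assumes X: "qobj X"
  shows "d_idt Q X \<in> d_hom Q X X" "related (fst X) (fst X) (snd X) (idt (fst X)) (q_rep (d_idt Q X))"
  unfolding Q_simps(4) using Q_hom_of_q_pres[OF X X q_pres_idt[OF X]] by auto

lemma Q_pi1:
  assumes X: "qobj X" and Y: "qobj Y"
  shows "d_pi1 Q X Y \<in> d_hom Q (q_prd D X Y) X" "related (prd (fst X) (fst Y)) (fst X) (snd X) (p1 (fst X) (fst Y)) (q_rep (d_pi1 Q X Y))"
  unfolding Q_simps(7) using Q_hom_of_q_pres[OF equiv_rel_q_prd[OF X Y, folded fst_q_prd] X q_pres_p1[OF X Y]] by auto

lemma Q_pi2:
  assumes X: "qobj X" and Y: "qobj Y"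
  shows "d_pi2 Q X Y \<in> d_hom Q (q_prd D X Y) Y" "related (prd (fst X) (fst Y)) (fst Y) (snd Y) (p2 (fst X) (fst Y)) (q_rep (d_pi2 Q X Y))"
  unfolding Q_simps(8) using Q_hom_of_q_pres[OF equiv_rel_q_prd[OF X Y, folded fst_q_prd] Y q_pres_p2[OF X Y]] by auto

lemma Q_pr:
  assumes F: "F \<in> d_hom Q X Y1" and G: "G \<in> d_hom Q X Y2"
  shows "d_pr Q F G \<in> d_hom Q X (q_prd D Y1 Y2)"
    "related (fst X) (prd (fst Y1) (fst Y2)) (snd (q_prd D Y1 Y2)) (pr (q_rep F) (q_rep G)) (q_rep (d_pr Q F G))"
proof -
  have X: "qobj X" and Y1: "qobj Y1" and Y2: "qobj Y2" using Q_hom_rep[OF F] Q_hom_rep[OF G] by auto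
  have e: "d_pr Q F G = (X, q_prd D Y1 Y2, q_cls D X (q_prd D Y1 Y2) (pr (q_rep F) (q_rep G)))"
    using Q_hom_rep(4)[OF F] Q_hom_rep(4)[OF G] unfolding Q_simps by (metis fst_conv snd_conv)
  have p: "q_pres D X (q_prd D Y1 Y2) (pr (q_rep F) (q_rep G))" using q_pres_pr[OF X Y1 Y2 Q_hom_rep(3)[OF F] Q_hom_rep(3)[OF G]] .
  show "d_pr Q F G \<in> d_hom Q X (q_prd D Y1 Y2)" "related (fst X) (prd (fst Y1) (fst Y2)) (snd (q_prd D Y1 Y2)) (pr (q_rep F) (q_rep G)) (q_rep (d_pr Q F G))"
    unfolding e using Q_hom_of_q_pres[OF X equiv_rel_q_prd[OF Y1 Y2, folded fst_q_prd] p] by auto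
qed

lemma qobj_trm: "qobj (trm, tp (prd trm trm))"
  unfolding equiv_rel_def by (auto intro!: le_mt simp: rx_tp[OF pr_hom])

lemma Q_bang:
  assumes X: "qobj X"
  shows "bang Q X \<in> d_hom Q X (d_trm Q)" "q_rep (bang Q X) = bang D (fst X)"
proof -
  have p: "q_pres D X (trm, tp (prd trm trm)) (bang D (fst X))"
  proof -
    have A: "fst X \<in> ob" using qobj_ob[OF X] .
    have hb: "pr (cmp (bang D (fst X)) (p1 (fst X) (fst X))) (cmp (bang D (fst X)) (p2 (fst X) (fst X))) \<in> hom (prd (fst X) (fst X)) (prd trm trm)"
      using A by (blast intro: hom_rules bang_hom)
    show ?thesis using X qobj_ob qobj_fib rx_tp[OF hb] A by (intro q_presI) auto
  qed
  have ex: "\<exists>t. t \<in> d_hom Q X (d_trm Q)" using Q_hom_of_q_pres(1)[OF X qobj_trm p] unfolding Q_simps(5) by (rule exI)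
  show b: "bang Q X \<in> d_hom Q X (d_trm Q)" unfolding bang_def using someI_ex[OF ex] .
  show "q_rep (bang Q X) = bang D (fst X)" using Q_rep_hom[OF b] bang_uniq qobj_ob[OF X] unfolding Q_simps(5) by simp
qed

lemma eq_le_related_subst:
  assumes t: "equiv_rel B \<sigma>" and G: "G \<in> ob" and A: "A \<in> ob" and u: "u \<in> hom (prd G A) B" and s: "s \<in> hom G A" and tt: "t \<in> hom G A"
  shows "le G (rx (pr s t) (eq A)) (rx (pr (cmp u (pr (idt G) s)) (cmp u (pr (idt G) t))) \<sigma>)"
proof -
  have B: "B \<in> ob" and sf: "\<sigma> \<in> fib (prd B B)" using t equiv_rel_ob equiv_rel_fib by auto
  have js: "pr (idt G) s \<in> hom G (prd G A)" and jt: "pr (idt G) t \<in> hom G (prd G A)" using G A s tt by (blast intro: hom_rules)+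
  have us: "cmp u (pr (idt G) s) \<in> hom G B" and ut: "cmp u (pr (idt G) t) \<in> hom G B" using js jt u G A B by (blast intro: hom_rules)+
  have v: "cmp (cmp u (pr (idt G) s)) (p1 G A) \<in> hom (prd G A) B" using us G A B by (blast intro: hom_rules)
  define \<phi> where "\<phi> = rx (pr (cmp (cmp u (pr (idt G) s)) (p1 G A)) u) \<sigma>"
  have ph: "\<phi> \<in> fib (prd G A)" unfolding \<phi>_def using v u G A B sf by (blast intro: hom_rules rx_fib)
  have 1: "rx (pr (idt G) s) \<phi> = rx (pr (cmp u (pr (idt G) s)) (cmp u (pr (idt G) s))) \<sigma>" unfolding \<phi>_def
    using rx_pr_idt_rx_pr[OF s v u sf G A B B] cmp_p1_pr_idt_cmp[OF s us G A B] by simp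
  have 2: "rx (pr (idt G) t) \<phi> = rx (pr (cmp u (pr (idt G) s)) (cmp u (pr (idt G) t))) \<sigma>" unfolding \<phi>_def
    using rx_pr_idt_rx_pr[OF tt v u sf G A B B] cmp_p1_pr_idt_cmp[OF tt us G A B] by simp
  have r: "le G (tp G) (rx (pr (idt G) s) \<phi>)" unfolding 1 using equiv_rel_refl[OF t G us] .
  have F: "rx (pr (idt G) s) \<phi> \<in> fib G" "rx (pr s t) (eq A) \<in> fib G" "rx (pr (idt G) t) \<phi> \<in> fib G"
    using rx_fib[OF js ph] rx_fib[OF pr_hom[OF s tt G A A] eq_fib[OF A]] rx_fib[OF jt ph] G A by auto
  have "le G (rx (pr s t) (eq A)) (mt G (rx (pr (idt G) s) \<phi>) (rx (pr s t) (eq A)))"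
    using r F G le_trans[OF le_tp[OF G F(2)] r] by (intro le_mt) auto
  thus ?thesis using eq_subst[OF G A ph s tt] 2 F G le_trans by (metis mt_fib)
qed

lemma Q_times:
  assumes H: "H \<in> d_hom Q X Y" and A: "qobj A"
  defines "T \<equiv> times Q X A H (d_idt Q A)"
  shows "T \<in> d_hom Q (q_prd D X A) (q_prd D Y A)"
    "related (prd (fst X) (fst A)) (prd (fst Y) (fst A)) (snd (q_prd D Y A)) (times D (fst X) (fst A) (q_rep H) (idt (fst A))) (q_rep T)"
proof -
  have X: "qobj X" and Y: "qobj Y" using Q_hom_rep[OF H] by auto
  have ob: "fst X \<in> ob" "fst Y \<in> ob" "fst A \<in> ob" using X Y A qobj_ob by auto
  let ?XA = "prd (fst X) (fst A)"
  have XA: "?XA \<in> ob" using ob by simp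
  have XAo: "qobj (q_prd D X A)" using equiv_rel_q_prd[OF X A] by simp
  let ?r = "q_rep H"
  have rp: "q_pres D X Y ?r" and rh: "?r \<in> hom (fst X) (fst Y)" using Q_hom_rep[OF H] q_pres_hom by auto
  define C1 where "C1 = d_cmp Q H (d_pi1 Q X A)"
  define C2 where "C2 = d_cmp Q (d_idt Q A) (d_pi2 Q X A)"
  have P1: "d_pi1 Q X A \<in> d_hom Q (q_prd D X A) X" and P1r: "related ?XA (fst X) (snd X) (p1 (fst X) (fst A)) (q_rep (d_pi1 Q X A))"
    using Q_pi1[OF X A] by auto
  have P2: "d_pi2 Q X A \<in> d_hom Q (q_prd D X A) A" and P2r: "related ?XA (fst A) (snd A) (p2 (fst X) (fst A)) (q_rep (d_pi2 Q X A))"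
    using Q_pi2[OF X A] by auto
  have I: "d_idt Q A \<in> d_hom Q A A" and Ir: "related (fst A) (fst A) (snd A) (idt (fst A)) (q_rep (d_idt Q A))" using Q_idt[OF A] by auto
  have C1h: "C1 \<in> d_hom Q (q_prd D X A) Y" and C1r: "related ?XA (fst Y) (snd Y) (cmp ?r (q_rep (d_pi1 Q X A))) (q_rep C1)"
    using Q_cmp[OF P1 H] unfolding C1_def by auto
  have C2h: "C2 \<in> d_hom Q (q_prd D X A) A" and C2r: "related ?XA (fst A) (snd A) (cmp (q_rep (d_idt Q A)) (q_rep (d_pi2 Q X A))) (q_rep C2)"
    using Q_cmp[OF P2 I] unfolding C2_def by auto
  have p1r: "q_rep (d_pi1 Q X A) \<in> hom ?XA (fst X)" and p2r: "q_rep (d_pi2 Q X A) \<in> hom ?XA (fst A)"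
    using P1r P2r unfolding related_def by auto
  have a1: "related ?XA (fst Y) (snd Y) (cmp ?r (p1 (fst X) (fst A))) (q_rep C1)"
    using related_trans[OF Y XA q_pres_related[OF rp X Y XA P1r] C1r] .
  have "related ?XA (fst A) (snd A) (cmp (idt (fst A)) (q_rep (d_pi2 Q X A))) (cmp (q_rep (d_idt Q A)) (q_rep (d_pi2 Q X A)))"
    using related_cmp[OF A ob(3) XA Ir p2r] .
  hence a2: "related ?XA (fst A) (snd A) (p2 (fst X) (fst A)) (q_rep C2)"
    using related_trans[OF A XA P2r] related_trans[OF A XA _ C2r] cmp_idl[OF p2r XA ob(3)] by simp
  have Th: "T = d_pr Q C1 C2" unfolding T_def times_def C1_def C2_def by simp
  show "T \<in> d_hom Q (q_prd D X A) (q_prd D Y A)" unfolding Th using Q_pr[OF C1h C2h] by simp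
  have Tr: "related ?XA (prd (fst Y) (fst A)) (snd (q_prd D Y A)) (pr (q_rep C1) (q_rep C2)) (q_rep T)"
    unfolding Th using Q_pr[OF C1h C2h] by simp
  have rc: "q_rep C1 \<in> hom ?XA (fst Y)" "q_rep C2 \<in> hom ?XA (fst A)" using C1r C2r unfolding related_def by auto
  have tm: "times D (fst X) (fst A) ?r (idt (fst A)) = pr (cmp ?r (p1 (fst X) (fst A))) (p2 (fst X) (fst A))"
    unfolding times_def using ob by simp
  have rp1: "cmp ?r (p1 (fst X) (fst A)) \<in> hom ?XA (fst Y)" using rh ob by (blast intro: hom_rules)
  have "related ?XA (prd (fst Y) (fst A)) (snd (q_prd D Y A)) (pr (cmp ?r (p1 (fst X) (fst A))) (p2 (fst X) (fst A))) (pr (q_rep C1) (q_rep C2))"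
    using related_q_prd_iff[OF Y A XA pr_hom[OF rp1 p2_hom] pr_hom[OF rc]] a1 a2 ob rp1 rc
    by (simp add: p1_pr[of _ ?XA] p2_pr[of _ ?XA])
  thus "related (prd (fst X) (fst A)) (prd (fst Y) (fst A)) (snd (q_prd D Y A)) (times D (fst X) (fst A) (q_rep H) (idt (fst A))) (q_rep T)"
    unfolding tm using related_trans[OF equiv_rel_q_prd[OF Y A] XA _ Tr] by simp
qed

lemma related_times_idt:
  assumes X: "qobj X" and A: "qobj A" and G: "G \<in> ob" and r: "related G (fst X) (snd X) f g"
  shows "related (prd G (fst A)) (prd (fst X) (fst A)) (snd (q_prd D X A)) (times D G (fst A) f (idt (fst A))) (times D G (fst A) g (idt (fst A)))"
proof -
  have ob: "fst X \<in> ob" "fst A \<in> ob" using X A qobj_ob by auto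
  have h: "f \<in> hom G (fst X)" "g \<in> hom G (fst X)" using r unfolding related_def by auto
  have GA: "prd G (fst A) \<in> ob" using G ob by simp
  have t: "times D G (fst A) f (idt (fst A)) = pr (cmp f (p1 G (fst A))) (p2 G (fst A))"
    "times D G (fst A) g (idt (fst A)) = pr (cmp g (p1 G (fst A))) (p2 G (fst A))" unfolding times_def using G ob by auto
  have c: "cmp f (p1 G (fst A)) \<in> hom (prd G (fst A)) (fst X)" "cmp g (p1 G (fst A)) \<in> hom (prd G (fst A)) (fst X)"
    using h G ob by (blast intro: hom_rules)+
  have 1: "related (prd G (fst A)) (fst X) (snd X) (cmp f (p1 G (fst A))) (cmp g (p1 G (fst A)))"
    using related_cmp[OF X G GA r p1_hom[OF G ob(2)]] .
  have 2: "related (prd G (fst A)) (fst A) (snd A) (p2 G (fst A)) (p2 G (fst A))" using related_refl[OF A GA p2_hom[OF G ob(2)]] .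
  show ?thesis unfolding t using related_q_prd_iff[OF X A GA pr_hom[OF c(1) p2_hom] pr_hom[OF c(2) p2_hom]] 1 2 G ob c
    by (simp add: p1_pr[of _ "prd G (fst A)"] p2_pr[of _ "prd G (fst A)"])
qed

lemma qfib_q_prd_eq:
  assumes A: "A \<in> ob" and B: "B \<in> ob" and R: "R \<in> fib (prd A B)"
  shows "qfib (q_prd D (A, eq A) (B, eq B)) R"
proof -
  define AB where "AB = prd A B"
  have ob: "AB \<in> ob" "prd AB AB \<in> ob" using A B unfolding AB_def by auto
  have P: "p1 AB AB \<in> hom (prd AB AB) (prd A B)" "p2 AB AB \<in> hom (prd AB AB) (prd A B)" using ob unfolding AB_def by auto
  have "rx (pr (p1 AB AB) (p2 AB AB)) (snd (q_prd D (A, eq A) (B, eq B))) =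
     mt (prd AB AB) (rx (pr (cmp (p1 A B) (p1 AB AB)) (cmp (p1 A B) (p2 AB AB))) (eq A)) (rx (pr (cmp (p2 A B) (p1 AB AB)) (cmp (p2 A B) (p2 AB AB))) (eq B))"
    using rx_pr_snd_q_prd[of "(A, eq A)" "(B, eq B)" "prd AB AB" "p1 AB AB" "p2 AB AB"] A B P ob by simp
  thus ?thesis using eq_prd_subst[OF ob(2) A B R P] R A B snd_q_prd_fib[of "(A, eq A)" "(B, eq B)"] unfolding AB_def by (intro qfibI) auto
qed

lemma qfib_trm: "\<alpha> \<in> fib trm \<Longrightarrow> qfib (trm, tp (prd trm trm)) \<alpha>"
proof -
  assume al: "\<alpha> \<in> fib trm"
  have e: "p1 trm trm = p2 trm trm" using bang_uniq[of "prd trm trm" "p1 trm trm"] bang_uniq[of "prd trm trm" "p2 trm trm"] by simp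
  have f: "rx (p2 trm trm) \<alpha> \<in> fib (prd trm trm)" using al by (blast intro: hom_rules rx_fib)
  show ?thesis unfolding qfib_def using al e f by auto
qed

lemma is_ex_Q_of_D:
  assumes e: "is_ex D (fst X) (fst Y) f \<phi> e" and q: "qfib Y e" and r: "\<And>\<psi>. qfib Y \<psi> \<Longrightarrow> rx (q_rep F) \<psi> = rx f \<psi>"
  shows "is_ex Q X Y F \<phi> e"
  using e q r qfib_fib unfolding is_ex_def Q_simps by auto

lemma is_all_Q_of_D:
  assumes e: "is_all D (fst X) (fst Y) f \<phi> e" and q: "qfib Y e" and r: "\<And>\<psi>. qfib Y \<psi> \<Longrightarrow> rx (q_rep F) \<psi> = rx f \<psi>"
  shows "is_all Q X Y F \<phi> e"
  using e q r qfib_fib unfolding is_all_def Q_simps by auto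

lemma is_ex_D_of_Q:
  assumes e: "is_ex Q X Y F \<phi> e" and q: "\<And>\<psi>. \<psi> \<in> fib (fst Y) \<Longrightarrow> qfib Y \<psi>" and r: "\<And>\<psi>. qfib Y \<psi> \<Longrightarrow> rx (q_rep F) \<psi> = rx f \<psi>"
  shows "is_ex D (fst X) (fst Y) f \<phi> e"
  using e q r qfib_fib unfolding is_ex_def Q_simps by auto

lemma is_all_D_of_Q:
  assumes e: "is_all Q X Y F \<phi> e" and q: "\<And>\<psi>. \<psi> \<in> fib (fst Y) \<Longrightarrow> qfib Y \<psi>" and r: "\<And>\<psi>. qfib Y \<psi> \<Longrightarrow> rx (q_rep F) \<psi> = rx f \<psi>"
  shows "is_all D (fst X) (fst Y) f \<phi> e"
  using e q r qfib_fib unfolding is_all_def Q_simps by auto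

lemma qfib_is_all:
  assumes X: "qobj X" and A: "A \<in> ob" and ph: "qfib (q_prd D X (A, eq A)) \<phi>"
    and e: "is_all D (prd (fst X) A) (fst X) (p1 (fst X) A) \<phi> e"
  shows "qfib X e"
proof -
  define W where "W = fst X"
  have W: "W \<in> ob" and wf: "snd X \<in> fib (prd W W)" using X qobj_ob qobj_fib unfolding W_def by auto
  have XA: "qobj (q_prd D X (A, eq A))" using equiv_rel_q_prd[OF X, of "(A, eq A)"] equiv_rel_eq[OF A] by simp
  have phf: "\<phi> \<in> fib (prd W A)" using qfib_fib[OF ph] unfolding W_def by simp
  have e': "is_all D (prd W A) W (p1 W A) \<phi> e" using e unfolding W_def .
  have ef: "e \<in> fib W" using is_all_fib[OF e'] .
  define WW where "WW = prd W W"
  have ob: "WW \<in> ob" "prd WW A \<in> ob" "prd W A \<in> ob" using W A unfolding WW_def by auto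
  define P1 where "P1 = p1 W W"
  define P2 where "P2 = p2 W W"
  have P: "P1 \<in> hom WW W" "P2 \<in> hom WW W" unfolding P1_def P2_def WW_def using W by auto
  define q where "q = p1 WW A"
  define n where "n = p2 WW A"
  have qn: "q \<in> hom (prd WW A) WW" "n \<in> hom (prd WW A) A" unfolding q_def n_def using ob A by auto
  define w where "w = cmp P1 q"
  define w' where "w' = cmp P2 q"
  have ww: "w \<in> hom (prd WW A) W" "w' \<in> hom (prd WW A) W" unfolding w_def w'_def using P qn ob W by (blast intro: hom_rules)+
  have bc1: "is_all D (prd WW A) WW (p1 WW A) (rx (times D WW A P2 (idt A)) \<phi>) (rx P2 e)"
    using is_all_reindex[OF e' P(2) W A ob(1) phf] .
  have tm: "times D WW A P2 (idt A) = pr w' n" unfolding times_def w'_def q_def n_def using ob A by simp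
  define \<chi> where "\<chi> = mt WW (rx P1 e) (rx (pr P1 P2) (snd X))"
  have F0: "rx P1 e \<in> fib WW" "rx (pr P1 P2) (snd X) \<in> fib WW" using P ef wf ob W by (blast intro: hom_rules rx_fib)+
  have chf: "\<chi> \<in> fib WW" unfolding \<chi>_def using F0 ob by simp
  have rq: "rx q \<chi> = mt (prd WW A) (rx w e) (rx (pr w w') (snd X))" unfolding \<chi>_def
    using rx_mt[OF qn(1) F0 ob(2) ob(1)] rx_rx[OF qn(1) P(1) ef] rx_rx_pr[OF P qn(1) wf] ob W unfolding w_def w'_def by simp
  have wn: "pr w n \<in> hom (prd WW A) (prd W A)" "pr w' n \<in> hom (prd WW A) (prd W A)" using ww qn ob W A by (blast intro: hom_rules)+
  have c1: "le (prd W A) (rx (p1 W A) e) \<phi>" using e' unfolding is_all_def by auto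
  have "le (prd WW A) (rx (pr w n) (rx (p1 W A) e)) (rx (pr w n) \<phi>)"
    using rx_mono[OF c1 wn(1)] rx_fib[OF p1_hom ef] phf ob W A by auto
  hence c2: "le (prd WW A) (rx w e) (rx (pr w n) \<phi>)" using rx_rx[OF wn(1) p1_hom ef] ob W A ww qn by (simp add: p1_pr[of _ "prd WW A"])
  have "rx (pr (pr w n) (pr w' n)) (snd (q_prd D X (A, eq A))) = mt (prd WW A) (rx (pr w w') (snd X)) (tp (prd WW A))"
    using rx_pr_snd_q_prd[of X "(A, eq A)" "prd WW A" "pr w n" "pr w' n"] W A wf wn ww qn eq_refl[OF ob(2) A qn(2)] ob(2) unfolding W_def
    by (simp add: p1_pr[of _ "prd WW A"] p2_pr[of _ "prd WW A"])
  hence c3: "le (prd WW A) (mt (prd WW A) (rx (pr w n) \<phi>) (mt (prd WW A) (rx (pr w w') (snd X)) (tp (prd WW A)))) (rx (pr w' n) \<phi>)"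
    using qfib_le[OF ph XA ob(2), simplified, OF wn[unfolded W_def]] by simp
  have F: "rx w e \<in> fib (prd WW A)" "rx (pr w w') (snd X) \<in> fib (prd WW A)" "rx (pr w n) \<phi> \<in> fib (prd WW A)" "rx (pr w' n) \<phi> \<in> fib (prd WW A)"
    using ww wn ef wf phf ob W A by (blast intro: hom_rules rx_fib)+
  have "le (prd WW A) (mt (prd WW A) (rx w e) (rx (pr w w') (snd X))) (mt (prd WW A) (rx (pr w n) \<phi>) (mt (prd WW A) (rx (pr w w') (snd X)) (tp (prd WW A))))"
    using c2 F ob by (intro mt_mono le_mt) auto
  hence "le (prd WW A) (rx q \<chi>) (rx (times D WW A P2 (idt A)) \<phi>)" unfolding rq tm using c3 F ob
    by (meson le_trans mt_fib tp_fib)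
  hence "le WW \<chi> (rx P2 e)" using is_all_le_iff[OF bc1 p1_hom _ ob(1) _ chf] ob A W rx_fib[OF pr_hom[OF ww(2) qn(2)] phf] unfolding q_def tm by simp
  thus ?thesis unfolding \<chi>_def P1_def P2_def WW_def using ef W wf unfolding W_def by (intro qfibI) auto
qed

lemma rx_rep_Q_pi1:
  assumes X: "qobj X" and Y: "qobj Y" and \<psi>: "qfib X \<psi>"
  shows "rx (q_rep (d_pi1 Q X Y)) \<psi> = rx (p1 (fst X) (fst Y)) \<psi>"
proof -
  have XY: "prd (fst X) (fst Y) \<in> ob" using X Y qobj_ob by simp
  show ?thesis using related_rx_eq[OF \<psi> X XY related_sym[OF X XY Q_pi1(2)[OF X Y]]] by simp
qed

lemma is_ex_Q_bang_iff:
  assumes X: "qobj X"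
  shows "is_ex Q X (d_trm Q) (bang Q X) \<phi> e \<longleftrightarrow> is_ex D (fst X) trm (bang D (fst X)) \<phi> e"
proof
  assume "is_ex Q X (d_trm Q) (bang Q X) \<phi> e"
  then show "is_ex D (fst X) trm (bang D (fst X)) \<phi> e"
    using is_ex_D_of_Q[of X "d_trm Q" "bang Q X" \<phi> e "bang D (fst X)"] qfib_trm Q_bang(2)[OF X]
    by (simp add: Q_simps)
next
  assume e: "is_ex D (fst X) trm (bang D (fst X)) \<phi> e"
  then show "is_ex Q X (d_trm Q) (bang Q X) \<phi> e"
    using is_ex_Q_of_D[of X "d_trm Q" "bang D (fst X)" \<phi> e "bang Q X"] qfib_trm[OF is_ex_fib[OF e]]
      Q_bang(2)[OF X] by (simp add: Q_simps)
qed

lemma is_all_Q_bang_iff: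
  assumes X: "qobj X"
  shows "is_all Q X (d_trm Q) (bang Q X) \<phi> e \<longleftrightarrow> is_all D (fst X) trm (bang D (fst X)) \<phi> e"
proof
  assume "is_all Q X (d_trm Q) (bang Q X) \<phi> e"
  then show "is_all D (fst X) trm (bang D (fst X)) \<phi> e"
    using is_all_D_of_Q[of X "d_trm Q" "bang Q X" \<phi> e "bang D (fst X)"] qfib_trm Q_bang(2)[OF X]
    by (simp add: Q_simps)
next
  assume e: "is_all D (fst X) trm (bang D (fst X)) \<phi> e"
  then show "is_all Q X (d_trm Q) (bang Q X) \<phi> e"
    using is_all_Q_of_D[of X "d_trm Q" "bang D (fst X)" \<phi> e "bang Q X"] qfib_trm[OF is_all_fib[OF e]]
      Q_bang(2)[OF X] by (simp add: Q_simps)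
qed

lemma is_ex_Q_pi1_eq_iff:
  assumes A: "A \<in> ob" and Y: "qobj Y"
  shows "is_ex Q (q_prd D (A, eq A) Y) (A, eq A) (d_pi1 Q (A, eq A) Y) R e
     \<longleftrightarrow> is_ex D (prd A (fst Y)) A (p1 A (fst Y)) R e"
proof -
  have X: "qobj (A, eq A)" using equiv_rel_eq[OF A] by simp
  have r: "rx (q_rep (d_pi1 Q (A, eq A) Y)) \<psi> = rx (p1 A (fst Y)) \<psi>" if "qfib (A, eq A) \<psi>" for \<psi>
    using rx_rep_Q_pi1[OF X Y that] by simp
  show ?thesis
  proof
    assume "is_ex Q (q_prd D (A, eq A) Y) (A, eq A) (d_pi1 Q (A, eq A) Y) R e"
    then show "is_ex D (prd A (fst Y)) A (p1 A (fst Y)) R e"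
      using is_ex_D_of_Q[of "q_prd D (A, eq A) Y" "(A, eq A)" "d_pi1 Q (A, eq A) Y" R e "p1 A (fst Y)"]
        qfib_eq[OF A] r by simp
  next
    assume e: "is_ex D (prd A (fst Y)) A (p1 A (fst Y)) R e"
    then show "is_ex Q (q_prd D (A, eq A) Y) (A, eq A) (d_pi1 Q (A, eq A) Y) R e"
      using is_ex_Q_of_D[of "q_prd D (A, eq A) Y" "(A, eq A)" "p1 A (fst Y)" R e] qfib_eq[OF A is_ex_fib[OF e]] r
      by simp
  qed
qed

lemma is_all_Q_pi1_of_D:
  assumes X: "qobj X" and A: "A \<in> ob" and \<phi>: "qfib (q_prd D X (A, eq A)) \<phi>"
    and e: "is_all D (prd (fst X) A) (fst X) (p1 (fst X) A) \<phi> e"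
  shows "is_all Q (q_prd D X (A, eq A)) X (d_pi1 Q X (A, eq A)) \<phi> e"
proof (rule is_all_Q_of_D)
  show "is_all D (fst (q_prd D X (A, eq A))) (fst X) (p1 (fst X) A) \<phi> e" using e by simp
  show "qfib X e" using qfib_is_all[OF X A \<phi> e] .
  fix \<psi> assume "qfib X \<psi>"
  then show "rx (q_rep (d_pi1 Q X (A, eq A))) \<psi> = rx (p1 (fst X) A) \<psi>"
    using rx_rep_Q_pi1[OF X _ \<open>qfib X \<psi>\<close>, of "(A, eq A)"] equiv_rel_eq[OF A] by simp
qed

lemma rx_pr_related_cong:
  assumes Y1: "qobj Y1" and Y2: "qobj Y2" and R: "qfib (q_prd D Y1 Y2) R" and G: "G \<in> ob"
    and f: "related G (fst Y1) (snd Y1) f f'" and g: "related G (fst Y2) (snd Y2) g g'"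
  shows "rx (pr f g) R = rx (pr f' g') R"
proof -
  have ob: "fst Y1 \<in> ob" "fst Y2 \<in> ob" using Y1 Y2 qobj_ob by auto
  have h: "f \<in> hom G (fst Y1)" "f' \<in> hom G (fst Y1)" "g \<in> hom G (fst Y2)" "g' \<in> hom G (fst Y2)"
    using f g unfolding related_def by auto
  have "related G (prd (fst Y1) (fst Y2)) (snd (q_prd D Y1 Y2)) (pr f g) (pr f' g')"
    using related_q_prd_iff[OF Y1 Y2 G pr_hom[OF h(1,3)] pr_hom[OF h(2,4)]] f g h G ob by simp
  then show ?thesis using related_rx_eq[OF R _ G] equiv_rel_q_prd[OF Y1 Y2] by simp
qed

lemma rx_Q_pr:
  assumes F: "F \<in> d_hom Q X Y1" and G: "G \<in> d_hom Q X Y2" and R: "qfib (q_prd D Y1 Y2) R"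
  shows "rx (q_rep (d_pr Q F G)) R = rx (pr (q_rep F) (q_rep G)) R"
proof -
  have X: "qobj X" and Y: "qobj Y1" "qobj Y2" using Q_hom_rep(1,2)[OF F] Q_hom_rep(2)[OF G] by auto
  have XY: "qobj (q_prd D Y1 Y2)" using equiv_rel_q_prd[OF Y] by simp
  have "related (fst X) (fst (q_prd D Y1 Y2)) (snd (q_prd D Y1 Y2)) (q_rep (d_pr Q F G)) (pr (q_rep F) (q_rep G))"
    using related_sym[OF _ qobj_ob[OF X] Q_pr(2)[OF F G]] equiv_rel_q_prd[OF Y] by simp
  then show ?thesis using related_rx_eq[OF R XY qobj_ob[OF X]] by simp
qed

lemma rx_Q_pr_pi2:
  assumes W: "qobj W" and A: "A \<in> ob" and B: "qobj B"
    and E: "E \<in> d_hom Q (q_prd D W (A, eq A)) B" and R: "qfib (q_prd D (A, eq A) B) R"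
    and e: "related (prd (fst W) A) (fst B) (snd B) e (q_rep E)"
  shows "d_rx Q (d_pr Q (d_pi2 Q W (A, eq A)) E) R = rx (pr (p2 (fst W) A) e) R"
proof -
  have Ao: "qobj (A, eq A)" using equiv_rel_eq[OF A] by simp
  have WA: "prd (fst W) A \<in> ob" using qobj_ob[OF W] A by simp
  have "d_rx Q (d_pr Q (d_pi2 Q W (A, eq A)) E) R = rx (pr (q_rep (d_pi2 Q W (A, eq A))) (q_rep E)) R"
    using rx_Q_pr[OF Q_pi2(1)[OF W Ao] _ R] E by (simp add: Q_simps)
  also have "\<dots> = rx (pr (p2 (fst W) A) e) R"
    using rx_pr_related_cong[OF Ao B R, of "prd (fst W) A"] related_sym[OF _ WA Q_pi2(2)[OF W Ao, simplified]]
      related_sym[OF B WA e] WA equiv_rel_eq[OF A] by simp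
  finally show ?thesis .
qed

lemma Q_cmp_times:
  assumes H: "H \<in> d_hom Q X Y" and E: "E \<in> d_hom Q (q_prd D Y A) B" and A: "qobj A"
  shows "d_cmp Q E (times Q X A H (d_idt Q A)) = (q_prd D X A, B,
           q_cls D (q_prd D X A) B (cmp (q_rep E) (times D (fst X) (fst A) (q_rep H) (idt (fst A)))))"
proof -
  let ?T = "times Q X A H (d_idt Q A)"
  have X: "qobj X" and Y: "qobj Y" and B: "qobj B" using Q_hom_rep[OF H] Q_hom_rep(2)[OF E] by auto
  have XA: "prd (fst X) (fst A) \<in> ob" using X A qobj_ob by simp
  have "related (prd (fst X) (fst A)) (fst B) (snd B)
          (cmp (q_rep E) (q_rep ?T)) (cmp (q_rep E) (times D (fst X) (fst A) (q_rep H) (idt (fst A))))"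
    using q_pres_related[OF Q_hom_rep(3)[OF E] equiv_rel_q_prd[OF Y A, folded fst_q_prd] B XA]
      related_sym[OF equiv_rel_q_prd[OF Y A] XA Q_times(2)[OF H A]] by simp
  then show ?thesis
    using Q_cmp(1)[OF Q_times(1)[OF H A] E] q_cls_eq[OF equiv_rel_q_prd[OF X A, folded fst_q_prd] B] by simp
qed

lemma related_of_Q_cmp_times_eq:
  assumes H: "H \<in> d_hom Q X Y" and E: "E \<in> d_hom Q (q_prd D Y A) B" and A: "qobj A"
    and g: "q_pres D (q_prd D X A) B g"
    and E_H: "d_cmp Q E (times Q X A H (d_idt Q A)) = (q_prd D X A, B, q_cls D (q_prd D X A) B g)"
  shows "related (prd (fst X) (fst A)) (fst B) (snd B) g
           (cmp (q_rep E) (times D (fst X) (fst A) (q_rep H) (idt (fst A))))"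
proof -
  let ?t = "times D (fst X) (fst A) (q_rep H) (idt (fst A))"
  have X: "qobj X" and Y: "qobj Y" and B: "qobj B" using Q_hom_rep[OF H] Q_hom_rep(2)[OF E] by auto
  have ob: "fst X \<in> ob" "fst Y \<in> ob" "fst A \<in> ob" "fst B \<in> ob" using X Y A B qobj_ob by auto
  have "g \<in> q_cls D (q_prd D X A) B (cmp (q_rep E) ?t)"
    using E_H Q_cmp_times[OF H E A] q_cls_self[OF g] by simp
  moreover have "cmp (q_rep E) ?t \<in> hom (prd (fst X) (fst A)) (fst B)"
    using Q_rep_hom[OF E] Q_rep_hom[OF H] ob by (auto intro!: cmp_hom times_hom)
  ultimately show ?thesis
    using related_sym[OF B] q_cls_related[OF equiv_rel_q_prd[OF X A, folded fst_q_prd] B] ob by auto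
qed

lemma is_all_le_rx_transpose:
  assumes W: "qobj W" and A: "A \<in> ob" and B: "qobj B"
    and E: "E \<in> d_hom Q (q_prd D W (A, eq A)) B" and R: "qfib (q_prd D (A, eq A) B) R"
    and e: "is_all Q (q_prd D W (A, eq A)) W (d_pi1 Q W (A, eq A)) (d_rx Q (d_pr Q (d_pi2 Q W (A, eq A)) E) R) e"
    and V: "V \<in> ob" and h: "h \<in> hom V (fst W)"
    and ev: "related (prd V A) (fst B) (snd B) ev (cmp (q_rep E) (times D V A h (idt A)))"
    and e0: "is_all D (prd V A) V (p1 V A) (rx (pr (p2 V A) ev) R) e0"
  shows "le V e0 (rx h e)"
proof -
  let ?A = "(A, eq A)" and ?t = "times D V A h (idt A)"
  let ?\<phi> = "d_rx Q (d_pr Q (d_pi2 Q W ?A) E) R"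
  have Ao: "qobj ?A" using equiv_rel_eq[OF A] by simp
  have ob: "fst W \<in> ob" "fst B \<in> ob" "prd V A \<in> ob" "prd (fst W) A \<in> ob"
    using W B V A qobj_ob by auto
  have t: "?t \<in> hom (prd V A) (prd (fst W) A)" using h V A ob by (blast intro: times_hom hom_rules)
  have rE: "q_rep E \<in> hom (prd (fst W) A) (fst B)" using Q_rep_hom[OF E] by simp
  have PR: "d_pr Q (d_pi2 Q W ?A) E \<in> d_hom Q (q_prd D W ?A) (q_prd D ?A B)"
    using Q_pr(1)[OF Q_pi2(1)[OF W Ao] E] .
  have \<phi>q: "qfib (q_prd D W ?A) ?\<phi>"
    using qfib_rx[OF Q_hom_rep(3)[OF PR] _ _ R] equiv_rel_q_prd[OF W Ao] equiv_rel_q_prd[OF Ao B]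
    by (simp add: Q_simps)
  have \<phi>: "?\<phi> = rx (pr (p2 (fst W) A) (q_rep E)) R"
    using rx_Q_pr_pi2[OF W A B E R related_refl[OF _ ob(4) rE]] B by simp
  have Rf: "R \<in> fib (prd A (fst B))" using qfib_fib[OF R] by simp
  have \<phi>f: "?\<phi> \<in> fib (prd (fst W) A)" using qfib_fib[OF \<phi>q] by simp
  obtain a where a: "is_all D (prd (fst W) A) (fst W) (p1 (fst W) A) ?\<phi> a"
    using ex_is_all_p1[OF ob(1) A \<phi>f] by blast
  have "d_le Q W a e" using is_all_le[OF is_all_Q_pi1_of_D[OF W A \<phi>q a] e] .
  then have ae: "le (fst W) a e" by (simp add: Q_simps)
  have "cmp (p2 (fst W) A) ?t = p2 V A"
    unfolding times_def using h V A ob by (simp add: p2_pr[of _ "prd V A"] cmp_hom[of _ _ V])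
  then have "rx ?t ?\<phi> = rx (pr (p2 V A) (cmp (q_rep E) ?t)) R"
    unfolding \<phi> using rx_rx_pr[OF p2_hom rE t Rf] ob A by simp
  also have "\<dots> = rx (pr (p2 V A) ev) R"
    using rx_pr_related_cong[OF Ao B R ob(3) _ related_sym[OF B ob(3) ev]] related_refl[OF _ ob(3) p2_hom]
      equiv_rel_eq[OF A] V A by simp
  finally have "is_all D (prd V A) V (p1 V A) (rx (pr (p2 V A) ev) R) (rx h a)"
    using is_all_reindex[OF a h ob(1) A V \<phi>f] by simp
  then have "le V e0 (rx h a)" using is_all_le[OF e0] by simp
  moreover have ef: "e \<in> fib (fst W)" using e qfib_fib unfolding is_all_def Q_simps by auto
  then have "le V (rx h a) (rx h e)" using rx_mono[OF ae h is_all_fib[OF a]] V ob by simp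
  ultimately show ?thesis
    using le_trans[OF _ _ V is_all_fib[OF e0] rx_fib[OF h is_all_fib[OF a] V ob(1)] rx_fib[OF h ef V ob(1)]] by blast
qed

end

section \<open>Weak exponentials in the quotient completion\<close>

locale pointwise_relation = hyperdoctrine D eq for D :: "('o,'m,'p) doctrine" and eq +
  fixes W A B :: 'o and ev :: 'm and \<sigma> :: 'p
  assumes W: "W \<in> d_ob D" and A: "A \<in> d_ob D" and B: "B \<in> d_ob D" and ev: "ev \<in> d_hom D (d_prd D W A) B"
    and sig: "equiv_rel B \<sigma>"
begin

definition ev_at :: "'o \<Rightarrow> 'm \<Rightarrow> 'm" where "ev_at G c = cmp ev (pr (cmp c (p1 G A)) (p2 G A))"

lemma ev_at_hom: "G \<in> ob \<Longrightarrow> c \<in> hom G W \<Longrightarrow> ev_at G c \<in> hom (prd G A) B"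
  unfolding ev_at_def using W A B ev by (blast intro: hom_rules)

lemma ev_at_cmp_pr: "G \<in> ob \<Longrightarrow> G' \<in> ob \<Longrightarrow> c \<in> hom G W \<Longrightarrow> u \<in> hom G' G \<Longrightarrow> v \<in> hom G' A \<Longrightarrow>
  cmp (ev_at G c) (pr u v) = cmp ev (pr (cmp c u) v)"
proof -
  assume a: "G \<in> ob" "G' \<in> ob" "c \<in> hom G W" "u \<in> hom G' G" "v \<in> hom G' A"
  have h: "pr (cmp c (p1 G A)) (p2 G A) \<in> hom (prd G A) (prd W A)" "pr u v \<in> hom G' (prd G A)" "cmp c (p1 G A) \<in> hom (prd G A) W"
    using a W A by (blast intro: hom_rules)+
  have "cmp (ev_at G c) (pr u v) = cmp ev (cmp (pr (cmp c (p1 G A)) (p2 G A)) (pr u v))"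
    unfolding ev_at_def using cmp_assoc[OF h(2) h(1) ev, symmetric] a W A B by simp
  also have "\<dots> = cmp ev (pr (cmp c u) v)"
    using pr_cmp[OF h(3) p2_hom h(2)] a W A cmp_p1_pr_cmp[OF a(4) a(5) a(3)] by (simp add: p2_pr[of _ G'])
  finally show ?thesis .
qed

text \<open>\<open>ext_rel (f, f') = \<forall>a. \<sigma> (ev (f, a), ev (f', a))\<close>: with it, \<open>(W, ext_rel)\<close> and \<open>ev\<close> form a
  weak exponential of \<open>(B, \<sigma>)\<close> by \<open>(A, eq A)\<close> in the quotient completion (\<open>weak_eval_Q\<close>).\<close>

abbreviation "WW \<equiv> prd W W"
definition "ext_body = rx (pr (ev_at WW (p1 W W)) (ev_at WW (p2 W W))) \<sigma>"
definition "ext_rel = (SOME e. is_all D (prd WW A) WW (p1 WW A) ext_body e)"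

lemma sig_fib: "\<sigma> \<in> fib (prd B B)" using sig equiv_rel_fib by auto

lemma ext_body_fib: "ext_body \<in> fib (prd WW A)"
  unfolding ext_body_def using ev_at_hom[of WW "p1 W W"] ev_at_hom[of WW "p2 W W"] W A B sig_fib by (blast intro: hom_rules rx_fib)

lemma ext_rel_is_all: "is_all D (prd WW A) WW (p1 WW A) ext_body ext_rel"
  unfolding ext_rel_def using ex_is_all_p1[OF _ A ext_body_fib] W by (metis someI_ex prd_ob)

lemma ext_rel_fib: "ext_rel \<in> fib WW" using ext_rel_is_all is_all_fib by blast

lemma ext_rel_reindex_is_all:
  assumes G: "G \<in> ob" and a: "a \<in> hom G W" and b: "b \<in> hom G W"
  shows "is_all D (prd G A) G (p1 G A) (rx (pr (ev_at G a) (ev_at G b)) \<sigma>) (rx (pr a b) ext_rel)"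
proof -
  have ab: "pr a b \<in> hom G WW" using a b G W by (blast intro: hom_rules)
  have tm: "times D G A (pr a b) (idt A) \<in> hom (prd G A) (prd WW A)" using ab G W A by (blast intro: times_hom hom_rules)
  have tme: "times D G A (pr a b) (idt A) = pr (cmp (pr a b) (p1 G A)) (p2 G A)" unfolding times_def using G A by simp
  have c1: "cmp (pr a b) (p1 G A) \<in> hom (prd G A) WW" using ab G A W by (blast intro: hom_rules)
  have e1: "cmp (p1 W W) (cmp (pr a b) (p1 G A)) = cmp a (p1 G A)" "cmp (p2 W W) (cmp (pr a b) (p1 G A)) = cmp b (p1 G A)"
    using cmp_assoc[OF p1_hom ab p1_hom] cmp_assoc[OF p1_hom ab p2_hom] G A W a b by (auto simp: p1_pr[of _ G] p2_pr[of _ G])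
  have "rx (times D G A (pr a b) (idt A)) ext_body
      = rx (pr (cmp (ev_at WW (p1 W W)) (times D G A (pr a b) (idt A)))
               (cmp (ev_at WW (p2 W W)) (times D G A (pr a b) (idt A)))) \<sigma>"
    unfolding ext_body_def using rx_rx_pr[OF ev_at_hom[OF _ p1_hom] ev_at_hom[OF _ p2_hom] tm sig_fib] G W A B
    by simp
  also have "\<dots> = rx (pr (ev_at G a) (ev_at G b)) \<sigma>"
    unfolding tme using ev_at_cmp_pr[OF _ _ _ c1 p2_hom] e1 G A W unfolding ev_at_def by simp
  finally show ?thesis using is_all_reindex[OF ext_rel_is_all ab _ A G ext_body_fib] W by simp
qed

lemma ev_at_rel_fib: "G \<in> ob \<Longrightarrow> a \<in> hom G W \<Longrightarrow> b \<in> hom G W \<Longrightarrow> rx (pr (ev_at G a) (ev_at G b)) \<sigma> \<in> fib (prd G A)"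
  using ev_at_hom[of G a] ev_at_hom[of G b] sig_fib A B by (blast intro: hom_rules rx_fib)

lemma le_ext_rel_iff:
  assumes G: "G \<in> ob" and a: "a \<in> hom G W" and b: "b \<in> hom G W" and ch: "\<chi> \<in> fib G"
  shows "le G \<chi> (rx (pr a b) ext_rel) \<longleftrightarrow> le (prd G A) (rx (p1 G A) \<chi>) (rx (pr (ev_at G a) (ev_at G b)) \<sigma>)"
  using is_all_le_iff[OF ext_rel_reindex_is_all[OF G a b] p1_hom _ G _ ch] G A ev_at_rel_fib[OF G a b] by auto

lemma ext_rel_rx_fib: "G \<in> ob \<Longrightarrow> a \<in> hom G W \<Longrightarrow> b \<in> hom G W \<Longrightarrow> rx (pr a b) ext_rel \<in> fib G"
  using ext_rel_fib W by (blast intro: hom_rules rx_fib)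

lemma ext_rel_counit:
  assumes G: "G \<in> ob" and a: "a \<in> hom G W" and b: "b \<in> hom G W"
  shows "le (prd G A) (rx (p1 G A) (rx (pr a b) ext_rel)) (rx (pr (ev_at G a) (ev_at G b)) \<sigma>)"
  using le_ext_rel_iff[OF G a b ext_rel_rx_fib[OF G a b]] G ext_rel_rx_fib[OF G a b] by simp

lemma ext_rel_inst:
  assumes G: "G \<in> ob" and a: "a \<in> hom G W" and b: "b \<in> hom G W" and n: "n \<in> hom G A"
  shows "le G (rx (pr a b) ext_rel) (rx (pr (cmp ev (pr a n)) (cmp ev (pr b n))) \<sigma>)"
proof -
  have j: "pr (idt G) n \<in> hom G (prd G A)" using G A n by (blast intro: hom_rules)
  have F: "rx (pr a b) ext_rel \<in> fib G" using ext_rel_rx_fib[OF G a b] .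
  have "le G (rx (pr (idt G) n) (rx (p1 G A) (rx (pr a b) ext_rel))) (rx (pr (idt G) n) (rx (pr (ev_at G a) (ev_at G b)) \<sigma>))"
    using rx_mono[OF ext_rel_counit[OF G a b] j] F G A ev_at_rel_fib[OF G a b] rx_fib[OF p1_hom F] by auto
  moreover have "rx (pr (idt G) n) (rx (p1 G A) (rx (pr a b) ext_rel)) = rx (pr a b) ext_rel"
    using rx_rx[OF j p1_hom F] G A n F by (simp add: p1_pr[of _ G])
  moreover have "rx (pr (idt G) n) (rx (pr (ev_at G a) (ev_at G b)) \<sigma>) = rx (pr (cmp ev (pr a n)) (cmp ev (pr b n))) \<sigma>"
    using rx_rx_pr[OF ev_at_hom[OF G a] ev_at_hom[OF G b] j sig_fib] ev_at_cmp_pr[OF G G a idt_hom[OF G] n] ev_at_cmp_pr[OF G G b idt_hom[OF G] n] G A B a b W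
    by (simp add: cmp_idr[OF a] cmp_idr[OF b])
  ultimately show ?thesis by simp
qed

lemma equiv_rel_ext_rel: "equiv_rel W ext_rel"
proof -
  have "le G (tp G) (rx (pr a a) ext_rel) \<and> le G (rx (pr a b) ext_rel) (rx (pr b a) ext_rel) \<and>
     le G (mt G (rx (pr a b) ext_rel) (rx (pr b c) ext_rel)) (rx (pr a c) ext_rel)"
    if G: "G \<in> ob" and a: "a \<in> hom G W" and b: "b \<in> hom G W" and c: "c \<in> hom G W" for G a b c
  proof (intro conjI)
    have GN: "prd G A \<in> ob" "p1 G A \<in> hom (prd G A) G" using G A by auto
    have E: "ev_at G a \<in> hom (prd G A) B" "ev_at G b \<in> hom (prd G A) B" "ev_at G c \<in> hom (prd G A) B" using ev_at_hom G a b c by auto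
    have O: "rx (pr a b) ext_rel \<in> fib G" "rx (pr b c) ext_rel \<in> fib G" "rx (pr a a) ext_rel \<in> fib G"
      using ext_rel_rx_fib G a b c by auto
    have S: "rx (pr (ev_at G a) (ev_at G b)) \<sigma> \<in> fib (prd G A)" "rx (pr (ev_at G b) (ev_at G a)) \<sigma> \<in> fib (prd G A)"
      "rx (pr (ev_at G b) (ev_at G c)) \<sigma> \<in> fib (prd G A)" "rx (pr (ev_at G a) (ev_at G c)) \<sigma> \<in> fib (prd G A)"
      using ev_at_rel_fib G a b c by auto
    have P: "rx (p1 G A) (rx (pr a b) ext_rel) \<in> fib (prd G A)" "rx (p1 G A) (rx (pr b c) ext_rel) \<in> fib (prd G A)"
      using rx_fib[OF GN(2) O(1)] rx_fib[OF GN(2) O(2)] G A by auto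
    show "le G (tp G) (rx (pr a a) ext_rel)" using le_ext_rel_iff[OF G a a tp_fib[OF G]] equiv_rel_refl[OF sig GN(1) E(1)] GN G by simp
    show "le G (rx (pr a b) ext_rel) (rx (pr b a) ext_rel)"
      using le_ext_rel_iff[OF G b a O(1)] ext_rel_counit[OF G a b] equiv_rel_sym[OF sig GN(1) E(1) E(2)] le_trans GN S P by blast
    have MM: "le (prd G A) (rx (p1 G A) (mt G (rx (pr a b) ext_rel) (rx (pr b c) ext_rel)))
       (mt (prd G A) (rx (pr (ev_at G a) (ev_at G b)) \<sigma>) (rx (pr (ev_at G b) (ev_at G c)) \<sigma>))"
      using rx_mt[OF GN(2) O(1) O(2)] G A ext_rel_counit[OF G a b] ext_rel_counit[OF G b c] S P by (auto intro: mt_mono)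
    have "le (prd G A) (rx (p1 G A) (mt G (rx (pr a b) ext_rel) (rx (pr b c) ext_rel))) (rx (pr (ev_at G a) (ev_at G c)) \<sigma>)"
      by (rule le_trans[OF MM equiv_rel_trans[OF sig GN(1) E] GN(1) _ mt_fib[OF GN(1) S(1) S(3)] S(4)])
         (use rx_fib[OF GN(2) mt_fib[OF G O(1) O(2)]] G GN in simp)
    thus "le G (mt G (rx (pr a b) ext_rel) (rx (pr b c) ext_rel)) (rx (pr a c) ext_rel)"
      using le_ext_rel_iff[OF G a c mt_fib[OF G O(1) O(2)]] by simp
  qed
  thus ?thesis unfolding equiv_rel_def using W ext_rel_fib by auto
qed

lemma q_pres_ev: "q_pres D (q_prd D (W, ext_rel) (A, eq A)) (B, \<sigma>) ev"
proof -
  define WN where "WN = prd W A"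
  define G where "G = prd WN WN"
  define P1 where "P1 = p1 WN WN"
  define P2 where "P2 = p2 WN WN"
  have ob: "WN \<in> ob" "G \<in> ob" using W A unfolding WN_def G_def by auto
  have P: "P1 \<in> hom G (prd W A)" "P2 \<in> hom G (prd W A)" unfolding P1_def P2_def G_def WN_def using W A by auto
  define w1 where "w1 = cmp (p1 W A) P1"
  define w2 where "w2 = cmp (p1 W A) P2"
  define n1 where "n1 = cmp (p2 W A) P1"
  define n2 where "n2 = cmp (p2 W A) P2"
  have h: "w1 \<in> hom G W" "w2 \<in> hom G W" "n1 \<in> hom G A" "n2 \<in> hom G A"
    unfolding w1_def w2_def n1_def n2_def using P ob W A by (blast intro: hom_rules)+
  have e1: "pr w1 n1 = P1" "pr w2 n2 = P2" unfolding w1_def w2_def n1_def n2_def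
    using pr_uniq[OF P(1)] pr_uniq[OF P(2)] ob W A by auto
  have R: "rx (pr P1 P2) (snd (q_prd D (W, ext_rel) (A, eq A))) = mt G (rx (pr w1 w2) ext_rel) (rx (pr n1 n2) (eq A))"
    using rx_pr_snd_q_prd[of "(W,ext_rel)" "(A, eq A)" G P1 P2] W A ext_rel_fib ob P unfolding w1_def w2_def n1_def n2_def by simp
  have u: "ev_at G w2 \<in> hom (prd G A) B" using ev_at_hom[OF ob(2) h(2)] .
  have e2: "cmp (ev_at G w2) (pr (idt G) n1) = cmp ev (pr w2 n1)" "cmp (ev_at G w2) (pr (idt G) n2) = cmp ev (pr w2 n2)"
    using ev_at_cmp_pr[OF ob(2) ob(2) h(2) idt_hom[OF ob(2)] h(3)] ev_at_cmp_pr[OF ob(2) ob(2) h(2) idt_hom[OF ob(2)] h(4)] cmp_idr[OF h(2)] ob W by auto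
  have 1: "le G (rx (pr w1 w2) ext_rel) (rx (pr (cmp ev P1) (cmp ev (pr w2 n1))) \<sigma>)"
    using ext_rel_inst[OF ob(2) h(1) h(2) h(3)] e1 by simp
  have 2: "le G (rx (pr n1 n2) (eq A)) (rx (pr (cmp ev (pr w2 n1)) (cmp ev P2)) \<sigma>)"
    using eq_le_related_subst[OF sig ob(2) A u h(3) h(4)] e1 e2 by simp
  have c: "cmp ev P1 \<in> hom G B" "cmp ev (pr w2 n1) \<in> hom G B" "cmp ev P2 \<in> hom G B"
    using P h ev ob W A B by (blast intro: hom_rules)+
  have F: "rx (pr w1 w2) ext_rel \<in> fib G" "rx (pr n1 n2) (eq A) \<in> fib G"
    "rx (pr (cmp ev P1) (cmp ev (pr w2 n1))) \<sigma> \<in> fib G" "rx (pr (cmp ev (pr w2 n1)) (cmp ev P2)) \<sigma> \<in> fib G"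
    "rx (pr (cmp ev P1) (cmp ev P2)) \<sigma> \<in> fib G"
    using ext_rel_rx_fib[OF ob(2) h(1,2)] h c ob A B sig_fib by (blast intro: hom_rules rx_fib eq_fib)+
  have "le G (mt G (rx (pr w1 w2) ext_rel) (rx (pr n1 n2) (eq A))) (rx (pr (cmp ev P1) (cmp ev P2)) \<sigma>)"
    using le_trans[OF mt_mono[OF 1 2 ob(2) F(1) F(3) F(2) F(4)] equiv_rel_trans[OF sig ob(2) c] ob(2) _ _ F(5)] F ob by simp
  thus ?thesis using R ev W A B sig_fib ext_rel_fib snd_q_prd_fib[of "(W,ext_rel)" "(A, eq A)"]
    unfolding G_def P1_def P2_def WN_def by (intro q_presI) auto
qed

lemma ev_at_cmp:
  assumes G: "G \<in> ob" and X: "X \<in> ob" and c: "c \<in> hom G X" and h: "h \<in> hom X W"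
  shows "ev_at G (cmp h c) = cmp (cmp ev (times D X A h (idt A))) (pr (cmp c (p1 G A)) (p2 G A))"
proof -
  have t: "times D X A h (idt A) \<in> hom (prd X A) (prd W A)" using h X A W by (blast intro: times_hom hom_rules)
  have cp: "pr (cmp c (p1 G A)) (p2 G A) \<in> hom (prd G A) (prd X A)" using c G X A by (blast intro: hom_rules)
  have "cmp (cmp ev (times D X A h (idt A))) (pr (cmp c (p1 G A)) (p2 G A))
      = cmp ev (pr (cmp h (cmp c (p1 G A))) (p2 G A))"
    using cmp_assoc[OF cp t ev, symmetric] times_pr[OF h idt_hom[OF A] _ p2_hom] c G X A W B
    by (simp add: cmp_hom[of _ _ G])
  also have "\<dots> = ev_at G (cmp h c)"
    unfolding ev_at_def using cmp_assoc[OF p1_hom c h, symmetric] G X A W by simp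
  finally show ?thesis by simp
qed

lemma q_pres_transpose:
  assumes X: "qobj X" and g: "q_pres D (q_prd D X (A, eq A)) (B, \<sigma>) g" and h: "h \<in> hom (fst X) W"
    and ev_h: "cmp ev (times D (fst X) A h (idt A)) = g"
  shows "q_pres D X (W, ext_rel) h"
proof -
  define X0 where "X0 = fst X"
  define G where "G = prd X0 X0"
  define q1 where "q1 = p1 X0 X0"
  define q2 where "q2 = p2 X0 X0"
  define n where "n = p2 G A"
  define x1 where "x1 = cmp q1 (p1 G A)"
  define x2 where "x2 = cmp q2 (p1 G A)"
  have X0: "X0 \<in> ob" and \<rho>: "snd X \<in> fib (prd X0 X0)" using X qobj_ob qobj_fib unfolding X0_def by auto
  have ob: "G \<in> ob" "prd G A \<in> ob" unfolding G_def using X0 A by auto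
  have q: "q1 \<in> hom G X0" "q2 \<in> hom G X0" unfolding q1_def q2_def G_def using X0 by auto
  have hh: "h \<in> hom X0 W" using h unfolding X0_def .
  have ab: "cmp h q1 \<in> hom G W" "cmp h q2 \<in> hom G W" using q hh X0 ob W by (blast intro: hom_rules)+
  have n: "n \<in> hom (prd G A) A" unfolding n_def using ob A by auto
  have x: "x1 \<in> hom (prd G A) X0" "x2 \<in> hom (prd G A) X0"
    unfolding x1_def x2_def using q ob X0 A by (blast intro: hom_rules)+
  have xn: "pr x1 n \<in> hom (prd G A) (prd X0 A)" "pr x2 n \<in> hom (prd G A) (prd X0 A)"
    using x n ob X0 A by (blast intro: hom_rules)+
  have ev_at: "ev_at G (cmp h q1) = cmp g (pr x1 n)" "ev_at G (cmp h q2) = cmp g (pr x2 n)"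
    using ev_at_cmp[OF ob(1) X0 q(1) hh] ev_at_cmp[OF ob(1) X0 q(2) hh] ev_h
    unfolding x1_def x2_def n_def X0_def by simp_all
  define \<chi> where "\<chi> = rx (pr q1 q2) (snd X)"
  have \<chi>: "\<chi> \<in> fib G" unfolding \<chi>_def using q X0 \<rho> ob by (blast intro: hom_rules rx_fib)
  have "rx (p1 G A) \<chi> = rx (pr x1 x2) (snd X)"
    unfolding \<chi>_def x1_def x2_def using rx_rx_pr[OF q p1_hom \<rho>] ob X0 A by simp
  also have "\<dots> = rx (pr (pr x1 n) (pr x2 n)) (snd (q_prd D X (A, eq A)))"
    using rx_pr_snd_q_prd[of X "(A, eq A)" "prd G A" "pr x1 n" "pr x2 n"] X0 A \<rho> ob xn x n
      eq_refl[OF ob(2) A n] rx_fib[OF pr_hom[OF x] \<rho>] unfolding X0_def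
    by (simp add: p1_pr[of _ "prd G A"] p2_pr[of _ "prd G A"])
  also have "le (prd G A) \<dots> (rx (pr (ev_at G (cmp h q1)) (ev_at G (cmp h q2))) \<sigma>)"
    unfolding ev_at using q_pres_le[OF g _ _ _ _ ob(2)] xn X0 A B sig_fib snd_q_prd_fib[of X "(A, eq A)"] \<rho>
    unfolding X0_def by auto
  finally have "le G \<chi> (rx (pr (cmp h q1) (cmp h q2)) ext_rel)"
    using le_ext_rel_iff[OF ob(1) ab \<chi>] by simp
  then show ?thesis unfolding \<chi>_def q1_def q2_def G_def
    using hh X0 \<rho> W ext_rel_fib unfolding X0_def by (intro q_presI) auto
qed

definition "ev_Q = (q_prd D (W, ext_rel) (A, eq A), (B, \<sigma>), q_cls D (q_prd D (W, ext_rel) (A, eq A)) (B, \<sigma>) ev)"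

lemma qobj_W: "qobj (W, ext_rel)" using equiv_rel_ext_rel by simp
lemma qobj_A: "qobj (A, eq A)" using equiv_rel_eq[OF A] by simp
lemma qobj_B: "qobj (B, \<sigma>)" using sig by simp
lemma qobj_W_A: "qobj (q_prd D (W, ext_rel) (A, eq A))" using equiv_rel_q_prd[OF qobj_W qobj_A] by simp

lemma ev_Q_hom: "ev_Q \<in> d_hom Q (q_prd D (W, ext_rel) (A, eq A)) (B, \<sigma>)"
  and ev_Q_related: "related (prd W A) B \<sigma> ev (q_rep ev_Q)"
  using Q_hom_of_q_pres[OF qobj_W_A qobj_B q_pres_ev] unfolding ev_Q_def by auto

lemma weak_eval_Q:
  assumes we: "weak_eval D W A B ev"
  shows "weak_eval Q (W, ext_rel) (A, eq A) (B, \<sigma>) ev_Q"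
  unfolding weak_eval_def Q_simps(6)
proof (intro conjI ballI)
  let ?A = "(A, eq A)"
  show "(W, ext_rel) \<in> d_ob Q" using qobj_W Q_ob_iff by simp
  show "ev_Q \<in> d_hom Q (q_prd D (W, ext_rel) ?A) (B, \<sigma>)" by (rule ev_Q_hom)
  fix X G assume "X \<in> d_ob Q" and G: "G \<in> d_hom Q (q_prd D X ?A) (B, \<sigma>)"
  then have X: "qobj X" using Q_ob_iff by simp
  have XA: "prd (fst X) A \<in> ob" using qobj_ob[OF X] A by simp
  let ?g = "q_rep G"
  have g: "q_pres D (q_prd D X ?A) (B, \<sigma>) ?g" and G_eq: "G = (q_prd D X ?A, (B, \<sigma>), q_cls D (q_prd D X ?A) (B, \<sigma>) ?g)"
    using Q_hom_rep[OF G] by auto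
  obtain h where h: "h \<in> hom (fst X) W" and ev_h: "cmp ev (times D (fst X) A h (idt A)) = ?g"
    using we qobj_ob[OF X] q_pres_hom[OF g] unfolding weak_eval_def by auto
  let ?H = "(X, (W, ext_rel), q_cls D X (W, ext_rel) h)"
  have H: "?H \<in> d_hom Q X (W, ext_rel)"
    and h_rep: "related (fst X) W ext_rel h (q_rep ?H)"
    using Q_hom_of_q_pres[OF X qobj_W q_pres_transpose[OF X g h ev_h]] by auto
  let ?t = "times D (fst X) A (q_rep ?H) (idt A)"
  have t: "?t \<in> hom (prd (fst X) A) (prd W A)"
    using Q_rep_hom[OF H] qobj_ob[OF X] W A by (auto intro: times_hom)
  have "related (prd (fst X) A) B \<sigma> ?g (cmp ev ?t)"
    using q_pres_related[OF q_pres_ev qobj_W_A qobj_B XA, simplified,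
        OF related_times_idt[OF qobj_W qobj_A qobj_ob[OF X], simplified, OF h_rep]] ev_h by simp
  moreover have "related (prd (fst X) A) B \<sigma> (cmp ev ?t) (cmp (q_rep ev_Q) ?t)"
    using related_cmp[OF sig _ XA ev_Q_related t] W A by simp
  ultimately have "q_cls D (q_prd D X ?A) (B, \<sigma>) ?g = q_cls D (q_prd D X ?A) (B, \<sigma>) (cmp (q_rep ev_Q) ?t)"
    using q_cls_eq[OF equiv_rel_q_prd[OF X qobj_A, folded fst_q_prd] qobj_B] related_trans[OF sig XA] by simp
  then have "d_cmp Q ev_Q (times Q X ?A ?H (d_idt Q ?A)) = G"
    using Q_cmp_times[OF H ev_Q_hom qobj_A] G_eq by simp
  then show "\<exists>h\<in>d_hom Q X (W, ext_rel). d_cmp Q ev_Q (times Q X ?A h (d_idt Q ?A)) = G"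
    using H by blast
qed

end

section \<open>The axiom of choice\<close>

context hyperdoctrine begin

lemma AC_on_of_AC_on_Q:
  assumes A: "A \<in> ob" and AC: "AC_on Q (A, eq A)"
  shows "AC_on D A"
  unfolding AC_on_def
proof (intro ballI allI impI)
  fix B W ev R e1 e2 e3 e4
  assume B: "B \<in> ob" and we: "weak_eval D W A B ev" and R: "R \<in> fib (prd A B)"
    and e1: "is_ex D (prd A B) A (p1 A B) R e1" and e2: "is_all D A trm (bang D A) e1 e2"
    and e3: "is_all D (prd W A) W (p1 W A) (rx (pr (p2 W A) ev) R) e3"
    and e4: "is_ex D W trm (bang D W) e3 e4"
  have W: "W \<in> ob" and ev: "ev \<in> hom (prd W A) B" using we unfolding weak_eval_def by auto
  interpret E: pointwise_relation D eq W A B ev "eq B"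
    by unfold_locales (use W A B ev equiv_rel_eq[OF B] in auto)
  let ?A = "(A, eq A)" and ?B = "(B, eq B)" and ?W = "(W, E.ext_rel)"
  have Ao: "qobj ?A" and Bo: "qobj ?B" using equiv_rel_eq A B by auto
  have WAo: "qobj (q_prd D ?W ?A)" and ABo: "qobj (q_prd D ?A ?B)"
    using equiv_rel_q_prd[OF E.qobj_W Ao] equiv_rel_q_prd[OF Ao Bo] by auto
  have Rq: "qfib (q_prd D ?A ?B) R" using qfib_q_prd_eq[OF A B R] .
  have \<phi>: "d_rx Q (d_pr Q (d_pi2 Q ?W ?A) E.ev_Q) R = rx (pr (p2 W A) ev) R"
    using rx_Q_pr_pi2[OF E.qobj_W A Bo E.ev_Q_hom Rq] E.ev_Q_related by simp
  have "qfib (q_prd D ?W ?A) (rx (pr (p2 W A) ev) R)"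
    using qfib_rx[OF q_pres_pr[OF WAo Ao Bo q_pres_p2[OF E.qobj_W Ao] E.q_pres_ev] WAo ABo Rq] by simp
  then have "is_all Q (q_prd D ?W ?A) ?W (d_pi1 Q ?W ?A) (d_rx Q (d_pr Q (d_pi2 Q ?W ?A) E.ev_Q) R) e3"
    unfolding \<phi> using is_all_Q_pi1_of_D[OF E.qobj_W A] e3 by simp
  moreover have "is_ex Q (q_prd D ?A ?B) ?A (d_pi1 Q ?A ?B) R e1"
    using is_ex_Q_pi1_eq_iff[OF A Bo] e1 by simp
  moreover have "is_all Q ?A (d_trm Q) (bang Q ?A) e1 e2" using is_all_Q_bang_iff[OF Ao] e2 by simp
  moreover have "is_ex Q ?W (d_trm Q) (bang Q ?W) e3 e4" using is_ex_Q_bang_iff[OF E.qobj_W] e4 by simp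
  moreover have "?B \<in> d_ob Q" using Bo Q_ob_iff by blast
  moreover have "R \<in> d_fib Q (d_prd Q ?A ?B)" using Rq by (simp add: Q_simps)
  ultimately have "d_le Q (d_trm Q) e2 e4"
    using AC E.weak_eval_Q[OF we] unfolding AC_on_def Q_simps(6) by blast
  then show "le trm e2 e4" by (simp add: Q_simps)
qed

lemma AC_on_Q_of_AC_on:
  assumes A: "A \<in> ob" and AC: "AC_on D A"
  shows "AC_on Q (A, eq A)"
  unfolding AC_on_def Q_simps(6)
proof (intro ballI allI impI)
  let ?A = "(A, eq A)"
  fix B' W' ev' R e1 e2 e3 e4
  assume B'o: "B' \<in> d_ob Q" and we': "weak_eval Q W' ?A B' ev'" and Rq: "R \<in> d_fib Q (q_prd D ?A B')"
    and e1: "is_ex Q (q_prd D ?A B') ?A (d_pi1 Q ?A B') R e1"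
    and e2: "is_all Q ?A (d_trm Q) (bang Q ?A) e1 e2"
    and e3: "is_all Q (q_prd D W' ?A) W' (d_pi1 Q W' ?A) (d_rx Q (d_pr Q (d_pi2 Q W' ?A) ev') R) e3"
    and e4: "is_ex Q W' (d_trm Q) (bang Q W') e3 e4"
  obtain B \<sigma> where B'e: "B' = (B, \<sigma>)" by (cases B')
  have Bo: "qobj B'" using B'o Q_ob_iff by simp
  then have B: "B \<in> ob" and \<sigma>: "equiv_rel B \<sigma>" using qobj_ob unfolding B'e by auto
  have W'o: "qobj W'" and ev': "ev' \<in> d_hom Q (q_prd D W' ?A) B'"
    and transpose: "\<And>X g. qobj X \<Longrightarrow> g \<in> d_hom Q (q_prd D X ?A) B' \<Longrightarrow>
       \<exists>h\<in>d_hom Q X W'. d_cmp Q ev' (times Q X ?A h (d_idt Q ?A)) = g"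
    using we' Q_ob_iff unfolding weak_eval_def Q_simps(6) by auto
  have Ao: "qobj ?A" using equiv_rel_eq[OF A] by simp
  have R: "qfib (q_prd D ?A B') R" using Rq by (simp add: Q_simps)
  have Rf: "R \<in> fib (prd A B)" using qfib_fib[OF R] B'e by simp
  obtain V ev where we: "weak_eval D V A B ev" using wcc A B unfolding weakly_cc_def by blast
  have V: "V \<in> ob" and ev: "ev \<in> hom (prd V A) B" using we unfolding weak_eval_def by auto
  obtain e3' where e3': "is_all D (prd V A) V (p1 V A) (rx (pr (p2 V A) ev) R) e3'"
    using ex_is_all_p1[OF V A rx_fib[OF pr_hom[OF p2_hom ev] Rf]] V A B by auto
  obtain e4' where e4': "is_ex D V trm (bang D V) e3' e4'" using ex_is_ex_bang[OF V is_all_fib[OF e3']] by blast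
  have e1D: "is_ex D (prd A B) A (p1 A B) R e1" using is_ex_Q_pi1_eq_iff[OF A Bo] e1 B'e by simp
  have e2D: "is_all D A trm (bang D A) e1 e2" using is_all_Q_bang_iff[OF Ao] e2 by simp
  have e4D: "is_ex D (fst W') trm (bang D (fst W')) e3 e4" using is_ex_Q_bang_iff[OF W'o] e4 by simp
  have e24': "le trm e2 e4'" using AC B we Rf e1D e2D e3' e4' unfolding AC_on_def by blast
  interpret E: pointwise_relation D eq V A B ev \<sigma>
    by unfold_locales (use V A B ev \<sigma> in auto)
  obtain H where H: "H \<in> d_hom Q (V, E.ext_rel) W'"
    and HE: "d_cmp Q ev' (times Q (V, E.ext_rel) ?A H (d_idt Q ?A)) = E.ev_Q"
    using transpose[OF E.qobj_W] E.ev_Q_hom B'e by blast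
  have h: "q_rep H \<in> hom V (fst W')" using Q_rep_hom[OF H] by simp
  have "related (prd V A) B \<sigma> ev (cmp (q_rep ev') (times D V A (q_rep H) (idt A)))"
    using related_of_Q_cmp_times_eq[OF H ev' Ao E.q_pres_ev[folded B'e]] HE B'e unfolding E.ev_Q_def by simp
  then have "le V e3' (rx (q_rep H) e3)"
    using is_all_le_rx_transpose[OF W'o A Bo ev' R e3 V h _ e3'] B'e by simp
  moreover have "e3 \<in> fib (fst W')" using e3 qfib_fib unfolding is_all_def Q_simps by auto
  ultimately have "le trm e4' e4"
    using is_ex_bang_le[OF h V qobj_ob[OF W'o] is_all_fib[OF e3'] _ _ e4' e4D] by simp
  then show "d_le Q (d_trm Q) e2 e4"
    using le_trans[OF e24' _ trm_ob is_all_fib[OF e2D] is_ex_fib[OF e4'] is_ex_fib[OF e4D]]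
    by (simp add: Q_simps)
qed

theorem AC_on_iff_AC_on_Q:
  assumes "A \<in> ob"
  shows "AC_on D A \<longleftrightarrow> AC_on Q (A, eq A)"
  using AC_on_of_AC_on_Q AC_on_Q_of_AC_on assms by blast

end

theorem corollary3p13:
  fixes D :: "('o, 'm, 'p) doctrine"
    and eq :: "'o \<Rightarrow> 'p" and N :: 'o and z s :: 'm
  assumes "arithmetic D eq N z s"
    and "comprehensive_diagonals D eq"
  shows "AC_on D N \<longleftrightarrow> AC_on (quotient_completion D) (N, eq N)"
proof -
  have "hyperdoctrine D eq" and "N \<in> d_ob D"
    using assms(1) unfolding arithmetic_def pnno_def hyperdoctrine_def by auto
  then show ?thesis by (rule hyperdoctrine.AC_on_iff_AC_on_Q)
qed

end
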